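(* Let $b,f\in H^2(I)$ with $0<\underline b\le b\le\overline b$ on $\overline I$. Then for every $\varepsilon\in(0,1]$ the remainder $u^R_\varepsilon$ belongs to $H^2(I)\cap H^1_0(I)$ with $\|u^R_\varepsilon\|_{L^2(I)}\le\|u^R_\varepsilon\|_{1,\varepsilon,I}\le C\varepsilon^2$ and $\|(u^R_\varepsilon)''\|_{L^2(I)}\le C$, with $C$ independent of $\varepsilon$. Consequently, if $\mathcal I_\Delta u^R_\varepsilon$ denotes the continuous piecewise linear nodal interpolant of $u^R_\varepsilon$ on a quasi-uniform partition $\Delta$ of $I$ into $N$ intervals, then $\|u^R_\varepsilon-\mathcal I_\Delta u^R_\varepsilon\|_{1,\varepsilon,I}\le C N^{-1}$ for all $N\ge1$, $\varepsilon\in(0,1]$, and $\|u^R_\varepsilon-\mathcal I_\Delta u^R_\varepsilon\|_{1,\varepsilon,I}\le CN^{-2}$ whenever $1\le N\le \varepsilon^{-1}$, with $C$ independent of $\varepsilon$ and $N$ (depending on the quasi-uniformity constant).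
   Context: $I=(-1,1)$, $\varepsilon\in(0,1]$, $u_\varepsilon\in H^1_0(I)$ the weak solution of $-\varepsilon^2u''+bu=f$, $u(\pm1)=0$. $u_0=f/b$; $u^{BL}_{\varepsilon,-}$ solves $-\varepsilon^2u''+bu=0$, $u(-1)=-u_0(-1)$, $u(1)=0$; $u^{BL}_{\varepsilon,+}$ solves $-\varepsilon^2u''+bu=0$, $u(-1)=0$, $u(1)=-u_0(1)$; $u^R_\varepsilon=u_\varepsilon-u_0-u^{BL}_{\varepsilon,-}-u^{BL}_{\varepsilon,+}$. Energy norm $\|w\|_{1,\varepsilon,I}^2=\int_I(\varepsilon^2(w')^2+bw^2)dx$. *)

theory Defs
  imports "HOL-Analysis.Analysis"
begin

abbreviation Iopen :: "real set" where "Iopen \<equiv> {-1<..<1}"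

definition test_fun :: "(real \<Rightarrow> real) \<Rightarrow> bool" where
  "test_fun \<phi> \<longleftrightarrow> (\<forall>k x. ((deriv ^^ k) \<phi>) differentiable (at x)) \<and>
     (\<exists>a c. -1 < a \<and> c < 1 \<and> (\<forall>x. x \<notin> {a..c} \<longrightarrow> \<phi> x = 0))"

definition L2I :: "(real \<Rightarrow> real) \<Rightarrow> bool" where
  "L2I u \<longleftrightarrow> set_borel_measurable lborel Iopen u \<and>
     set_integrable lborel Iopen (\<lambda>x. (u x)^2)"

definition L2norm :: "(real \<Rightarrow> real) \<Rightarrow> real" where
  "L2norm u = sqrt (LINT x:Iopen|lborel. (u x)^2)"

definition L2_weak_deriv :: "(real \<Rightarrow> real) \<Rightarrow> (real \<Rightarrow> real) \<Rightarrow> bool" where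
  "L2_weak_deriv u g \<longleftrightarrow> L2I u \<and> L2I g \<and>
     (\<forall>\<phi>. test_fun \<phi> \<longrightarrow>
        (LINT x:Iopen|lborel. u x * deriv \<phi> x) = - (LINT x:Iopen|lborel. g x * \<phi> x))"

definition H1 :: "(real \<Rightarrow> real) \<Rightarrow> bool" where
  "H1 u \<longleftrightarrow> (\<exists>g. L2_weak_deriv u g)"

definition H2 :: "(real \<Rightarrow> real) \<Rightarrow> bool" where
  "H2 u \<longleftrightarrow> (\<exists>g. L2_weak_deriv u g \<and> H1 g)"

definition H10 :: "(real \<Rightarrow> real) \<Rightarrow> bool" where
  "H10 u \<longleftrightarrow> H1 u \<and> (\<exists>v. continuous_on {-1..1} v \<and>
      (AE x in lborel. x \<in> Iopen \<longrightarrow> u x = v x) \<and> v (-1) = 0 \<and> v 1 = 0)"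

text \<open>Energy norm, given a weak derivative g of w.\<close>
definition enorm :: "real \<Rightarrow> (real \<Rightarrow> real) \<Rightarrow> (real \<Rightarrow> real) \<Rightarrow> (real \<Rightarrow> real) \<Rightarrow> real" where
  "enorm \<epsilon> b w g = sqrt (LINT x:Iopen|lborel. \<epsilon>^2 * (g x)^2 + b x * (w x)^2)"

text \<open>Weak form of  -eps^2 u'' + b u = F  tested with H^1_0(I).\<close>
definition weak_eq :: "real \<Rightarrow> (real \<Rightarrow> real) \<Rightarrow> (real \<Rightarrow> real) \<Rightarrow> (real \<Rightarrow> real) \<Rightarrow> bool" where
  "weak_eq \<epsilon> b F u \<longleftrightarrow> (\<forall>u' \<phi> \<phi>'. L2_weak_deriv u u' \<and> H10 \<phi> \<and> L2_weak_deriv \<phi> \<phi>' \<longrightarrow>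
      (LINT x:Iopen|lborel. \<epsilon>^2 * u' x * \<phi>' x + b x * u x * \<phi> x) = (LINT x:Iopen|lborel. F x * \<phi> x))"

text \<open>u, uBLm, uBLp are (continuous representatives of) the weak solution and the two
  boundary layer functions, with u0 = f / b.\<close>
definition problem_data ::
  "real \<Rightarrow> (real \<Rightarrow> real) \<Rightarrow> (real \<Rightarrow> real) \<Rightarrow> (real \<Rightarrow> real) \<Rightarrow> (real \<Rightarrow> real) \<Rightarrow> (real \<Rightarrow> real) \<Rightarrow> bool" where
  "problem_data \<epsilon> b f u uBLm uBLp \<longleftrightarrow>
     continuous_on {-1..1} u \<and> H10 u \<and> u (-1) = 0 \<and> u 1 = 0 \<and> weak_eq \<epsilon> b f u \<and>
     continuous_on {-1..1} uBLm \<and> H1 uBLm \<and> uBLm (-1) = - (f (-1) / b (-1)) \<and> uBLm 1 = 0 \<and>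
       weak_eq \<epsilon> b (\<lambda>_. 0) uBLm \<and>
     continuous_on {-1..1} uBLp \<and> H1 uBLp \<and> uBLp (-1) = 0 \<and> uBLp 1 = - (f 1 / b 1) \<and>
       weak_eq \<epsilon> b (\<lambda>_. 0) uBLp"

definition remainder ::
  "(real \<Rightarrow> real) \<Rightarrow> (real \<Rightarrow> real) \<Rightarrow> (real \<Rightarrow> real) \<Rightarrow> (real \<Rightarrow> real) \<Rightarrow> (real \<Rightarrow> real) \<Rightarrow> real \<Rightarrow> real" where
  "remainder b f u uBLm uBLp x = u x - f x / b x - uBLm x - uBLp x"

definition quasi_uniform :: "real \<Rightarrow> nat \<Rightarrow> (nat \<Rightarrow> real) \<Rightarrow> bool" where
  "quasi_uniform \<kappa> N xs \<longleftrightarrow> N \<ge> 1 \<and> xs 0 = -1 \<and> xs N = 1 \<and>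
     (\<forall>i<N. xs i < xs (Suc i)) \<and>
     (\<forall>i<N. \<forall>j<N. xs (Suc i) - xs i \<le> \<kappa> * (xs (Suc j) - xs j))"

definition pl_interp :: "nat \<Rightarrow> (nat \<Rightarrow> real) \<Rightarrow> (real \<Rightarrow> real) \<Rightarrow> real \<Rightarrow> real" where
  "pl_interp N xs v x =
     (if \<exists>i<N. xs i \<le> x \<and> x \<le> xs (Suc i) then
        (let i = (SOME i. i < N \<and> xs i \<le> x \<and> x \<le> xs (Suc i)) in
          v (xs i) + (v (xs (Suc i)) - v (xs i)) * (x - xs i) / (xs (Suc i) - xs i))
      else 0)"

end

theory Submission
  imports Defs "HOL-Computational_Algebra.Polynomial"
begin

text \<open>The remainder \<open>u\<^sup>R\<close> vanishes at \<open>\<plusminus>1\<close> and is a weak solution of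
  \<open>-\<epsilon>\<^sup>2 (u\<^sup>R)'' + b u\<^sup>R = \<epsilon>\<^sup>2 u\<^sub>0''\<close>. Testing with \<open>u\<^sup>R\<close> itself gives
  \<open>\<parallel>u\<^sup>R\<parallel>\<^sup>2\<^sub>1\<^sub>,\<^sub>\<epsilon> = \<epsilon>\<^sup>2 \<integral> u\<^sub>0'' u\<^sup>R \<le> \<epsilon>\<^sup>2 \<parallel>u\<^sub>0''\<parallel> \<parallel>u\<^sup>R\<parallel>\<^sub>1\<^sub>,\<^sub>\<epsilon> / \<surd>lb\<close>, hence
  \<open>\<parallel>u\<^sup>R\<parallel>\<^sub>1\<^sub>,\<^sub>\<epsilon> = O(\<epsilon>\<^sup>2)\<close>, and the equation itself then bounds
  \<open>(u\<^sup>R)'' = b u\<^sup>R / \<epsilon>\<^sup>2 - u\<^sub>0''\<close> in \<open>L\<^sup>2\<close> uniformly in \<open>\<epsilon>\<close>.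
  On an element of length \<open>h\<close> the interpolation error \<open>w\<close> satisfies
  \<open>\<parallel>w'\<parallel> \<le> h \<parallel>(u\<^sup>R)''\<parallel>\<close> and \<open>\<parallel>w\<parallel> \<le> h\<^sup>2 \<parallel>(u\<^sup>R)''\<parallel>\<close>, so that
  \<open>\<parallel>w\<parallel>\<^sub>1\<^sub>,\<^sub>\<epsilon> \<lesssim> \<epsilon> h + h\<^sup>2\<close>, which is \<open>O(1/N)\<close>, and \<open>O(1/N\<^sup>2)\<close> once \<open>\<epsilon> \<le> 1/N\<close>.
  Underneath lies the fact that a function in \<open>L\<^sup>2(I)\<close> with weak derivative in \<open>L\<^sup>2(I)\<close> is
  almost everywhere a constant plus the primitive of that derivative, which follows from the
  du Bois-Reymond lemma.\<close>

section \<open>Smooth functions\<close>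

definition differentiable_upto :: "nat \<Rightarrow> (real \<Rightarrow> real) \<Rightarrow> bool" where
  "differentiable_upto k f \<longleftrightarrow> (\<forall>j\<le>k. \<forall>x. (deriv ^^ j) f differentiable (at x))"

definition smooth :: "(real \<Rightarrow> real) \<Rightarrow> bool" where
  "smooth f \<longleftrightarrow> (\<forall>k x. (deriv ^^ k) f differentiable (at x))"

lemma smooth_iff_differentiable_upto: "smooth f \<longleftrightarrow> (\<forall>k. differentiable_upto k f)"
  unfolding smooth_def differentiable_upto_def by auto

lemma differentiable_upto_0: "differentiable_upto 0 f \<longleftrightarrow> (\<forall>x. f differentiable (at x))"
  by (simp add: differentiable_upto_def)

lemma differentiable_upto_Suc:
  "differentiable_upto (Suc k) f \<longleftrightarrow> (\<forall>x. f differentiable (at x)) \<and> differentiable_upto k (deriv f)"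
proof -
  have "(\<forall>j\<le>Suc k. P j) \<longleftrightarrow> P 0 \<and> (\<forall>i\<le>k. P (Suc i))" for P :: "nat \<Rightarrow> bool"
    by (metis Suc_le_mono le0 not0_implies_Suc)
  moreover have "(deriv ^^ Suc i) f = (deriv ^^ i) (deriv f)" for i
    by (simp add: funpow_Suc_right del: funpow.simps)
  ultimately show ?thesis
    unfolding differentiable_upto_def by simp
qed

lemma differentiable_upto_SucD: "differentiable_upto (Suc k) f \<Longrightarrow> differentiable_upto k f"
  unfolding differentiable_upto_def by auto

lemma differentiable_upto_imp_DERIV:
  "differentiable_upto k f \<Longrightarrow> (f has_real_derivative deriv f x) (at x)"
  by (cases k) (auto simp: differentiable_upto_Suc differentiable_upto_0 DERIV_deriv_iff_real_differentiable)

lemma deriv_fun_add: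
  fixes f g :: "real \<Rightarrow> real"
  assumes "\<And>x. f differentiable (at x)" "\<And>x. g differentiable (at x)"
  shows "deriv (\<lambda>x. f x + g x) = (\<lambda>x. deriv f x + deriv g x)"
  using assms by (intro ext DERIV_imp_deriv DERIV_add) (auto simp: DERIV_deriv_iff_real_differentiable)

lemma deriv_fun_mult:
  fixes f g :: "real \<Rightarrow> real"
  assumes "\<And>x. f differentiable (at x)" "\<And>x. g differentiable (at x)"
  shows "deriv (\<lambda>x. f x * g x) = (\<lambda>x. deriv f x * g x + f x * deriv g x)"
proof
  fix x
  have "((\<lambda>x. f x * g x) has_real_derivative deriv f x * g x + deriv g x * f x) (at x)"
    using assms DERIV_deriv_iff_real_differentiable by (intro DERIV_mult) auto
  then show "deriv (\<lambda>x. f x * g x) x = deriv f x * g x + f x * deriv g x"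
    by (simp add: DERIV_imp_deriv mult.commute)
qed

lemma DERIV_comp_affine:
  assumes "(f has_real_derivative f') (at (a * x + b))"
  shows "((\<lambda>x. f (a * x + b)) has_real_derivative a * f') (at x)"
proof -
  have "((\<lambda>x. a * x + b) has_real_derivative a) (at x)"
    by (auto intro!: derivative_eq_intros)
  from DERIV_chain2[OF assms this] show ?thesis by (simp add: mult.commute)
qed

lemma deriv_fun_comp_affine:
  fixes f :: "real \<Rightarrow> real"
  assumes "\<And>x. f differentiable (at x)"
  shows "deriv (\<lambda>x. f (a * x + b)) = (\<lambda>x. a * deriv f (a * x + b))"
  using assms by (intro ext DERIV_imp_deriv DERIV_comp_affine) (simp add: DERIV_deriv_iff_real_differentiable)

lemma deriv_fun_inverse:
  fixes g :: "real \<Rightarrow> real"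
  assumes "\<And>x. g differentiable (at x)" "\<And>x. g x \<noteq> 0"
  shows "deriv (\<lambda>x. 1 / g x) = (\<lambda>x. (- deriv g x) * (1 / g x) * (1 / g x))"
proof
  fix x
  have "(g has_real_derivative deriv g x) (at x)"
    using assms DERIV_deriv_iff_real_differentiable by blast
  from DERIV_inverse_fun[OF this assms(2)]
  show "deriv (\<lambda>x. 1 / g x) x = (- deriv g x) * (1 / g x) * (1 / g x)"
    by (auto dest!: DERIV_imp_deriv simp: divide_inverse power2_eq_square)
qed

lemma differentiable_upto_const: "differentiable_upto k (\<lambda>x. c)"
proof (induction k arbitrary: c)
  case (Suc k)
  have "deriv (\<lambda>x. c) = (\<lambda>x. 0)" by (rule ext) simp
  then show ?case using Suc by (simp add: differentiable_upto_Suc)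
qed (simp add: differentiable_upto_0)

lemma differentiable_upto_add:
  "differentiable_upto k f \<Longrightarrow> differentiable_upto k g \<Longrightarrow> differentiable_upto k (\<lambda>x. f x + g x)"
proof (induction k arbitrary: f g)
  case (Suc k)
  then have df: "\<And>x. f differentiable (at x)" and dg: "\<And>x. g differentiable (at x)"
    by (auto simp: differentiable_upto_Suc)
  with Suc show ?case
    unfolding differentiable_upto_Suc deriv_fun_add[OF df dg] by auto
qed (simp add: differentiable_upto_0)

lemma differentiable_upto_mult:
  "differentiable_upto k f \<Longrightarrow> differentiable_upto k g \<Longrightarrow> differentiable_upto k (\<lambda>x. f x * g x)"
proof (induction k arbitrary: f g)
  case (Suc k)
  then have df: "\<And>x. f differentiable (at x)" and dg: "\<And>x. g differentiable (at x)"
    by (auto simp: differentiable_upto_Suc)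
  have "differentiable_upto k (\<lambda>x. deriv f x * g x + f x * deriv g x)"
    using Suc.prems differentiable_upto_SucD[of k f] differentiable_upto_SucD[of k g]
    by (intro differentiable_upto_add Suc.IH) (auto simp: differentiable_upto_Suc)
  with df dg show ?case
    unfolding differentiable_upto_Suc deriv_fun_mult[OF df dg] by auto
qed (simp add: differentiable_upto_0)

lemma differentiable_comp_affine:
  fixes f :: "real \<Rightarrow> real"
  assumes "\<And>x. f differentiable (at x)"
  shows "(\<lambda>x. f (a * x + b)) differentiable (at x)"
proof -
  have "(f has_real_derivative deriv f (a * x + b)) (at (a * x + b))"
    using assms DERIV_deriv_iff_real_differentiable by blast
  then show ?thesis
    unfolding real_differentiable_def by (blast intro: DERIV_comp_affine)
qed

lemma differentiable_upto_comp_affine: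
  "differentiable_upto k f \<Longrightarrow> differentiable_upto k (\<lambda>x. f (a * x + b))"
proof (induction k arbitrary: f)
  case 0
  then show ?case by (simp add: differentiable_upto_0 differentiable_comp_affine)
next
  case (Suc k)
  then have df: "\<And>x. f differentiable (at x)" by (auto simp: differentiable_upto_Suc)
  have "differentiable_upto k (\<lambda>x. a * deriv f (a * x + b))"
    using Suc by (intro differentiable_upto_mult differentiable_upto_const) (auto simp: differentiable_upto_Suc)
  then show ?case
    unfolding differentiable_upto_Suc deriv_fun_comp_affine[OF df]
    by (simp add: differentiable_comp_affine[OF df])
qed

lemma differentiable_upto_inverse:
  "differentiable_upto k g \<Longrightarrow> (\<And>x. g x \<noteq> 0) \<Longrightarrow> differentiable_upto k (\<lambda>x. 1 / g x)"
proof (induction k arbitrary: g)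
  case 0
  then show ?case by (auto simp: differentiable_upto_0 intro!: derivative_intros)
next
  case (Suc k)
  then have dg: "\<And>x. g differentiable (at x)" by (auto simp: differentiable_upto_Suc)
  have "\<And>x. (\<lambda>x. 1 / g x) differentiable (at x)"
    using dg Suc.prems by (auto intro!: derivative_intros)
  moreover have inv: "differentiable_upto k (\<lambda>x. 1 / g x)"
    using Suc.IH[OF differentiable_upto_SucD[OF Suc.prems(1)]] Suc.prems(2) by blast
  moreover have "differentiable_upto k (\<lambda>x. (- 1) * deriv g x)"
    using Suc.prems(1) by (intro differentiable_upto_mult differentiable_upto_const)
      (simp add: differentiable_upto_Suc)
  then have "differentiable_upto k (\<lambda>x. (- deriv g x) * (1 / g x) * (1 / g x))"
    using inv by (intro differentiable_upto_mult) auto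
  ultimately show ?case
    unfolding differentiable_upto_Suc deriv_fun_inverse[OF dg Suc.prems(2)] by auto
qed

lemma smooth_const: "smooth (\<lambda>x. c)"
  by (simp add: smooth_iff_differentiable_upto differentiable_upto_const)

lemma smooth_add: "smooth f \<Longrightarrow> smooth g \<Longrightarrow> smooth (\<lambda>x. f x + g x)"
  by (simp add: smooth_iff_differentiable_upto differentiable_upto_add)

lemma smooth_mult: "smooth f \<Longrightarrow> smooth g \<Longrightarrow> smooth (\<lambda>x. f x * g x)"
  by (simp add: smooth_iff_differentiable_upto differentiable_upto_mult)

lemma smooth_cmult: "smooth f \<Longrightarrow> smooth (\<lambda>x. c * f x)"
  using smooth_mult[OF smooth_const] by blast

lemma smooth_diff: "smooth f \<Longrightarrow> smooth g \<Longrightarrow> smooth (\<lambda>x. f x - g x)"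
  using smooth_add[OF _ smooth_cmult[of g "-1"], of f] by simp

lemma smooth_comp_affine: "smooth f \<Longrightarrow> smooth (\<lambda>x. f (a * x + b))"
  by (simp add: smooth_iff_differentiable_upto differentiable_upto_comp_affine)

lemma smooth_inverse: "smooth g \<Longrightarrow> (\<And>x. g x \<noteq> 0) \<Longrightarrow> smooth (\<lambda>x. 1 / g x)"
  by (simp add: smooth_iff_differentiable_upto differentiable_upto_inverse)

lemma smooth_deriv: "smooth f \<Longrightarrow> smooth (deriv f)"
  unfolding smooth_iff_differentiable_upto by (metis differentiable_upto_Suc)

lemma smooth_imp_DERIV: "smooth f \<Longrightarrow> (f has_real_derivative deriv f x) (at x)"
  using differentiable_upto_imp_DERIV smooth_iff_differentiable_upto by blast

lemma smooth_imp_continuous_on: "smooth f \<Longrightarrow> continuous_on S f"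
  using smooth_imp_DERIV DERIV_isCont continuous_at_imp_continuous_on by blast

lemma smooth_if_DERIV_smooth:
  assumes "\<And>x. (f has_real_derivative f' x) (at x)" "smooth f'"
  shows "smooth f"
proof -
  have "deriv f = f'" using assms(1) DERIV_imp_deriv by blast
  then have "differentiable_upto (Suc k) f" for k
    using assms by (auto simp: differentiable_upto_Suc smooth_iff_differentiable_upto real_differentiable_def)
  then show ?thesis
    using differentiable_upto_SucD smooth_iff_differentiable_upto by blast
qed

section \<open>Smooth cut-off functions\<close>

text \<open>The functions \<open>x \<mapsto> p(1/x) e\<^sup>-\<^sup>1\<^sup>/\<^sup>x\<close> for \<open>x > 0\<close>, extended by zero, form a class closed under
  differentiation; this gives smoothness of \<open>e\<^sup>-\<^sup>1\<^sup>/\<^sup>x\<close> at the origin.\<close>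

definition flat_exp :: "real poly \<Rightarrow> real \<Rightarrow> real" where
  "flat_exp p x = (if 0 < x then poly p (1 / x) * exp (- (1 / x)) else 0)"

definition flat_exp_deriv_poly :: "real poly \<Rightarrow> real poly" where
  "flat_exp_deriv_poly p = [:0, 0, 1:] * (p - pderiv p)"

lemma poly_over_exp_tendsto_0: "((\<lambda>t::real. poly p t / exp t) \<longlongrightarrow> 0) at_top"
proof -
  have "((\<lambda>t::real. \<Sum>i\<le>degree p. coeff p i * (t ^ i / exp t)) \<longlongrightarrow> (\<Sum>i\<le>degree p. coeff p i * 0)) at_top"
    by (intro tendsto_sum tendsto_mult tendsto_const) (rule tendsto_power_div_exp_0)
  then show ?thesis
    by (simp add: poly_altdef sum_divide_distrib)
qed

lemma flat_exp_has_derivative_0: "(flat_exp p has_real_derivative 0) (at 0)"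
proof -
  have "((\<lambda>t. (flat_exp p (inverse t) - flat_exp p 0) / (inverse t - 0)) \<longlongrightarrow> 0) at_top"
  proof (rule Lim_transform_eventually[OF poly_over_exp_tendsto_0[of "pCons 0 p"]])
    show "\<forall>\<^sub>F x in at_top. poly (pCons 0 p) x / exp x = (flat_exp p (inverse x) - flat_exp p 0) / (inverse x - 0)"
      using eventually_gt_at_top[of 0]
      by eventually_elim (simp add: flat_exp_def exp_minus field_simps)
  qed
  then have right: "((\<lambda>y. (flat_exp p y - flat_exp p 0) / (y - 0)) \<longlongrightarrow> 0) (at_right 0)"
    using filterlim_at_right_to_top by blast
  have left: "((\<lambda>y. (flat_exp p y - flat_exp p 0) / (y - 0)) \<longlongrightarrow> 0) (at_left 0)"
    by (rule tendsto_eventually)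
      (simp add: flat_exp_def eventually_at_filter eventually_at_left_real eventually_mono)
  show ?thesis
    unfolding has_field_derivative_iff using filterlim_split_at[OF left right] .
qed

lemma flat_exp_has_real_derivative:
  "(flat_exp p has_real_derivative flat_exp (flat_exp_deriv_poly p) x) (at x)"
proof (cases x "0 :: real" rule: linorder_cases)
  case equal
  then show ?thesis using flat_exp_has_derivative_0 by (simp add: flat_exp_def)
next
  case greater
  have inv: "((\<lambda>y. 1 / y) has_real_derivative (- 1 / x\<^sup>2)) (at x)"
    using greater by (auto intro!: derivative_eq_intros simp: power2_eq_square field_simps)
  have exp_inv: "((\<lambda>y. exp (- (1 / y))) has_real_derivative exp (- (1 / x)) * (1 / x\<^sup>2)) (at x)"
    using greater by (auto intro!: derivative_eq_intros simp: power2_eq_square field_simps)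
  have "((\<lambda>y. poly p (1 / y) * exp (- (1 / y))) has_real_derivative
      poly (pderiv p) (1 / x) * (- 1 / x\<^sup>2) * exp (- (1 / x)) + poly p (1 / x) * (exp (- (1 / x)) * (1 / x\<^sup>2))) (at x)"
    using DERIV_mult'[OF DERIV_chain2[OF poly_DERIV inv] exp_inv] by (simp add: add.commute)
  moreover have "poly (pderiv p) (1 / x) * (- 1 / x\<^sup>2) * exp (- (1 / x))
      + poly p (1 / x) * (exp (- (1 / x)) * (1 / x\<^sup>2)) = flat_exp (flat_exp_deriv_poly p) x"
    using greater by (simp add: flat_exp_def flat_exp_deriv_poly_def poly_mult power2_eq_square field_simps)
  ultimately have "((\<lambda>y. poly p (1 / y) * exp (- (1 / y))) has_real_derivative
      flat_exp (flat_exp_deriv_poly p) x) (at x)"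
    by simp
  then show ?thesis
    by (rule has_field_derivative_transform_within_open[where S="{0<..}"])
      (use greater in \<open>auto simp: flat_exp_def\<close>)
next
  case less
  have "((\<lambda>y. 0) has_real_derivative 0) (at x)" by simp
  then have "(flat_exp p has_real_derivative 0) (at x)"
    by (rule has_field_derivative_transform_within_open[where S="{..<0}"])
      (use less in \<open>auto simp: flat_exp_def\<close>)
  then show ?thesis using less by (simp add: flat_exp_def)
qed

lemma smooth_flat_exp: "smooth (flat_exp p)"
proof -
  have "deriv (flat_exp q) = flat_exp (flat_exp_deriv_poly q)" for q
    using flat_exp_has_real_derivative DERIV_imp_deriv by blast
  then have "(deriv ^^ k) (flat_exp p) = flat_exp ((flat_exp_deriv_poly ^^ k) p)" for k
    by (induction k) simp_all
  then show ?thesis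
    unfolding smooth_def using flat_exp_has_real_derivative real_differentiable_def by metis
qed

definition smooth_step :: "real \<Rightarrow> real" where
  "smooth_step x = flat_exp 1 x * (1 / (flat_exp 1 x + flat_exp 1 (1 - x)))"

lemma smooth_step_denominator_pos: "0 < flat_exp 1 x + flat_exp 1 (1 - x)"
  by (cases "0 < x") (auto simp: flat_exp_def add_pos_nonneg add_nonneg_pos)

lemma smooth_smooth_step: "smooth smooth_step"
proof -
  have "smooth (\<lambda>x. flat_exp 1 ((-1) * x + 1))"
    by (rule smooth_comp_affine[OF smooth_flat_exp])
  then have "smooth (\<lambda>x. flat_exp 1 x + flat_exp 1 (1 - x))"
    using smooth_add[OF smooth_flat_exp] by simp
  then have "smooth (\<lambda>x. 1 / (flat_exp 1 x + flat_exp 1 (1 - x)))"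
    by (rule smooth_inverse) (metis smooth_step_denominator_pos less_irrefl)
  then show ?thesis
    unfolding smooth_step_def[abs_def] by (rule smooth_mult[OF smooth_flat_exp])
qed

lemma smooth_step_eq_0: "x \<le> 0 \<Longrightarrow> smooth_step x = 0"
  by (simp add: smooth_step_def flat_exp_def)

lemma smooth_step_eq_1: "1 \<le> x \<Longrightarrow> smooth_step x = 1"
  by (simp add: smooth_step_def flat_exp_def)

lemma smooth_step_bounds: "0 \<le> smooth_step x" "smooth_step x \<le> 1"
proof -
  have "0 \<le> flat_exp 1 y" for y by (simp add: flat_exp_def)
  then show "0 \<le> smooth_step x" "smooth_step x \<le> 1"
    using smooth_step_denominator_pos[of x] by (simp_all add: smooth_step_def)
qed

definition cutoff :: "real \<Rightarrow> real \<Rightarrow> real \<Rightarrow> real \<Rightarrow> real" where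
  "cutoff n a c x = smooth_step (n * (x - a)) * smooth_step (n * (c - x))"

lemma smooth_cutoff: "smooth (cutoff n a c)"
proof -
  have "smooth (\<lambda>x. smooth_step (n * x + (- n * a)) * smooth_step ((- n) * x + n * c))"
    by (intro smooth_mult smooth_comp_affine smooth_smooth_step)
  moreover have "(\<lambda>x. smooth_step (n * x + (- n * a)) * smooth_step ((- n) * x + n * c)) = cutoff n a c"
    by (auto simp: cutoff_def algebra_simps)
  ultimately show ?thesis by simp
qed

lemma cutoff_eq_0: "0 \<le> n \<Longrightarrow> x \<notin> {a<..<c} \<Longrightarrow> cutoff n a c x = 0"
  by (cases "x \<le> a")
    (simp_all add: cutoff_def smooth_step_eq_0 mult_nonneg_nonpos not_le)

lemma cutoff_bounds: "0 \<le> cutoff n a c x" "cutoff n a c x \<le> 1"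
  using smooth_step_bounds[of "n * (x - a)"] smooth_step_bounds[of "n * (c - x)"]
  by (auto simp: cutoff_def mult_le_one)

lemma cutoff_tendsto_indicator: "(\<lambda>m. cutoff (real m) a c x) \<longlonglongrightarrow> indicator {a<..<c} x"
proof (cases "x \<in> {a<..<c}")
  case True
  obtain N :: nat where N: "max (1 / (x - a)) (1 / (c - x)) \<le> real N"
    using real_arch_simple by blast
  have "cutoff (real m) a c x = 1" if "N \<le> m" for m
  proof -
    have m: "max (1 / (x - a)) (1 / (c - x)) \<le> real m" using N that by linarith
    have "1 \<le> real m * (x - a)" "1 \<le> real m * (c - x)"
      using m True by (auto simp: field_simps)
    then show ?thesis by (simp add: cutoff_def smooth_step_eq_1)
  qed
  then have "eventually (\<lambda>m. cutoff (real m) a c x = 1) sequentially"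
    unfolding eventually_sequentially by blast
  then show ?thesis using True by (simp add: tendsto_eventually)
qed (simp add: cutoff_eq_0)


section \<open>Integration over \<open>I\<close>\<close>
abbreviation measurable_I :: "(real \<Rightarrow> real) \<Rightarrow> bool" where
  "measurable_I f \<equiv> set_borel_measurable lborel Iopen f"
abbreviation integrable_I :: "(real \<Rightarrow> real) \<Rightarrow> bool" where
  "integrable_I f \<equiv> set_integrable lborel Iopen f"

lemma measurable_I_mult: "measurable_I f \<Longrightarrow> measurable_I g \<Longrightarrow> measurable_I (\<lambda>x. f x * g x)"
proof -
  assume a: "measurable_I f" "measurable_I g"
  have e: "(\<lambda>x. indicator Iopen x *\<^sub>R (f x * g x)) =
     (\<lambda>x. (indicator Iopen x *\<^sub>R f x) * (indicator Iopen x *\<^sub>R g x))"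
    by (auto simp: indicator_def)
  show ?thesis using a unfolding set_borel_measurable_def e by measurable
qed

lemma measurable_I_add: "measurable_I f \<Longrightarrow> measurable_I g \<Longrightarrow> measurable_I (\<lambda>x. f x + g x)"
proof -
  assume a: "measurable_I f" "measurable_I g"
  have e: "(\<lambda>x. indicator Iopen x *\<^sub>R (f x + g x)) =
     (\<lambda>x. (indicator Iopen x *\<^sub>R f x) + (indicator Iopen x *\<^sub>R g x))"
    by (auto simp: indicator_def)
  show ?thesis using a unfolding set_borel_measurable_def e by measurable
qed

lemma measurable_I_const: "measurable_I (\<lambda>x. c)"
  unfolding set_borel_measurable_def by measurable

lemma measurable_I_cmult: "measurable_I f \<Longrightarrow> measurable_I (\<lambda>x. c * f x)"
  using measurable_I_mult[OF measurable_I_const] by blast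

lemma measurable_I_cong: "measurable_I f \<Longrightarrow> (\<And>x. x \<in> Iopen \<Longrightarrow> f x = g x) \<Longrightarrow> measurable_I g"
proof -
  assume a: "measurable_I f" "\<And>x. x \<in> Iopen \<Longrightarrow> f x = g x"
  have "(\<lambda>x. indicator Iopen x *\<^sub>R f x) = (\<lambda>x. indicator Iopen x *\<^sub>R g x)"
    by (rule ext, case_tac "x \<in> Iopen") (simp_all add: a(2))
  then show ?thesis using a(1) unfolding set_borel_measurable_def by simp
qed

lemma integrable_I_cong: "integrable_I f \<Longrightarrow> (\<And>x. x \<in> Iopen \<Longrightarrow> f x = g x) \<Longrightarrow> integrable_I g"
proof -
  assume a: "integrable_I f" "\<And>x. x \<in> Iopen \<Longrightarrow> f x = g x"
  have "(\<lambda>x. indicator Iopen x *\<^sub>R f x) = (\<lambda>x. indicator Iopen x *\<^sub>R g x)"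
    by (rule ext, case_tac "x \<in> Iopen") (simp_all add: a(2))
  then show ?thesis using a(1) unfolding set_integrable_def by simp
qed

lemma LINT_I_cong: "(\<And>x. x \<in> Iopen \<Longrightarrow> f x = g x) \<Longrightarrow>
   (LINT x:Iopen|lborel. f x) = (LINT x:Iopen|lborel. g x)"
proof -
  assume a: "\<And>x. x \<in> Iopen \<Longrightarrow> f x = g x"
  have "(\<lambda>x. indicator Iopen x *\<^sub>R f x) = (\<lambda>x. indicator Iopen x *\<^sub>R g x)"
    by (rule ext, case_tac "x \<in> Iopen") (simp_all add: a)
  then show ?thesis unfolding set_lebesgue_integral_def by simp
qed

lemma measurable_I_continuous: "continuous_on {-1..1} h \<Longrightarrow> measurable_I h"
proof -
  assume "continuous_on {-1..1} h"
  then have "continuous_on Iopen h" by (rule continuous_on_subset) auto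
  then have "(\<lambda>x. indicator Iopen x *\<^sub>R h x) \<in> borel_measurable borel"
    by (intro borel_measurable_continuous_on_indicator) auto
  then show ?thesis unfolding set_borel_measurable_def by simp
qed

lemma integrable_I_imp_measurable: "integrable_I f \<Longrightarrow> measurable_I f"
  unfolding set_integrable_def set_borel_measurable_def by (rule borel_measurable_integrable)

lemma integrable_I_const: "integrable_I (\<lambda>x. c)"
proof -
  have "integrable lborel (\<lambda>x. indicator Iopen x * c :: real)"
    by (intro integrable_mult_left integrable_real_indicator) auto
  then show ?thesis unfolding set_integrable_def by simp
qed

lemma integrable_I_bound: "integrable_I g \<Longrightarrow> measurable_I f \<Longrightarrow> (\<And>x. x \<in> Iopen \<Longrightarrow> \<bar>f x\<bar> \<le> g x) \<Longrightarrow> integrable_I f"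
proof -
  assume a: "integrable_I g" "measurable_I f" "\<And>x. x \<in> Iopen \<Longrightarrow> \<bar>f x\<bar> \<le> g x"
  show ?thesis
  proof (rule set_integrable_bound[where f=g])
    show "AE x in lborel. x \<in> Iopen \<longrightarrow> norm (f x) \<le> norm (g x)"
      using a(3) by (auto intro: order_trans[OF _ abs_ge_self])
  qed (use a in auto)
qed

lemma L2I_imp_integrable_I:
  assumes "L2I f"
  shows "integrable_I f"
proof (rule integrable_I_bound[where g="\<lambda>x. 1 + (f x)^2"])
  show "integrable_I (\<lambda>x. 1 + (f x)^2)" "measurable_I f"
    using assms unfolding L2I_def by (auto intro: set_integral_add(1) integrable_I_const)
  show "\<bar>f x\<bar> \<le> 1 + (f x)\<^sup>2" for x
  proof (cases "\<bar>f x\<bar> \<le> 1")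
    case False
    then have "\<bar>f x\<bar> * 1 \<le> \<bar>f x\<bar> * \<bar>f x\<bar>" by (intro mult_left_mono) auto
    then show ?thesis by (simp add: power2_eq_square)
  qed (simp add: add_increasing2)
qed

lemma L2I_mult_integrable_I:
  assumes "L2I f" "L2I g"
  shows "integrable_I (\<lambda>x. f x * g x)"
proof (rule integrable_I_bound[where g="\<lambda>x. (f x)^2 + (g x)^2"])
  show "integrable_I (\<lambda>x. (f x)^2 + (g x)^2)" "measurable_I (\<lambda>x. f x * g x)"
    using assms unfolding L2I_def by (auto intro: set_integral_add(1) measurable_I_mult)
  show "\<bar>f x * g x\<bar> \<le> (f x)\<^sup>2 + (g x)\<^sup>2" for x
  proof -
    have "2 * (\<bar>f x\<bar> * \<bar>g x\<bar>) \<le> (f x)\<^sup>2 + (g x)\<^sup>2"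
      using sum_squares_bound[of "\<bar>f x\<bar>" "\<bar>g x\<bar>"] by (simp add: mult.assoc)
    moreover have "0 \<le> \<bar>f x\<bar> * \<bar>g x\<bar>" by simp
    ultimately show ?thesis unfolding abs_mult by linarith
  qed
qed

lemma L2I_add: "L2I f \<Longrightarrow> L2I g \<Longrightarrow> L2I (\<lambda>x. f x + g x)"
  unfolding L2I_def
proof safe
  assume a: "measurable_I f" "integrable_I (\<lambda>x. (f x)\<^sup>2)" "measurable_I g" "integrable_I (\<lambda>x. (g x)\<^sup>2)"
  show "measurable_I (\<lambda>x. f x + g x)" using measurable_I_add[OF a(1) a(3)] .
  show "integrable_I (\<lambda>x. (f x + g x)\<^sup>2)"
  proof (rule integrable_I_bound[where g="\<lambda>x. 2 * (f x)^2 + 2 * (g x)^2"])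
    show "integrable_I (\<lambda>x. 2 * (f x)\<^sup>2 + 2 * (g x)\<^sup>2)" using a by (auto intro!: set_integral_add(1) set_integrable_mult_right)
    show "measurable_I (\<lambda>x. (f x + g x)\<^sup>2)" using a unfolding power2_eq_square by (intro measurable_I_mult measurable_I_add)
    fix x show "\<bar>(f x + g x)\<^sup>2\<bar> \<le> 2 * (f x)\<^sup>2 + 2 * (g x)\<^sup>2"
    proof -
      have "2 * f x * g x \<le> (f x)\<^sup>2 + (g x)\<^sup>2" by (rule sum_squares_bound)
      moreover have "0 \<le> (f x + g x)\<^sup>2" by simp
      ultimately show ?thesis by (simp add: power2_sum)
    qed
  qed
qed

lemma L2I_cmult: "L2I f \<Longrightarrow> L2I (\<lambda>x. c * f x)"
  unfolding L2I_def
proof safe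
  assume a: "measurable_I f" "integrable_I (\<lambda>x. (f x)\<^sup>2)"
  show "measurable_I (\<lambda>x. c * f x)" using measurable_I_cmult[OF a(1)] .
  have "integrable_I (\<lambda>x. c^2 * (f x)\<^sup>2)" using set_integrable_mult_right[OF a(2)] .
  then show "integrable_I (\<lambda>x. (c * f x)\<^sup>2)" by (simp add: power_mult_distrib)
qed

lemma L2I_diff: "L2I f \<Longrightarrow> L2I g \<Longrightarrow> L2I (\<lambda>x. f x - g x)"
proof -
  assume a: "L2I f" "L2I g"
  have "L2I (\<lambda>x. f x + (-1) * g x)" by (rule L2I_add[OF a(1) L2I_cmult[OF a(2)]])
  then show ?thesis by simp
qed

lemma L2I_cong: "L2I f \<Longrightarrow> (\<And>x. x \<in> Iopen \<Longrightarrow> f x = g x) \<Longrightarrow> L2I g"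
proof -
  assume a: "L2I f" "\<And>x. x \<in> Iopen \<Longrightarrow> f x = g x"
  have "measurable_I g" using a measurable_I_cong[of f g] by (simp add: L2I_def)
  moreover have "integrable_I (\<lambda>x. (g x)\<^sup>2)" using a integrable_I_cong[of "\<lambda>x. (f x)\<^sup>2" "\<lambda>x. (g x)\<^sup>2"] by (simp add: L2I_def)
  ultimately show ?thesis by (simp add: L2I_def)
qed

lemma L2I_mult_continuous: "L2I f \<Longrightarrow> continuous_on {-1..1} h \<Longrightarrow> L2I (\<lambda>x. h x * f x)"
proof -
  assume a: "L2I f" "continuous_on {-1..1} h"
  obtain B where B: "B \<ge> 0" "\<And>x. x \<in> {-1..1} \<Longrightarrow> \<bar>h x\<bar> \<le> B" by (rule continuous_on_compact_bound[OF compact_Icc a(2)]) auto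
  show ?thesis unfolding L2I_def
  proof
    have mf: "measurable_I f" using a(1) by (simp add: L2I_def)
    have P: "measurable_I (\<lambda>x. h x * f x)" by (rule measurable_I_mult[OF measurable_I_continuous[OF a(2)] mf])
    show "measurable_I (\<lambda>x. h x * f x)" by (rule P)
    show "integrable_I (\<lambda>x. (h x * f x)\<^sup>2)"
    proof (rule integrable_I_bound[where g="\<lambda>x. B^2 * (f x)^2"])
      show "integrable_I (\<lambda>x. B\<^sup>2 * (f x)\<^sup>2)" using a by (auto simp: L2I_def intro!: set_integrable_mult_right)
      show "measurable_I (\<lambda>x. (h x * f x)\<^sup>2)" unfolding power2_eq_square by (rule measurable_I_mult[OF P P])
      fix x assume "x \<in> Iopen"
      then have "\<bar>h x\<bar> \<le> B" using B by auto
      then have "\<bar>h x\<bar>^2 \<le> B^2" by (rule power_mono) simp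
      then have "(h x)^2 \<le> B^2" by simp
      then show "\<bar>(h x * f x)\<^sup>2\<bar> \<le> B\<^sup>2 * (f x)\<^sup>2"
        by (simp add: power_mult_distrib mult_right_mono)
    qed
  qed
qed

lemma L2I_const: "L2I (\<lambda>x. c)"
  unfolding L2I_def by (auto intro: measurable_I_const integrable_I_const)

lemma L2I_continuous: "continuous_on {-1..1} h \<Longrightarrow> L2I h"
  using L2I_mult_continuous[OF L2I_const[of 1]] by simp

lemma integrable_I_mult_continuous: "integrable_I f \<Longrightarrow> continuous_on {-1..1} h \<Longrightarrow> integrable_I (\<lambda>x. h x * f x)"
proof -
  assume a: "integrable_I f" "continuous_on {-1..1} h"
  obtain B where B: "B \<ge> 0" "\<And>x. x \<in> {-1..1} \<Longrightarrow> \<bar>h x\<bar> \<le> B" by (rule continuous_on_compact_bound[OF compact_Icc a(2)]) auto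
  show ?thesis
  proof (rule integrable_I_bound[where g="\<lambda>x. B * \<bar>f x\<bar>"])
    show "integrable_I (\<lambda>x. B * \<bar>f x\<bar>)" using set_integrable_mult_right[OF set_integrable_abs[OF a(1)]] .
    show "measurable_I (\<lambda>x. h x * f x)" by (rule measurable_I_mult[OF measurable_I_continuous[OF a(2)] integrable_I_imp_measurable[OF a(1)]])
    fix x assume "x \<in> Iopen"
    then have "\<bar>h x\<bar> \<le> B" using B by auto
    then show "\<bar>h x * f x\<bar> \<le> B * \<bar>f x\<bar>"
      using B(1) by (simp add: abs_mult mult_right_mono)
  qed
qed

lemma discriminant_le_if_nonneg_quadratic:
  fixes A B C :: real
  assumes q: "\<And>t. 0 \<le> A + 2 * t * B + t\<^sup>2 * C" and C: "0 \<le> C"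
  shows "B\<^sup>2 \<le> A * C"
proof (cases "C = 0")
  case True
  have "B = 0"
  proof (rule ccontr)
    assume "B \<noteq> 0"
    have "0 \<le> A + 2 * (- (A + 1) / (2 * B)) * B + (- (A + 1) / (2 * B))\<^sup>2 * C" by (rule q)
    then show False using \<open>B \<noteq> 0\<close> True by (simp add: field_simps)
  qed
  then show ?thesis using True by simp
next
  case False
  then have Cp: "0 < C" using C by simp
  have "0 \<le> A + 2 * (- B / C) * B + (- B / C)\<^sup>2 * C" by (rule q)
  then have "0 \<le> A - B\<^sup>2 / C" using Cp by (simp add: power2_eq_square field_simps)
  then show ?thesis using Cp by (simp add: field_simps)
qed

lemma L2I_imp_integrable_I_square: "L2I f \<Longrightarrow> integrable_I (\<lambda>x. (f x)\<^sup>2)" by (simp add: L2I_def)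

lemma L2I_cmult_indicator: "L2I (\<lambda>x. c * indicator {a..<b} x)"
  unfolding L2I_def
proof
  have m: "measurable_I (indicator {a..<b} :: real \<Rightarrow> real)"
    unfolding set_borel_measurable_def by measurable
  show "measurable_I (\<lambda>x. c * indicator {a..<b} x)" by (rule measurable_I_cmult[OF m])
  show "integrable_I (\<lambda>x. (c * indicator {a..<b} x)\<^sup>2)"
  proof (rule integrable_I_bound[OF integrable_I_const[of "c^2"]])
    show "measurable_I (\<lambda>x. (c * indicator {a..<b} x)\<^sup>2)" unfolding power2_eq_square
      by (rule measurable_I_mult[OF measurable_I_cmult[OF m] measurable_I_cmult[OF m]])
    fix x show "\<bar>(c * indicator {a..<b} x)\<^sup>2\<bar> \<le> c\<^sup>2" by (simp add: indicator_def)
  qed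
qed

lemma L2I_sum: "(\<And>i. i < n \<Longrightarrow> L2I (F i)) \<Longrightarrow> L2I (\<lambda>x. \<Sum>i<(n::nat). F i x)"
proof (induction n)
  case 0 then show ?case using L2I_const[of 0] by simp
next
  case (Suc n)
  have "L2I (\<lambda>x. (\<Sum>i<n. F i x) + F n x)" using Suc by (intro L2I_add) auto
  then show ?case by simp
qed

lemma measurable_I_abs: "measurable_I F \<Longrightarrow> measurable_I (\<lambda>x. \<bar>F x\<bar>)"
proof -
  assume a: "measurable_I F"
  have e: "(\<lambda>x. indicator Iopen x *\<^sub>R \<bar>F x\<bar>) = (\<lambda>x. \<bar>indicator Iopen x *\<^sub>R F x\<bar>)"
    by (auto simp: indicator_def)
  show ?thesis using a unfolding set_borel_measurable_def e by measurable
qed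

lemma measurable_I_indicator: "measurable_I (indicator {a<..<c} :: real \<Rightarrow> real)"
  unfolding set_borel_measurable_def by measurable

lemma L2I_abs: "L2I F \<Longrightarrow> L2I (\<lambda>x. \<bar>F x\<bar>)"
  unfolding L2I_def by (simp add: measurable_I_abs)

lemma L2I_indicator_mult:
  assumes F: "L2I F"
  shows "L2I (\<lambda>x. indicator {a<..<c} x * F x)"
  unfolding L2I_def
proof
  have "measurable_I F" using F by (simp add: L2I_def)
  then show m: "measurable_I (\<lambda>x. indicator {a<..<c} x * F x)"
    by (rule measurable_I_mult[OF measurable_I_indicator])
  show "integrable_I (\<lambda>x. (indicator {a<..<c} x * F x)\<^sup>2)"
  proof (rule integrable_I_bound[OF L2I_imp_integrable_I_square[OF F]])
    show "measurable_I (\<lambda>x. (indicator {a<..<c} x * F x)\<^sup>2)"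
      unfolding power2_eq_square by (rule measurable_I_mult[OF m m])
  qed (simp add: indicator_def)
qed

lemma integrable_indicator_I: "integrable_I g \<Longrightarrow> integrable lborel (\<lambda>x. indicator Iopen x * g x)"
  unfolding set_integrable_def by simp

lemma LINT_I_nonneg: "(\<And>x. x \<in> Iopen \<Longrightarrow> 0 \<le> f x) \<Longrightarrow> 0 \<le> (LINT x:Iopen|lborel. (f x::real))"
  unfolding set_lebesgue_integral_def by (rule integral_nonneg_AE) (auto simp: indicator_def)

lemma LINT_I_square_nonneg: "0 \<le> (LINT x:Iopen|lborel. (f x :: real)\<^sup>2)"
  by (rule LINT_I_nonneg) simp

lemma L2norm_nonneg: "0 \<le> L2norm f"
  unfolding L2norm_def by (simp add: LINT_I_square_nonneg)

lemma L2norm_square: "(L2norm f)\<^sup>2 = (LINT x:Iopen|lborel. (f x)\<^sup>2)"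
  using LINT_I_square_nonneg[of f] by (simp add: L2norm_def)

lemma Cauchy_Schwarz_I:
  assumes f: "L2I f" and g: "L2I g"
  shows "(LINT x:Iopen|lborel. f x * g x)\<^sup>2 \<le> (LINT x:Iopen|lborel. (f x)\<^sup>2) * (LINT x:Iopen|lborel. (g x)\<^sup>2)"
proof (rule discriminant_le_if_nonneg_quadratic)
  show "0 \<le> (LINT x:Iopen|lborel. (g x)\<^sup>2)" by (rule LINT_I_square_nonneg)
  fix t
  have i1: "integrable_I (\<lambda>x. (f x)\<^sup>2)" "integrable_I (\<lambda>x. f x * g x)" "integrable_I (\<lambda>x. (g x)\<^sup>2)"
    using f g L2I_mult_integrable_I by (auto simp: L2I_def)
  have "(LINT x:Iopen|lborel. (f x + t * g x)\<^sup>2) = (LINT x:Iopen|lborel. (f x)\<^sup>2 + (2 * t) * (f x * g x) + t\<^sup>2 * (g x)\<^sup>2)"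
    by (rule LINT_I_cong) (simp add: power2_eq_square algebra_simps)
  also have "\<dots> = (LINT x:Iopen|lborel. (f x)\<^sup>2) + 2 * t * (LINT x:Iopen|lborel. f x * g x) + t\<^sup>2 * (LINT x:Iopen|lborel. (g x)\<^sup>2)"
    using i1 by (simp add: set_integral_add set_integral_add(1) set_integrable_mult_right)
  finally show "0 \<le> (LINT x:Iopen|lborel. (f x)\<^sup>2) + 2 * t * (LINT x:Iopen|lborel. f x * g x) + t\<^sup>2 * (LINT x:Iopen|lborel. (g x)\<^sup>2)"
    using LINT_I_square_nonneg[of "\<lambda>x. f x + t * g x"] by simp
qed

lemma abs_LINT_I_mult_le:
  assumes f: "L2I f" and g: "L2I g"
  shows "\<bar>LINT x:Iopen|lborel. f x * g x\<bar> \<le> L2norm f * L2norm g"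
proof -
  have "sqrt ((LINT x:Iopen|lborel. f x * g x)\<^sup>2) \<le> sqrt ((LINT x:Iopen|lborel. (f x)\<^sup>2) * (LINT x:Iopen|lborel. (g x)\<^sup>2))"
    using Cauchy_Schwarz_I[OF f g] by (rule real_sqrt_le_mono)
  then show ?thesis by (simp add: real_sqrt_mult L2norm_def)
qed


definition primitive :: "(real \<Rightarrow> real) \<Rightarrow> real \<Rightarrow> real" where
  "primitive g x = integral {-1..x} g"

lemma integrable_I_imp_integrable_on: "integrable_I g \<Longrightarrow> g integrable_on {-1..1}"
  using set_borel_integral_eq_integral(1)[of Iopen g] integrable_on_open_interval_real by blast

lemma integrable_I_imp_integrable_on_subinterval: "integrable_I g \<Longrightarrow> -1 \<le> a \<Longrightarrow> b \<le> 1 \<Longrightarrow> g integrable_on {a..b}"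
  using integrable_I_imp_integrable_on integrable_on_subinterval by fastforce

lemma integrable_I_imp_set_integrable_subinterval: "integrable_I g \<Longrightarrow> -1 \<le> a \<Longrightarrow> b \<le> 1 \<Longrightarrow> set_integrable lborel {a<..<b} g"
  by (rule set_integrable_subset) auto

lemma LINT_subinterval_eq_integral: "integrable_I g \<Longrightarrow> -1 \<le> a \<Longrightarrow> b \<le> 1 \<Longrightarrow>
    (LINT x:{a<..<b}|lborel. g x) = integral {a..b} g"
  using set_borel_integral_eq_integral(2)[OF integrable_I_imp_set_integrable_subinterval[of g a b]] integral_open_interval_real
  by metis

lemma LINT_I_eq_primitive: "integrable_I g \<Longrightarrow> (LINT x:Iopen|lborel. g x) = primitive g 1"
  using LINT_subinterval_eq_integral[of g "-1" 1] by (simp add: primitive_def)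

lemma LINT_subinterval_one: "-1 \<le> a \<Longrightarrow> a \<le> c \<Longrightarrow> c \<le> 1 \<Longrightarrow> (LINT x:{a<..<c}|lborel. (1::real)) = c - a"
  using LINT_subinterval_eq_integral[OF integrable_I_const[of 1], of a c] by simp

lemma continuous_on_primitive: "integrable_I g \<Longrightarrow> continuous_on {-1..1} (primitive g)"
  unfolding primitive_def[abs_def] by (rule indefinite_integral_continuous_1[OF integrable_I_imp_integrable_on])

lemma primitive_split: "integrable_I g \<Longrightarrow> -1 \<le> a \<Longrightarrow> a \<le> c \<Longrightarrow> c \<le> 1 \<Longrightarrow> primitive g c = primitive g a + integral {a..c} g"
  unfolding primitive_def using Henstock_Kurzweil_Integration.integral_combine[where a="-1" and c=a and b=c and f=g] integrable_I_imp_integrable_on_subinterval[of g "-1" c] by simp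

lemma primitive_at_left [simp]: "primitive g (-1) = 0"
  by (simp add: primitive_def)

lemma primitive_has_real_derivative:
  assumes "continuous_on {-1..1} F" "x \<in> Iopen"
  shows "(primitive F has_real_derivative F x) (at x)"
proof -
  have "(primitive F has_real_derivative F x) (at x within {-1..1})"
    unfolding primitive_def[abs_def] using integral_has_real_derivative[OF assms(1)] assms(2) by auto
  moreover have "at x within {-1..1} = at x"
    using assms(2) by (intro at_within_interior) auto
  ultimately show ?thesis by simp
qed

lemma continuous_imp_integrable_I: "continuous_on {-1..1} h \<Longrightarrow> integrable_I h"
  using L2I_continuous L2I_imp_integrable_I by blast

lemma eq_primitive_if_has_derivative:
  assumes U: "continuous_on {-1..1} U"
    and d: "\<And>x. x \<in> Iopen \<Longrightarrow> (U has_real_derivative U' x) (at x)"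
    and U': "continuous_on {-1..1} U'"
    and x: "x \<in> {-1..1}"
  shows "U x = U (-1) + primitive U' x"
proof -
  have "(U' has_integral (U x - U (-1))) {-1..x}"
  proof (rule fundamental_theorem_of_calculus_interior)
    show "-1 \<le> x" using x by auto
    show "continuous_on {-1..x} U" by (rule continuous_on_subset[OF U]) (use x in auto)
    fix y assume "y \<in> {-1<..<x}"
    then have "y \<in> Iopen" using x by auto
    then show "(U has_vector_derivative U' y) (at y)"
      using d has_real_derivative_iff_has_vector_derivative by blast
  qed
  then show ?thesis unfolding primitive_def by (simp add: integral_unique)
qed


lemma LINT_I_indicator_mult:
  fixes H :: "real \<Rightarrow> real"
  assumes "-1 \<le> a" "c \<le> 1"
  shows "(LINT x:Iopen|lborel. indicator {a<..<c} x * H x) = (LINT x:{a<..<c}|lborel. H x)"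
proof -
  have "(\<lambda>x. indicator Iopen x *\<^sub>R (indicator {a<..<c} x * H x)) = (\<lambda>x. indicator {a<..<c} x *\<^sub>R H x)"
    using assms by (intro ext) (auto simp: indicator_def)
  then show ?thesis
    unfolding set_lebesgue_integral_def by simp
qed

lemma Cauchy_Schwarz_subinterval:
  assumes F: "L2I F" and a: "-1 \<le> a" and ac: "a \<le> c" and c: "c \<le> 1"
  shows "(integral {a..c} (\<lambda>y. \<bar>F y\<bar>))^2 \<le> (c - a) * integral {a..c} (\<lambda>y. (F y)^2)"
proof -
  let ?\<chi> = "\<lambda>y. indicator {a<..<c} y :: real"
  note L2 = L2I_indicator_mult[OF L2I_abs[OF F], of a c] L2I_indicator_mult[OF L2I_const[of 1], of a c]
  have "(LINT x:Iopen|lborel. (?\<chi> x * \<bar>F x\<bar>) * (?\<chi> x * 1)) = (LINT x:Iopen|lborel. ?\<chi> x * \<bar>F x\<bar>)"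
    by (rule LINT_I_cong) (simp add: indicator_def)
  also have "\<dots> = integral {a..c} (\<lambda>y. \<bar>F y\<bar>)"
    using LINT_subinterval_eq_integral[OF set_integrable_abs[OF L2I_imp_integrable_I[OF F]] a c]
    by (simp add: LINT_I_indicator_mult a c)
  finally have 1: "(LINT x:Iopen|lborel. (?\<chi> x * \<bar>F x\<bar>) * (?\<chi> x * 1)) = integral {a..c} (\<lambda>y. \<bar>F y\<bar>)" .
  have "(LINT x:Iopen|lborel. (?\<chi> x * \<bar>F x\<bar>)\<^sup>2) = (LINT x:Iopen|lborel. ?\<chi> x * (F x)\<^sup>2)"
    by (rule LINT_I_cong) (simp add: indicator_def)
  also have "\<dots> = integral {a..c} (\<lambda>y. (F y)^2)"
    using LINT_subinterval_eq_integral[OF L2I_imp_integrable_I_square[OF F] a c]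
    by (simp add: LINT_I_indicator_mult a c)
  finally have 2: "(LINT x:Iopen|lborel. (?\<chi> x * \<bar>F x\<bar>)\<^sup>2) = integral {a..c} (\<lambda>y. (F y)^2)" .
  have "(LINT x:Iopen|lborel. (?\<chi> x * 1)\<^sup>2) = (LINT x:Iopen|lborel. ?\<chi> x * 1)"
    by (rule LINT_I_cong) (simp add: indicator_def)
  also have "\<dots> = c - a"
    using LINT_subinterval_one[OF a ac c] LINT_I_indicator_mult[OF a c, of "\<lambda>_. 1"] by simp
  finally have 3: "(LINT x:Iopen|lborel. (?\<chi> x * 1)\<^sup>2) = c - a" .
  show ?thesis
    using Cauchy_Schwarz_I[OF L2] unfolding 1 2 3 by (simp add: mult.commute)
qed

section \<open>Integration by parts\<close>

lemma measurable_indicator_lessThan: "(\<lambda>p::real\<times>real. indicator {..<fst p} (snd p) :: real) \<in> borel_measurable (lborel \<Otimes>\<^sub>M lborel)"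
proof -
  have e: "(\<lambda>p::real\<times>real. indicator {..<fst p} (snd p) :: real) = (\<lambda>p. if snd p < fst p then 1 else 0)"
    by (auto simp: indicator_def)
  show ?thesis unfolding e by measurable
qed

lemma integrable_mult_integral_lessThan:
  fixes A B :: "real \<Rightarrow> real"
  assumes A: "integrable lborel A" and B: "integrable lborel B"
  shows "integrable lborel (\<lambda>x. \<bar>A x\<bar> * (\<integral>y. \<bar>B y\<bar> * indicator {..<x} y \<partial>lborel))"
proof (rule Bochner_Integration.integrable_bound[where f="\<lambda>x. \<bar>A x\<bar> * (\<integral>y. \<bar>B y\<bar> \<partial>lborel)"])
  have mA: "A \<in> borel_measurable lborel" and mB: "B \<in> borel_measurable lborel"
    using A B by (simp_all add: borel_measurable_integrable)
  show "integrable lborel (\<lambda>x. \<bar>A x\<bar> * (\<integral>y. \<bar>B y\<bar> \<partial>lborel))"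
    using A by (intro integrable_mult_left integrable_abs)
  have "(\<lambda>x. \<integral>y. \<bar>B y\<bar> * indicator {..<x} y \<partial>lborel) \<in> borel_measurable lborel"
  proof (rule lborel.borel_measurable_lebesgue_integral)
    have "(\<lambda>p::real\<times>real. \<bar>B (snd p)\<bar> * indicator {..<fst p} (snd p)) \<in> borel_measurable (lborel \<Otimes>\<^sub>M lborel)"
      using mB measurable_indicator_lessThan by measurable
    then show "(\<lambda>(x, y). \<bar>B y\<bar> * indicator {..<x} y) \<in> borel_measurable (lborel \<Otimes>\<^sub>M lborel)"
      by (simp add: case_prod_beta')
  qed
  with mA show "(\<lambda>x. \<bar>A x\<bar> * (\<integral>y. \<bar>B y\<bar> * indicator {..<x} y \<partial>lborel)) \<in> borel_measurable lborel"
    by measurable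
  show "AE x in lborel. norm (\<bar>A x\<bar> * (\<integral>y. \<bar>B y\<bar> * indicator {..<x} y \<partial>lborel))
      \<le> norm (\<bar>A x\<bar> * (\<integral>y. \<bar>B y\<bar> \<partial>lborel))"
  proof (rule AE_I2)
    fix x
    have "integrable lborel (\<lambda>y. \<bar>B y\<bar> * indicator {..<x} y)"
      using B by (intro integrable_real_mult_indicator integrable_abs) auto
    then have "(\<integral>y. \<bar>B y\<bar> * indicator {..<x} y \<partial>lborel) \<le> (\<integral>y. \<bar>B y\<bar> \<partial>lborel)"
      using B by (intro integral_mono) (auto simp: indicator_def)
    moreover have "0 \<le> (\<integral>y. \<bar>B y\<bar> * indicator {..<x} y \<partial>lborel)"
      by (intro integral_nonneg_AE) auto
    ultimately show "norm (\<bar>A x\<bar> * (\<integral>y. \<bar>B y\<bar> * indicator {..<x} y \<partial>lborel))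
        \<le> norm (\<bar>A x\<bar> * (\<integral>y. \<bar>B y\<bar> \<partial>lborel))"
      by (simp add: abs_mult mult_left_mono)
  qed
qed

lemma integrable_triangle_kernel:
  fixes A B :: "real \<Rightarrow> real"
  assumes A: "integrable lborel A" and B: "integrable lborel B"
  shows "integrable (lborel \<Otimes>\<^sub>M lborel) (\<lambda>(x, y). A x * (B y * indicator {..<x} y))"
proof -
  define F where "F x y = A x * (B y * indicator {..<x} y)" for x y :: real
  have mA: "A \<in> borel_measurable lborel" and mB: "B \<in> borel_measurable lborel"
    using A B by (simp_all add: borel_measurable_integrable)
  have "(\<lambda>p::real \<times> real. A (fst p) * (B (snd p) * indicator {..<fst p} (snd p)))
      \<in> borel_measurable (lborel \<Otimes>\<^sub>M lborel)"
    using mA mB measurable_indicator_lessThan by measurable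
  then have mF: "case_prod F \<in> borel_measurable (lborel \<Otimes>\<^sub>M lborel)"
    by (simp add: F_def case_prod_beta')
  show ?thesis
    unfolding F_def[symmetric]
  proof (rule lborel_pair.Fubini_integrable[OF mF])
    have "(\<lambda>x. \<integral>y. norm (case_prod F (x, y)) \<partial>lborel) = (\<lambda>x. \<bar>A x\<bar> * (\<integral>y. \<bar>B y\<bar> * indicator {..<x} y \<partial>lborel))"
      by (auto simp: F_def abs_mult)
    then show "integrable lborel (\<lambda>x. \<integral>y. norm (case_prod F (x, y)) \<partial>lborel)"
      using integrable_mult_integral_lessThan[OF A B] by simp
    show "AE x in lborel. integrable lborel (\<lambda>y. case_prod F (x, y))"
    proof (rule AE_I2)
      fix x
      have "integrable lborel (\<lambda>y. A x * (B y * indicator {..<x} y))"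
        using B by (intro integrable_mult_right integrable_real_mult_indicator) auto
      then show "integrable lborel (\<lambda>y. case_prod F (x, y))" by (simp add: F_def)
    qed
  qed
qed

lemma Fubini_triangle:
  fixes A B :: "real \<Rightarrow> real"
  assumes A: "integrable lborel A" and B: "integrable lborel B"
  shows "(\<integral>x. A x * (\<integral>y. B y * indicator {..<x} y \<partial>lborel) \<partial>lborel)
       = (\<integral>y. B y * (\<integral>x. A x * indicator {y<..} x \<partial>lborel) \<partial>lborel)"
proof -
  define F where "F x y = A x * (B y * indicator {..<x} y)" for x y :: real
  have "(\<integral>y. (\<integral>x. F x y \<partial>lborel) \<partial>lborel) = (\<integral>x. (\<integral>y. F x y \<partial>lborel) \<partial>lborel)"
    using integrable_triangle_kernel[OF A B] unfolding F_def by (rule lborel_pair.Fubini_integral)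
  moreover have "(\<lambda>x. F x y) = (\<lambda>x. B y * (A x * indicator {y<..} x))" for y
    by (auto simp: F_def indicator_def)
  ultimately show ?thesis
    by (simp add: F_def)
qed


lemma LINT_I_mult_primitive:
  assumes g: "integrable_I g" and k: "integrable_I k"
  shows "(LINT x:Iopen|lborel. k x * primitive g x) = (LINT s:Iopen|lborel. g s * (primitive k 1 - primitive k s))"
proof -
  let ?A = "\<lambda>x. indicator Iopen x * k x"
  let ?B = "\<lambda>y. indicator Iopen y * g y"
  have F: "(\<integral>x. ?A x * (\<integral>y. ?B y * indicator {..<x} y \<partial>lborel) \<partial>lborel)
       = (\<integral>y. ?B y * (\<integral>x. ?A x * indicator {y<..} x \<partial>lborel) \<partial>lborel)"
    by (rule Fubini_triangle[OF integrable_indicator_I[OF k] integrable_indicator_I[OF g]])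
  have l: "(\<lambda>x. ?A x * (\<integral>y. ?B y * indicator {..<x} y \<partial>lborel)) = (\<lambda>x. indicator Iopen x *\<^sub>R (k x * primitive g x))"
  proof
    fix x
    show "?A x * (\<integral>y. ?B y * indicator {..<x} y \<partial>lborel) = indicator Iopen x *\<^sub>R (k x * primitive g x)"
    proof (cases "x \<in> Iopen")
      case True
      have "(\<lambda>y. ?B y * indicator {..<x} y) = (\<lambda>y. indicator {-1<..<x} y *\<^sub>R g y)"
        using True by (auto simp: indicator_def)
      then have "(\<integral>y. ?B y * indicator {..<x} y \<partial>lborel) = (LINT y:{-1<..<x}|lborel. g y)"
        by (simp add: set_lebesgue_integral_def)
      also have "\<dots> = primitive g x" using LINT_subinterval_eq_integral[OF g, of "-1" x] True by (simp add: primitive_def)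
      finally show ?thesis using True by simp
    qed simp
  qed
  have r: "(\<lambda>y. ?B y * (\<integral>x. ?A x * indicator {y<..} x \<partial>lborel)) = (\<lambda>s. indicator Iopen s *\<^sub>R (g s * (primitive k 1 - primitive k s)))"
  proof
    fix y
    show "?B y * (\<integral>x. ?A x * indicator {y<..} x \<partial>lborel) = indicator Iopen y *\<^sub>R (g y * (primitive k 1 - primitive k y))"
    proof (cases "y \<in> Iopen")
      case True
      have "(\<lambda>x. ?A x * indicator {y<..} x) = (\<lambda>x. indicator {y<..<1} x *\<^sub>R k x)"
        using True by (auto simp: indicator_def)
      then have "(\<integral>x. ?A x * indicator {y<..} x \<partial>lborel) = (LINT x:{y<..<1}|lborel. k x)"
        by (simp add: set_lebesgue_integral_def)
      also have "\<dots> = integral {y..1} k" using LINT_subinterval_eq_integral[OF k, of y 1] True by simp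
      also have "\<dots> = primitive k 1 - primitive k y" using primitive_split[OF k, of y 1] True by simp
      finally show ?thesis using True by simp
    qed simp
  qed
  show ?thesis using F unfolding l r set_lebesgue_integral_def .
qed

lemma LINT_I_primitive_by_parts:
  assumes g: "integrable_I g" and dpsi: "integrable_I dpsi"
    and rep: "\<And>x. x \<in> Iopen \<Longrightarrow> pp x = primitive dpsi x" and one: "primitive dpsi 1 = 0"
  shows "(LINT x:Iopen|lborel. (c + primitive g x) * dpsi x) = - (LINT x:Iopen|lborel. g x * pp x)"
proof -
  have i1: "integrable_I (\<lambda>x. c * dpsi x)" using dpsi by (rule set_integrable_mult_right)
  have i2: "integrable_I (\<lambda>x. primitive g x * dpsi x)" using integrable_I_mult_continuous[OF dpsi continuous_on_primitive[OF g]] .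
  have "(LINT x:Iopen|lborel. (c + primitive g x) * dpsi x) = (LINT x:Iopen|lborel. c * dpsi x + primitive g x * dpsi x)"
    by (simp add: distrib_right)
  also have "\<dots> = c * (LINT x:Iopen|lborel. dpsi x) + (LINT x:Iopen|lborel. dpsi x * primitive g x)"
    using set_integral_add(2)[OF i1 i2] by (simp add: mult.commute)
  also have "(LINT x:Iopen|lborel. dpsi x) = 0" using LINT_I_eq_primitive[OF dpsi] one by simp
  also have "(LINT x:Iopen|lborel. dpsi x * primitive g x) = (LINT s:Iopen|lborel. g s * (primitive dpsi 1 - primitive dpsi s))"
    by (rule LINT_I_mult_primitive[OF g dpsi])
  also have "\<dots> = (LINT s:Iopen|lborel. - (g s * pp s))"
    by (rule LINT_I_cong) (simp add: one rep)
  also have "\<dots> = - (LINT s:Iopen|lborel. g s * pp s)"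
    unfolding set_lebesgue_integral_def by simp
  finally show ?thesis by simp
qed


section \<open>Test functions and weak derivatives\<close>

lemma test_fun_iff: "test_fun \<phi> \<longleftrightarrow> smooth \<phi> \<and> (\<exists>a c. -1 < a \<and> c < 1 \<and> (\<forall>x. x \<notin> {a..c} \<longrightarrow> \<phi> x = 0))"
  unfolding test_fun_def smooth_def by simp

lemma test_fun_imp_smooth: "test_fun \<phi> \<Longrightarrow> smooth \<phi>"
  by (simp add: test_fun_iff)

lemma deriv_eq_0_outside:
  assumes "smooth \<phi>" "\<And>x. x \<notin> {a..c} \<Longrightarrow> \<phi> x = 0" "x \<notin> {a..c}"
  shows "deriv \<phi> x = 0"
proof -
  have "((\<lambda>_. 0) has_real_derivative 0) (at x)" by simp
  then have "(\<phi> has_real_derivative 0) (at x)"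
    by (rule has_field_derivative_transform_within_open[where S="- {a..c}"]) (use assms in auto)
  then show ?thesis by (rule DERIV_imp_deriv)
qed

lemma test_fun_deriv: "test_fun \<phi> \<Longrightarrow> test_fun (deriv \<phi>)"
  unfolding test_fun_iff using smooth_deriv deriv_eq_0_outside by blast

lemma test_fun_eq_primitive: "test_fun \<phi> \<Longrightarrow> x \<in> {-1..1} \<Longrightarrow> \<phi> x = primitive (deriv \<phi>) x"
proof -
  assume t: "test_fun \<phi>" and x: "x \<in> {-1..1}"
  then obtain a c where s: "smooth \<phi>" "-1 < a" "c < 1" "\<And>x. x \<notin> {a..c} \<Longrightarrow> \<phi> x = 0"
    by (auto simp: test_fun_iff)
  have "\<phi> x = \<phi> (-1) + primitive (deriv \<phi>) x"
    using eq_primitive_if_has_derivative[OF smooth_imp_continuous_on[OF s(1)] smooth_imp_DERIV[OF s(1)] smooth_imp_continuous_on[OF smooth_deriv[OF s(1)]] x] .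
  moreover have "\<phi> (-1) = 0" using s by auto
  ultimately show ?thesis by simp
qed

lemma primitive_deriv_test_fun: "test_fun \<phi> \<Longrightarrow> primitive (deriv \<phi>) 1 = 0"
proof -
  assume t: "test_fun \<phi>"
  then obtain a c where s: "smooth \<phi>" "-1 < a" "c < 1" "\<And>x. x \<notin> {a..c} \<Longrightarrow> \<phi> x = 0"
    by (auto simp: test_fun_iff)
  have "\<phi> 1 = 0" using s by auto
  with test_fun_eq_primitive[OF t, of 1] show ?thesis by simp
qed

lemma test_fun_continuous_on: "test_fun \<phi> \<Longrightarrow> continuous_on S \<phi>"
  using test_fun_imp_smooth smooth_imp_continuous_on by blast

lemma test_fun_boundary_values: "test_fun \<phi> \<Longrightarrow> \<phi> (-1) = 0 \<and> \<phi> 1 = 0"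
  using test_fun_eq_primitive[of \<phi> "-1"] test_fun_eq_primitive[of \<phi> 1] primitive_deriv_test_fun[of \<phi>] by simp

lemma test_fun_L2I: "test_fun \<phi> \<Longrightarrow> L2I \<phi>"
  using test_fun_continuous_on L2I_continuous by blast

lemma L2_weak_deriv_primitive:
  assumes g: "L2I g" and rep: "\<And>x. x \<in> Iopen \<Longrightarrow> U x = c + primitive g x"
  shows "L2_weak_deriv U g"
  unfolding L2_weak_deriv_def
proof (intro conjI allI impI)
  have gi: "integrable_I g" using g by (rule L2I_imp_integrable_I)
  have "continuous_on {-1..1} (\<lambda>x. c + primitive g x)"
    using continuous_on_primitive[OF gi] by (intro continuous_intros)
  then have "L2I (\<lambda>x. c + primitive g x)" by (rule L2I_continuous)
  then show "L2I U" by (rule L2I_cong) (simp add: rep)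
  show "L2I g" by (rule g)
  fix \<phi> assume t: "test_fun \<phi>"
  have dphi: "integrable_I (deriv \<phi>)" using test_fun_deriv[OF t] test_fun_L2I L2I_imp_integrable_I by blast
  have s1: "(LINT x:Iopen|lborel. U x * deriv \<phi> x) = (LINT x:Iopen|lborel. (c + primitive g x) * deriv \<phi> x)"
    by (rule LINT_I_cong) (simp add: rep)
  have rep': "\<And>x. x \<in> Iopen \<Longrightarrow> \<phi> x = primitive (deriv \<phi>) x" using test_fun_eq_primitive[OF t] by auto
  have s2: "(LINT x:Iopen|lborel. (c + primitive g x) * deriv \<phi> x) = - (LINT x:Iopen|lborel. g x * \<phi> x)"
    using LINT_I_primitive_by_parts[OF gi dphi rep' primitive_deriv_test_fun[OF t]] .
  show "(LINT x:Iopen|lborel. U x * deriv \<phi> x) = - (LINT x:Iopen|lborel. g x * \<phi> x)"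
    using s1 s2 by simp
qed

lemma test_fun_L2_weak_deriv: "test_fun \<phi> \<Longrightarrow> L2_weak_deriv \<phi> (deriv \<phi>)"
  using L2_weak_deriv_primitive[of "deriv \<phi>" \<phi> 0] test_fun_eq_primitive test_fun_deriv test_fun_L2I by force

lemma test_fun_H10: "test_fun \<phi> \<Longrightarrow> H10 \<phi>"
proof -
  assume t: "test_fun \<phi>"
  then obtain a c where s: "smooth \<phi>" "-1 < a" "c < 1" "\<And>x. x \<notin> {a..c} \<Longrightarrow> \<phi> x = 0"
    by (auto simp: test_fun_iff)
  have "H1 \<phi>" unfolding H1_def using test_fun_L2_weak_deriv[OF t] by blast
  moreover have "continuous_on {-1..1} \<phi>" using test_fun_continuous_on[OF t] .
  moreover have "\<phi> (-1) = 0" "\<phi> 1 = 0" using s by auto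
  ultimately show ?thesis unfolding H10_def by blast
qed

lemma L2_weak_derivD: "L2_weak_deriv u g \<Longrightarrow> test_fun \<phi> \<Longrightarrow>
   (LINT x:Iopen|lborel. u x * deriv \<phi> x) = - (LINT x:Iopen|lborel. g x * \<phi> x)"
  by (simp add: L2_weak_deriv_def)

lemma L2I_mult_test_fun_integrable_I: "L2I u \<Longrightarrow> test_fun \<phi> \<Longrightarrow> integrable_I (\<lambda>x. u x * \<phi> x)"
  using integrable_I_mult_continuous[OF L2I_imp_integrable_I, of u \<phi>] test_fun_continuous_on by (simp add: mult.commute)

lemma L2_weak_deriv_add:
  assumes "L2_weak_deriv u g" "L2_weak_deriv v h"
  shows "L2_weak_deriv (\<lambda>x. u x + v x) (\<lambda>x. g x + h x)"
  unfolding L2_weak_deriv_def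
proof (intro conjI allI impI)
  show "L2I (\<lambda>x. u x + v x)" using assms by (simp add: L2_weak_deriv_def L2I_add)
  show "L2I (\<lambda>x. g x + h x)" using assms by (simp add: L2_weak_deriv_def L2I_add)
  fix \<phi> assume t: "test_fun \<phi>"
  have td: "test_fun (deriv \<phi>)" using t by (rule test_fun_deriv)
  have L: "L2I u" "L2I v" "L2I g" "L2I h" using assms by (auto simp: L2_weak_deriv_def)
  have "(LINT x:Iopen|lborel. (u x + v x) * deriv \<phi> x) = (LINT x:Iopen|lborel. u x * deriv \<phi> x + v x * deriv \<phi> x)"
    by (simp add: distrib_right)
  also have "\<dots> = (LINT x:Iopen|lborel. u x * deriv \<phi> x) + (LINT x:Iopen|lborel. v x * deriv \<phi> x)"
    by (rule set_integral_add(2)[OF L2I_mult_test_fun_integrable_I[OF L(1) td] L2I_mult_test_fun_integrable_I[OF L(2) td]])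
  also have "\<dots> = - (LINT x:Iopen|lborel. g x * \<phi> x) - (LINT x:Iopen|lborel. h x * \<phi> x)"
    using L2_weak_derivD[OF assms(1) t] L2_weak_derivD[OF assms(2) t] by simp
  also have "\<dots> = - ((LINT x:Iopen|lborel. g x * \<phi> x + h x * \<phi> x))"
    using set_integral_add(2)[OF L2I_mult_test_fun_integrable_I[OF L(3) t] L2I_mult_test_fun_integrable_I[OF L(4) t]] by simp
  finally show "(LINT x:Iopen|lborel. (u x + v x) * deriv \<phi> x) = - (LINT x:Iopen|lborel. (g x + h x) * \<phi> x)"
    by (simp add: distrib_right)
qed

lemma L2_weak_deriv_cmult:
  assumes "L2_weak_deriv u g"
  shows "L2_weak_deriv (\<lambda>x. c * u x) (\<lambda>x. c * g x)"
  unfolding L2_weak_deriv_def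
proof (intro conjI allI impI)
  show "L2I (\<lambda>x. c * u x)" using assms by (simp add: L2_weak_deriv_def L2I_cmult)
  show "L2I (\<lambda>x. c * g x)" using assms by (simp add: L2_weak_deriv_def L2I_cmult)
  fix \<phi> assume t: "test_fun \<phi>"
  have "(LINT x:Iopen|lborel. c * u x * deriv \<phi> x) = c * (LINT x:Iopen|lborel. u x * deriv \<phi> x)"
    by (simp add: mult.assoc)
  also have "\<dots> = - (c * (LINT x:Iopen|lborel. g x * \<phi> x))" using L2_weak_derivD[OF assms t] by simp
  also have "c * (LINT x:Iopen|lborel. g x * \<phi> x) = (LINT x:Iopen|lborel. c * g x * \<phi> x)"
    by (simp add: mult.assoc)
  finally show "(LINT x:Iopen|lborel. c * u x * deriv \<phi> x) = - (LINT x:Iopen|lborel. c * g x * \<phi> x)" .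
qed

lemma L2_weak_deriv_diff:
  assumes "L2_weak_deriv u g" "L2_weak_deriv v h"
  shows "L2_weak_deriv (\<lambda>x. u x - v x) (\<lambda>x. g x - h x)"
  using L2_weak_deriv_add[OF assms(1) L2_weak_deriv_cmult[OF assms(2), of "-1"]] by simp

lemma L2_weak_deriv_cong:
  assumes "L2_weak_deriv u g" "\<And>x. x \<in> Iopen \<Longrightarrow> u x = u' x" "\<And>x. x \<in> Iopen \<Longrightarrow> g x = g' x"
  shows "L2_weak_deriv u' g'"
  unfolding L2_weak_deriv_def
proof (intro conjI allI impI)
  show "L2I u'" using assms L2I_cong by (auto simp: L2_weak_deriv_def)
  show "L2I g'" using assms L2I_cong by (auto simp: L2_weak_deriv_def)
  fix \<phi> assume t: "test_fun \<phi>"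
  have "(LINT x:Iopen|lborel. u' x * deriv \<phi> x) = (LINT x:Iopen|lborel. u x * deriv \<phi> x)"
    by (rule LINT_I_cong) (simp add: assms)
  also have "\<dots> = - (LINT x:Iopen|lborel. g x * \<phi> x)" using L2_weak_derivD[OF assms(1) t] .
  also have "(LINT x:Iopen|lborel. g x * \<phi> x) = (LINT x:Iopen|lborel. g' x * \<phi> x)"
    by (rule LINT_I_cong) (simp add: assms)
  finally show "(LINT x:Iopen|lborel. u' x * deriv \<phi> x) = - (LINT x:Iopen|lborel. g' x * \<phi> x)" .
qed


lemma L2_weak_deriv_cong_AE:
  assumes w: "L2_weak_deriv u g" and ae: "AE x in lborel. x \<in> Iopen \<longrightarrow> g x = g' x" and L: "L2I g'"
  shows "L2_weak_deriv u g'"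
  unfolding L2_weak_deriv_def
proof (intro conjI allI impI)
  show "L2I u" using w by (simp add: L2_weak_deriv_def)
  show "L2I g'" by (rule L)
  fix \<phi> assume t: "test_fun \<phi>"
  have mg: "measurable_I g" using w by (simp add: L2_weak_deriv_def L2I_def)
  have mg': "measurable_I g'" using L by (simp add: L2I_def)
  have mp: "measurable_I \<phi>" using test_fun_continuous_on[OF t] by (rule measurable_I_continuous)
  have m1: "(\<lambda>x. indicator Iopen x *\<^sub>R (g x * \<phi> x)) \<in> borel_measurable lborel"
    using measurable_I_mult[OF mg mp] unfolding set_borel_measurable_def .
  have m2: "(\<lambda>x. indicator Iopen x *\<^sub>R (g' x * \<phi> x)) \<in> borel_measurable lborel"
    using measurable_I_mult[OF mg' mp] unfolding set_borel_measurable_def .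
  have "(LINT x:Iopen|lborel. g x * \<phi> x) = (LINT x:Iopen|lborel. g' x * \<phi> x)"
    unfolding set_lebesgue_integral_def
    by (rule integral_cong_AE[OF m1 m2]) (rule AE_mp[OF ae AE_I2], auto simp: indicator_def)
  then show "(LINT x:Iopen|lborel. u x * deriv \<phi> x) = - (LINT x:Iopen|lborel. g' x * \<phi> x)"
    using L2_weak_derivD[OF w t] by simp
qed


section \<open>The du Bois-Reymond lemma\<close>

text \<open>If \<open>h\<close> annihilates all derivatives of test functions, then for test functions \<open>f\<^sub>1, f\<^sub>2\<close>
  the combination \<open>(\<integral>f\<^sub>2) f\<^sub>1 - (\<integral>f\<^sub>1) f\<^sub>2\<close> has integral zero, hence is itself such a derivative.
  Letting \<open>f\<^sub>1, f\<^sub>2\<close> tend to indicators of intervals shows that \<open>h\<close> has the same mean on every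
  subinterval, so \<open>h\<close> is almost everywhere constant.\<close>

lemma primitive_test_fun:
  assumes sm: "smooth ch" and a: "-1 < a" and c: "c < 1"
    and z: "\<And>x. x \<notin> {a..c} \<Longrightarrow> ch x = 0" and one: "primitive ch 1 = 0"
  shows "test_fun (primitive ch) \<and> deriv (primitive ch) = ch"
proof -
  have ci: "integrable_I ch" using continuous_imp_integrable_I smooth_imp_continuous_on[OF sm] by blast
  have zP: "primitive ch y = 0" if y: "y \<notin> {a..c}" for y
  proof (cases "y < a")
    case True
    show ?thesis unfolding primitive_def by (intro integral_unique has_integral_is_0) (use True z in auto)
  next
    case False
    with y have yc: "c < y" by auto
    show ?thesis
    proof (cases "y \<le> 1")
      case True
      have "y \<in> {-1..1}" using True yc a c False by auto
      have "integral {y..1} ch = 0" by (intro integral_unique has_integral_is_0) (use z yc in auto)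
      then show ?thesis using primitive_split[OF ci, of y 1] True yc a False one by auto
    next
      case False
      have int: "ch integrable_on {-1..y}"
        by (rule integrable_continuous_interval[OF smooth_imp_continuous_on[OF sm]])
      have "integral {-1..1} ch + integral {1..y} ch = integral {-1..y} ch"
        using Henstock_Kurzweil_Integration.integral_combine[where a="-1" and c=1 and b=y and f=ch] False int by auto
      moreover have "integral {1..y} ch = 0" by (intro integral_unique has_integral_is_0) (use z c in auto)
      ultimately show ?thesis using one by (simp add: primitive_def)
    qed
  qed
  have D: "(primitive ch has_real_derivative ch x) (at x)" for x
  proof (cases "x \<in> Iopen")
    case True
    then show ?thesis using primitive_has_real_derivative[OF smooth_imp_continuous_on[OF sm]] by blast
  next
    case False
    then have x: "x \<notin> {a..c}" using a c by auto
    have "((\<lambda>_. 0) has_real_derivative 0) (at x)" by simp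
    then have "(primitive ch has_real_derivative 0) (at x)"
      by (rule has_field_derivative_transform_within_open[where S="- {a..c}"]) (use x zP in auto)
    then show ?thesis using z[OF x] by simp
  qed
  have "smooth (primitive ch)" by (rule smooth_if_DERIV_smooth[OF D sm])
  moreover have "deriv (primitive ch) = ch" using D DERIV_imp_deriv by blast
  ultimately show ?thesis unfolding test_fun_iff using zP a c by blast
qed

lemma cutoff_test_fun: "0 \<le> n \<Longrightarrow> -1 < a \<Longrightarrow> c < 1 \<Longrightarrow> test_fun (cutoff n a c)"
proof -
  assume n: "0 \<le> n" and a: "-1 < a" and c: "c < 1"
  have "\<forall>x. x \<notin> {a..c} \<longrightarrow> cutoff n a c x = 0" using cutoff_eq_0[OF n] by auto
  then show ?thesis unfolding test_fun_iff using smooth_cutoff a c by blast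
qed

lemma cutoff_measurable: "cutoff n a c \<in> borel_measurable lborel"
  using borel_measurable_continuous_onI[OF smooth_imp_continuous_on[OF smooth_cutoff]] by simp

lemma LINT_I_cutoff_tendsto:
  assumes h: "integrable_I h" and a: "-1 < a" and c: "c < 1"
  shows "(\<lambda>m. LINT x:Iopen|lborel. h x * cutoff (real m) a c x) \<longlonglongrightarrow> (LINT x:{a<..<c}|lborel. h x)"
proof -
  let ?s = "\<lambda>m x. indicator Iopen x * h x * cutoff (real m) a c x"
  let ?f = "\<lambda>x. indicator {a<..<c} x * h x"
  have hr: "integrable lborel (\<lambda>x. indicator Iopen x * h x)" using integrable_indicator_I[OF h] .
  have "(\<lambda>m. integral\<^sup>L lborel (?s m)) \<longlonglongrightarrow> integral\<^sup>L lborel ?f"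
  proof (rule integral_dominated_convergence[where w="\<lambda>x. \<bar>indicator Iopen x * h x\<bar>"])
    have "set_integrable lborel {a<..<c} h" using integrable_I_imp_set_integrable_subinterval[OF h, of a c] a c by simp
    then show "?f \<in> borel_measurable lborel" unfolding set_integrable_def
      by (simp add: borel_measurable_integrable)
    show "?s m \<in> borel_measurable lborel" for m
      using borel_measurable_integrable[OF hr] cutoff_measurable[of "real m" a c] by measurable
    show "integrable lborel (\<lambda>x. \<bar>indicator Iopen x * h x\<bar>)" using hr by (rule integrable_abs)
    show "AE x in lborel. (\<lambda>m. ?s m x) \<longlonglongrightarrow> ?f x"
    proof (rule AE_I2)
      fix x
      have "(\<lambda>m. indicator Iopen x * h x * cutoff (real m) a c x) \<longlonglongrightarrow> indicator Iopen x * h x * indicator {a<..<c} x"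
        by (intro tendsto_mult tendsto_const cutoff_tendsto_indicator)
      moreover have "indicator Iopen x * h x * indicator {a<..<c} x = ?f x"
        using a c by (auto simp: indicator_def)
      ultimately show "(\<lambda>m. ?s m x) \<longlonglongrightarrow> ?f x" by simp
    qed
    show "AE x in lborel. norm (?s m x) \<le> \<bar>indicator Iopen x * h x\<bar>" for m
    proof (rule AE_I2)
      fix x
      have "\<bar>cutoff (real m) a c x\<bar> \<le> 1" using cutoff_bounds[of "real m" a c x] by simp
      then show "norm (?s m x) \<le> \<bar>indicator Iopen x * h x\<bar>"
        by (simp add: abs_mult mult_left_le)
    qed
  qed
  then show ?thesis unfolding set_lebesgue_integral_def by (simp add: mult.assoc)
qed


lemma primitive_linear_at_right:
  assumes "continuous_on {-1..1} f" "continuous_on {-1..1} g"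
  shows "primitive (\<lambda>x. \<alpha> * f x - \<beta> * g x) 1 = \<alpha> * primitive f 1 - \<beta> * primitive g 1"
proof -
  have "f integrable_on {-1..1}" "g integrable_on {-1..1}"
    using assms integrable_continuous_interval by blast+
  then have "integral {-1..1} (\<lambda>x. \<alpha> * f x - \<beta> * g x) = integral {-1..1} (\<lambda>x. \<alpha> * f x) - integral {-1..1} (\<lambda>x. \<beta> * g x)"
    by (intro Henstock_Kurzweil_Integration.integral_diff integrable_on_mult_right)
  also have "\<dots> = \<alpha> * integral {-1..1} f - \<beta> * integral {-1..1} g"
    using integral_mult[of f "{-1..1}" \<alpha>] integral_mult[of g "{-1..1}" \<beta>] \<open>f integrable_on {-1..1}\<close> \<open>g integrable_on {-1..1}\<close> by simp
  finally show ?thesis unfolding primitive_def .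
qed

lemma LINT_I_test_fun_cross:
  assumes h: "integrable_I h" and hyp: "\<And>\<phi>. test_fun \<phi> \<Longrightarrow> (LINT x:Iopen|lborel. h x * deriv \<phi> x) = 0"
    and t1: "test_fun f1" and t2: "test_fun f2"
  shows "primitive f2 1 * (LINT x:Iopen|lborel. h x * f1 x) = primitive f1 1 * (LINT x:Iopen|lborel. h x * f2 x)"
proof -
  obtain a1 c1 where s1: "smooth f1" "-1 < a1" "c1 < 1" "\<And>x. x \<notin> {a1..c1} \<Longrightarrow> f1 x = 0"
    using t1 by (auto simp: test_fun_iff)
  obtain a2 c2 where s2: "smooth f2" "-1 < a2" "c2 < 1" "\<And>x. x \<notin> {a2..c2} \<Longrightarrow> f2 x = 0"
    using t2 by (auto simp: test_fun_iff)
  define ch where "ch = (\<lambda>x. primitive f2 1 * f1 x - primitive f1 1 * f2 x)"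
  have sm: "smooth ch" unfolding ch_def by (intro smooth_diff smooth_cmult s1(1) s2(1))
  have z: "ch x = 0" if "x \<notin> {min a1 a2..max c1 c2}" for x
  proof -
    have "x \<notin> {a1..c1}" "x \<notin> {a2..c2}" using that by auto
    then show ?thesis using s1(4)[of x] s2(4)[of x] by (simp add: ch_def)
  qed
  have one: "primitive ch 1 = 0"
    unfolding ch_def by (subst primitive_linear_at_right) (auto intro: smooth_imp_continuous_on s1 s2)
  have "test_fun (primitive ch) \<and> deriv (primitive ch) = ch"
    by (rule primitive_test_fun[OF sm _ _ z one]) (use s1 s2 in auto)
  then have "(LINT x:Iopen|lborel. h x * ch x) = 0" using hyp by metis
  moreover have i1: "integrable_I (\<lambda>x. h x * f1 x)" using integrable_I_mult_continuous[OF h smooth_imp_continuous_on[OF s1(1)]] by (simp add: mult.commute)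
  moreover have i2: "integrable_I (\<lambda>x. h x * f2 x)" using integrable_I_mult_continuous[OF h smooth_imp_continuous_on[OF s2(1)]] by (simp add: mult.commute)
  moreover have "(LINT x:Iopen|lborel. h x * ch x) = primitive f2 1 * (LINT x:Iopen|lborel. h x * f1 x) - primitive f1 1 * (LINT x:Iopen|lborel. h x * f2 x)"
  proof -
    have "(LINT x:Iopen|lborel. h x * ch x) = (LINT x:Iopen|lborel. primitive f2 1 * (h x * f1 x) - primitive f1 1 * (h x * f2 x))"
      by (simp add: ch_def algebra_simps)
    also have "\<dots> = (LINT x:Iopen|lborel. primitive f2 1 * (h x * f1 x)) - (LINT x:Iopen|lborel. primitive f1 1 * (h x * f2 x))"
      by (rule set_integral_diff(2)) (use i1 i2 in \<open>auto intro: set_integrable_mult_right\<close>)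
    finally show ?thesis by simp
  qed
  ultimately show ?thesis by simp
qed

lemma LINT_subinterval_proportional:
  assumes h: "integrable_I h" and hyp: "\<And>\<phi>. test_fun \<phi> \<Longrightarrow> (LINT x:Iopen|lborel. h x * deriv \<phi> x) = 0"
    and a: "-1 < a" and ac: "a < c" and c: "c < 1"
  shows "(LINT x:{a<..<c}|lborel. h x) = (c - a) * (LINT x:{-1/2<..<1/2}|lborel. h x)"
proof -
  let ?f1 = "\<lambda>m. cutoff (real m) a c" and ?f2 = "\<lambda>m. cutoff (real m) (-1/2) (1/2)"
  have id: "primitive (?f2 m) 1 * (LINT x:Iopen|lborel. h x * ?f1 m x) = primitive (?f1 m) 1 * (LINT x:Iopen|lborel. h x * ?f2 m x)" for m
    by (rule LINT_I_test_fun_cross[OF h hyp cutoff_test_fun cutoff_test_fun]) (use a c in auto)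
  have L1: "(\<lambda>m. LINT x:Iopen|lborel. h x * ?f1 m x) \<longlonglongrightarrow> (LINT x:{a<..<c}|lborel. h x)"
    by (rule LINT_I_cutoff_tendsto[OF h a c])
  have L2: "(\<lambda>m. LINT x:Iopen|lborel. h x * ?f2 m x) \<longlonglongrightarrow> (LINT x:{-1/2<..<1/2}|lborel. h x)"
    by (rule LINT_I_cutoff_tendsto[OF h]) auto
  have P1: "(\<lambda>m. primitive (?f1 m) 1) \<longlonglongrightarrow> c - a"
  proof -
    have "(\<lambda>m. LINT x:Iopen|lborel. 1 * ?f1 m x) \<longlonglongrightarrow> (LINT x:{a<..<c}|lborel. (1::real))"
      by (rule LINT_I_cutoff_tendsto[OF integrable_I_const a c])
    moreover have "primitive (?f1 m) 1 = (LINT x:Iopen|lborel. 1 * ?f1 m x)" for m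
      using LINT_I_eq_primitive[OF continuous_imp_integrable_I[OF smooth_imp_continuous_on[OF smooth_cutoff]]] by simp
    ultimately show ?thesis using LINT_subinterval_one[of a c] a ac c by simp
  qed
  have P2: "(\<lambda>m. primitive (?f2 m) 1) \<longlonglongrightarrow> 1"
  proof -
    have "(\<lambda>m. LINT x:Iopen|lborel. 1 * ?f2 m x) \<longlonglongrightarrow> (LINT x:{-1/2<..<(1/2::real)}|lborel. (1::real))"
      by (rule LINT_I_cutoff_tendsto[OF integrable_I_const]) auto
    moreover have "primitive (?f2 m) 1 = (LINT x:Iopen|lborel. 1 * ?f2 m x)" for m
      using LINT_I_eq_primitive[OF continuous_imp_integrable_I[OF smooth_imp_continuous_on[OF smooth_cutoff]]] by simp
    ultimately show ?thesis using LINT_subinterval_one[of "-1/2" "1/2"] by simp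
  qed
  have A: "(\<lambda>m. primitive (?f2 m) 1 * (LINT x:Iopen|lborel. h x * ?f1 m x)) \<longlonglongrightarrow> 1 * (LINT x:{a<..<c}|lborel. h x)"
    by (rule tendsto_mult[OF P2 L1])
  have B: "(\<lambda>m. primitive (?f2 m) 1 * (LINT x:Iopen|lborel. h x * ?f1 m x)) \<longlonglongrightarrow> (c - a) * (LINT x:{-1/2<..<1/2}|lborel. h x)"
    unfolding id by (rule tendsto_mult[OF P1 L2])
  show ?thesis using LIMSEQ_unique[OF A B] by simp
qed

lemma primitive_eq_0_if_LINT_subintervals_eq_0:
  assumes k: "integrable_I k" and z: "\<And>a c. -1 < a \<Longrightarrow> a < c \<Longrightarrow> c < 1 \<Longrightarrow> (LINT x:{a<..<c}|lborel. k x) = 0"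
  shows "\<And>x. x \<in> {-1..1} \<Longrightarrow> primitive k x = 0"
proof -
  have zI: "primitive k x = 0" if x: "x \<in> Iopen" for x
  proof -
    have "primitive k y = primitive k x" if y: "y \<in> {-1<..<x}" for y
    proof -
      have "integral {y..x} k = 0" using LINT_subinterval_eq_integral[OF k, of y x] z[of y x] x y by auto
      then show ?thesis using primitive_split[OF k, of y x] x y by auto
    qed
    moreover have "continuous_on (closure {-1<..<x}) (primitive k)"
      using x by (auto intro: continuous_on_subset[OF continuous_on_primitive[OF k]])
    moreover have "-1 \<in> closure {-1<..<x}" using x by auto
    ultimately have "primitive k (-1) = primitive k x"
      using continuous_constant_on_closure[of "{-1<..<x}" "primitive k" "primitive k x" "-1"] by blast
    then show ?thesis by simp
  qed
  fix x :: real assume x: "x \<in> {-1..1}"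
  have "continuous_on (closure Iopen) (primitive k)" using continuous_on_primitive[OF k] by simp
  then show "primitive k x = 0"
    using continuous_constant_on_closure[of Iopen "primitive k" 0 x] zI x by auto
qed


lemma emeasure_density_greaterThan:
  fixes p :: "real \<Rightarrow> real"
  assumes p: "integrable lborel p" and nn: "\<And>x. 0 \<le> p x"
  shows "emeasure (density lborel (\<lambda>x. ennreal (p x))) {t<..} = ennreal (\<integral>x. p x * indicator {t<..} x \<partial>lborel)"
proof -
  have mp: "p \<in> borel_measurable lborel" using p by (rule borel_measurable_integrable)
  have "emeasure (density lborel (\<lambda>x. ennreal (p x))) {t<..} = (\<integral>\<^sup>+ x. ennreal (p x) * indicator {t<..} x \<partial>lborel)"
    by (rule emeasure_density) (use mp in auto)
  also have "\<dots> = (\<integral>\<^sup>+ x. ennreal (p x * indicator {t<..} x) \<partial>lborel)"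
    by (rule nn_integral_cong) (simp add: ennreal_mult'' ennreal_indicator)
  also have "\<dots> = ennreal (\<integral>x. p x * indicator {t<..} x \<partial>lborel)"
    by (rule nn_integral_eq_integral) (use p nn in \<open>auto intro: integrable_real_mult_indicator\<close>)
  finally show ?thesis .
qed

text \<open>The positive and negative parts of \<open>g\<close> are densities of one and the same measure, since the
  two measures agree on all half-lines.\<close>

lemma AE_eq_0_if_integral_greaterThan_eq_0:
  fixes g :: "real \<Rightarrow> real"
  assumes g: "integrable lborel g" and zero: "\<And>t. (\<integral>x. g x * indicator {t<..} x \<partial>lborel) = 0"
  shows "AE x in lborel. g x = 0"
proof -
  define gp where "gp x = (g x + \<bar>g x\<bar>) / 2" for x
  define gm where "gm x = (\<bar>g x\<bar> - g x) / 2" for x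
  have gpi: "integrable lborel gp" and gmi: "integrable lborel gm"
    unfolding gp_def[abs_def] gm_def[abs_def] using g by auto
  have gpn: "0 \<le> gp x" and gmn: "0 \<le> gm x" for x
    unfolding gp_def gm_def by simp_all
  have same: "(\<integral>x. gp x * indicator {t<..} x \<partial>lborel) = (\<integral>x. gm x * indicator {t<..} x \<partial>lborel)" for t
  proof -
    have "(\<lambda>x. gp x * indicator {t<..} x - gm x * indicator {t<..} x) = (\<lambda>x. g x * indicator {t<..} x)"
      by (intro ext) (simp add: gp_def gm_def field_simps)
    then show ?thesis
      using zero[of t] Bochner_Integration.integral_diff[OF integrable_real_mult_indicator[OF _ gpi]
          integrable_real_mult_indicator[OF _ gmi], of "{t<..}" "{t<..}"]
      by simp
  qed
  let ?Mp = "density lborel (\<lambda>x. ennreal (gp x))"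
  let ?Mm = "density lborel (\<lambda>x. ennreal (gm x))"
  have "?Mp = ?Mm"
  proof (rule measure_eqI_lessThan)
    show "sets ?Mp = sets borel" "sets ?Mm = sets borel" by simp_all
    show "emeasure ?Mp {x<..} < \<infinity>" for x
      using emeasure_density_greaterThan[OF gpi gpn] by simp
    show "emeasure ?Mp {x<..} = emeasure ?Mm {x<..}" for x
      using emeasure_density_greaterThan[OF gpi gpn] emeasure_density_greaterThan[OF gmi gmn] same by simp
  qed
  moreover have "integral\<^sup>N lborel (\<lambda>x. ennreal (gp x)) \<noteq> \<infinity>"
    using nn_integral_eq_integral[OF gpi] gpn by simp
  ultimately have "AE x in lborel. ennreal (gp x) = ennreal (gm x)"
    using finite_density_unique[of "\<lambda>x. ennreal (gp x)" lborel "\<lambda>x. ennreal (gm x)"]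
      borel_measurable_integrable[OF gpi] borel_measurable_integrable[OF gmi] by auto
  then show ?thesis
    by (rule AE_mp[OF _ AE_I2]) (use gpn gmn in \<open>auto simp: gp_def gm_def\<close>)
qed

lemma AE_eq_0_if_primitive_eq_0:
  assumes k: "integrable_I k" and P: "\<And>x. x \<in> {-1..1} \<Longrightarrow> primitive k x = 0"
  shows "AE x in lborel. x \<in> Iopen \<longrightarrow> k x = 0"
proof -
  have "(\<integral>x. indicator Iopen x * k x * indicator {t<..} x \<partial>lborel) = 0" for t
  proof (cases "t < -1 \<or> 1 \<le> t")
    case True
    then have "(\<lambda>x. indicator Iopen x * k x * indicator {t<..} x) = (\<lambda>x. indicator Iopen x *\<^sub>R k x)
      \<or> (\<lambda>x. indicator Iopen x * k x * indicator {t<..} x) = (\<lambda>x. 0)"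
      by (auto simp: indicator_def)
    moreover have "(LINT x:Iopen|lborel. k x) = 0"
      using LINT_I_eq_primitive[OF k] P[of 1] by simp
    ultimately show ?thesis
      by (auto simp: set_lebesgue_integral_def)
  next
    case False
    then have "(\<lambda>x. indicator Iopen x * k x * indicator {t<..} x) = (\<lambda>x. indicator {t<..<1} x *\<^sub>R k x)"
      by (auto simp: indicator_def)
    then have "(\<integral>x. indicator Iopen x * k x * indicator {t<..} x \<partial>lborel) = (LINT x:{t<..<1}|lborel. k x)"
      by (simp add: set_lebesgue_integral_def)
    also have "\<dots> = primitive k 1 - primitive k t"
      using LINT_subinterval_eq_integral[OF k, of t 1] primitive_split[OF k, of t 1] False by simp
    also have "\<dots> = 0"
      using P[of 1] P[of t] False by simp
    finally show ?thesis .
  qed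
  then have "AE x in lborel. indicator Iopen x * k x = 0"
    by (intro AE_eq_0_if_integral_greaterThan_eq_0 integrable_indicator_I[OF k])
  then show ?thesis
    by (rule AE_mp[OF _ AE_I2]) (simp add: indicator_def)
qed


lemma du_Bois_Reymond:
  assumes h: "integrable_I h" and hyp: "\<And>\<phi>. test_fun \<phi> \<Longrightarrow> (LINT x:Iopen|lborel. h x * deriv \<phi> x) = 0"
  shows "\<exists>K. AE x in lborel. x \<in> Iopen \<longrightarrow> h x = K"
proof -
  define K where "K = (LINT x:{-1/2<..<1/2}|lborel. h x)"
  define k where "k x = h x - K" for x
  have ki: "integrable_I k" unfolding k_def[abs_def] by (rule set_integral_diff(1)[OF h integrable_I_const])
  have z: "(LINT x:{a<..<c}|lborel. k x) = 0" if a: "-1 < a" and ac: "a < c" and c: "c < 1" for a c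
  proof -
    have "(LINT x:{a<..<c}|lborel. k x) = (LINT x:{a<..<c}|lborel. h x) - (LINT x:{a<..<c}|lborel. K)"
      unfolding k_def using integrable_I_imp_set_integrable_subinterval[OF h, of a c] integrable_I_imp_set_integrable_subinterval[OF integrable_I_const[of K], of a c] a c
      by (intro set_integral_diff(2)) auto
    also have "(LINT x:{a<..<c}|lborel. K) = (c - a) * K"
      using LINT_subinterval_eq_integral[OF integrable_I_const[of K], of a c] a ac c by simp
    also have "(LINT x:{a<..<c}|lborel. h x) = (c - a) * K"
      unfolding K_def by (rule LINT_subinterval_proportional[OF h hyp a ac c])
    finally show ?thesis by simp
  qed
  have "AE x in lborel. x \<in> Iopen \<longrightarrow> k x = 0"
    by (rule AE_eq_0_if_primitive_eq_0[OF ki primitive_eq_0_if_LINT_subintervals_eq_0[OF ki z]])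
  then have "AE x in lborel. x \<in> Iopen \<longrightarrow> h x = K"
    by (rule AE_mp[OF _ AE_I2]) (simp add: k_def)
  then show ?thesis by blast
qed

lemma L2_weak_deriv_AE_primitive:
  assumes w: "L2_weak_deriv U g"
  shows "\<exists>c. AE x in lborel. x \<in> Iopen \<longrightarrow> U x = c + primitive g x"
proof -
  have LU: "L2I U" and Lg: "L2I g" using w by (auto simp: L2_weak_deriv_def)
  have gi: "integrable_I g" using Lg by (rule L2I_imp_integrable_I)
  have LP: "L2I (primitive g)" by (rule L2I_continuous[OF continuous_on_primitive[OF gi]])
  define h where "h x = U x - primitive g x" for x
  have hi: "integrable_I h" unfolding h_def[abs_def] by (rule set_integral_diff(1)[OF L2I_imp_integrable_I[OF LU] L2I_imp_integrable_I[OF LP]])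
  have hyp: "(LINT x:Iopen|lborel. h x * deriv \<phi> x) = 0" if t: "test_fun \<phi>" for \<phi>
  proof -
    have td: "test_fun (deriv \<phi>)" using t by (rule test_fun_deriv)
    have dphi: "integrable_I (deriv \<phi>)" using td test_fun_L2I L2I_imp_integrable_I by blast
    have rep': "\<And>x. x \<in> Iopen \<Longrightarrow> \<phi> x = primitive (deriv \<phi>) x" using test_fun_eq_primitive[OF t] by auto
    have "(LINT x:Iopen|lborel. h x * deriv \<phi> x) = (LINT x:Iopen|lborel. U x * deriv \<phi> x) - (LINT x:Iopen|lborel. primitive g x * deriv \<phi> x)"
      unfolding h_def left_diff_distrib
      by (rule set_integral_diff(2)[OF L2I_mult_test_fun_integrable_I[OF LU td] L2I_mult_test_fun_integrable_I[OF LP td]])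
    also have "(LINT x:Iopen|lborel. U x * deriv \<phi> x) = - (LINT x:Iopen|lborel. g x * \<phi> x)"
      by (rule L2_weak_derivD[OF w t])
    also have "(LINT x:Iopen|lborel. primitive g x * deriv \<phi> x) = - (LINT x:Iopen|lborel. g x * \<phi> x)"
      using LINT_I_primitive_by_parts[OF gi dphi rep' primitive_deriv_test_fun[OF t], of 0] by simp
    finally show ?thesis by simp
  qed
  obtain K where "AE x in lborel. x \<in> Iopen \<longrightarrow> h x = K" using du_Bois_Reymond[OF hi hyp] by blast
  then have "AE x in lborel. x \<in> Iopen \<longrightarrow> U x = K + primitive g x"
    by (rule AE_mp[OF _ AE_I2]) (auto simp: h_def)
  then show ?thesis by blast
qed

lemma L2_weak_deriv_continuous_primitive:
  assumes U: "continuous_on {-1..1} U" and w: "L2_weak_deriv U g" and x: "x \<in> {-1..1}"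
  shows "U x = U (-1) + primitive g x"
proof -
  obtain c where ae: "AE x in lborel. x \<in> Iopen \<longrightarrow> U x = c + primitive g x" using L2_weak_deriv_AE_primitive[OF w] by blast
  have gi: "integrable_I g" using w L2I_imp_integrable_I by (auto simp: L2_weak_deriv_def)
  define D where "D y = U y - (c + primitive g y)" for y
  have cD: "continuous_on {-1..1} D" unfolding D_def[abs_def]
    using U continuous_on_primitive[OF gi] by (intro continuous_intros)
  have closedC: "closed {y \<in> {-1..1}. D y = 0}"
    by (rule continuous_closed_preimage_constant[OF cD]) simp
  have aeC: "AE y \<in> Iopen in lebesgue. y \<in> {y \<in> {-1..1}. D y = 0}"
    using AE_completion[OF ae] by (rule AE_mp) (auto simp: D_def intro!: AE_I2)
  have zI: "D y = 0" if "y \<in> Iopen" for y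
    using mem_closed_if_AE_lebesgue_open[OF _ closedC aeC that] by simp
  have zall: "D y = 0" if "y \<in> {-1..1}" for y
    using continuous_constant_on_closure[of Iopen D 0 y] cD zI that by simp
  have "D (-1) = 0" using zall by simp
  then have "c = U (-1)" by (simp add: D_def)
  with zall[OF x] show ?thesis by (simp add: D_def)
qed


section \<open>Regularity of the reduced solution and of weak solutions\<close>

lemma L2_weak_deriv2_continuous_deriv:
  assumes cf: "continuous_on {-1..1} f" and w1: "L2_weak_deriv f f1" and w2: "L2_weak_deriv f1 f2"
  obtains F1 where "continuous_on {-1..1} F1" "\<And>x. x \<in> Iopen \<Longrightarrow> (f has_real_derivative F1 x) (at x)"
    "\<And>x. x \<in> {-1..1} \<Longrightarrow> F1 x = F1 (-1) + primitive f2 x" "L2_weak_deriv f F1"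
proof -
  obtain c where ae: "AE x in lborel. x \<in> Iopen \<longrightarrow> f1 x = c + primitive f2 x"
    using L2_weak_deriv_AE_primitive[OF w2] by blast
  have "integrable_I f2" using w2 by (simp add: L2_weak_deriv_def L2I_imp_integrable_I)
  define F1 where "F1 x = c + primitive f2 x" for x
  have cF1: "continuous_on {-1..1} F1"
    unfolding F1_def[abs_def] using continuous_on_primitive[OF \<open>integrable_I f2\<close>] by (intro continuous_intros)
  have wF: "L2_weak_deriv f F1"
    using ae by (intro L2_weak_deriv_cong_AE[OF w1 _ L2I_continuous[OF cF1]]) (simp add: F1_def)
  have der: "(f has_real_derivative F1 x) (at x)" if x: "x \<in> Iopen" for x
  proof -
    have "((\<lambda>y. f (-1) + primitive F1 y) has_real_derivative F1 x) (at x)"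
      using DERIV_add[OF DERIV_const primitive_has_real_derivative[OF cF1 x]] by simp
    then show ?thesis
    proof (rule has_field_derivative_transform_within_open[where S=Iopen])
      fix y :: real assume "y \<in> Iopen"
      then show "f (-1) + primitive F1 y = f y"
        using L2_weak_deriv_continuous_primitive[OF cf wF, of y] by simp
    qed (use x in auto)
  qed
  have "F1 x = F1 (-1) + primitive f2 x" for x
    by (simp add: F1_def)
  with cF1 der wF show ?thesis
    using that by blast
qed

lemma C1_mult_test_fun_eq_primitive:
  assumes t: "test_fun \<phi>" and cm: "continuous_on {-1..1} m" and cm': "continuous_on {-1..1} m'"
    and dm: "\<And>x. x \<in> Iopen \<Longrightarrow> (m has_real_derivative m' x) (at x)"
  shows "\<And>x. x \<in> {-1..1} \<Longrightarrow> m x * \<phi> x = primitive (\<lambda>x. m' x * \<phi> x + m x * deriv \<phi> x) x"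
    and "primitive (\<lambda>x. m' x * \<phi> x + m x * deriv \<phi> x) 1 = 0"
proof -
  have sp: "smooth \<phi>" using t by (rule test_fun_imp_smooth)
  have cp: "continuous_on {-1..1} \<phi>" "continuous_on {-1..1} (deriv \<phi>)"
    using smooth_imp_continuous_on sp smooth_deriv by blast+
  have "((\<lambda>x. m x * \<phi> x) has_real_derivative m' x * \<phi> x + m x * deriv \<phi> x) (at x)" if "x \<in> Iopen" for x
    using DERIV_mult[OF dm[OF that] smooth_imp_DERIV[OF sp]] by (simp add: mult.commute)
  moreover have "\<phi> (-1) = 0" "\<phi> 1 = 0" using test_fun_boundary_values[OF t] by auto
  ultimately show rep: "m x * \<phi> x = primitive (\<lambda>x. m' x * \<phi> x + m x * deriv \<phi> x) x" if "x \<in> {-1..1}" for x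
    using eq_primitive_if_has_derivative[of "\<lambda>x. m x * \<phi> x", OF _ _ _ that] cm cm' cp
    by (simp add: continuous_intros)
  show "primitive (\<lambda>x. m' x * \<phi> x + m x * deriv \<phi> x) 1 = 0"
    using rep[of 1] \<open>\<phi> 1 = 0\<close> by simp
qed

lemma L2_weak_deriv_mult_C1:
  assumes cV: "continuous_on {-1..1} V" and k: "L2I k" and repV: "\<And>x. x \<in> {-1..1} \<Longrightarrow> V x = V (-1) + primitive k x"
    and cm: "continuous_on {-1..1} m" and dm: "\<And>x. x \<in> Iopen \<Longrightarrow> (m has_real_derivative m' x) (at x)"
    and cm': "continuous_on {-1..1} m'"
  shows "L2_weak_deriv (\<lambda>x. V x * m x) (\<lambda>x. k x * m x + V x * m' x)"
  unfolding L2_weak_deriv_def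
proof (intro conjI allI impI)
  show "L2I (\<lambda>x. V x * m x)" using cV cm by (intro L2I_continuous continuous_intros)
  have "L2I (\<lambda>x. m x * k x)" by (rule L2I_mult_continuous[OF k cm])
  then have "L2I (\<lambda>x. k x * m x)" by (simp add: mult.commute)
  moreover have "L2I (\<lambda>x. V x * m' x)" using cV cm' by (intro L2I_continuous continuous_intros)
  ultimately show "L2I (\<lambda>x. k x * m x + V x * m' x)" by (rule L2I_add)
  fix \<phi> assume t: "test_fun \<phi>"
  have cp: "continuous_on {-1..1} \<phi>" "continuous_on {-1..1} (deriv \<phi>)"
    using t test_fun_continuous_on test_fun_deriv by blast+
  define dps where "dps x = m' x * \<phi> x + m x * deriv \<phi> x" for x
  have ki: "integrable_I k" using k by (rule L2I_imp_integrable_I)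
  have dpsi: "integrable_I dps"
    unfolding dps_def[abs_def] using cm cm' cp by (intro continuous_imp_integrable_I continuous_intros)
  have "(LINT x:Iopen|lborel. V x * m' x * \<phi> x + V x * m x * deriv \<phi> x)
      = (LINT x:Iopen|lborel. (V (-1) + primitive k x) * dps x)"
  proof (rule LINT_I_cong)
    fix x :: real assume "x \<in> Iopen"
    then have "V (-1) + primitive k x = V x" using repV[of x] by simp
    then show "V x * m' x * \<phi> x + V x * m x * deriv \<phi> x = (V (-1) + primitive k x) * dps x"
      by (simp add: dps_def algebra_simps)
  qed
  also have "\<dots> = - (LINT x:Iopen|lborel. k x * (m x * \<phi> x))"
    using C1_mult_test_fun_eq_primitive[OF t cm cm' dm] unfolding dps_def[symmetric]
    by (intro LINT_I_primitive_by_parts[OF ki dpsi]) auto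
  finally have "(LINT x:Iopen|lborel. V x * m' x * \<phi> x) + (LINT x:Iopen|lborel. V x * m x * deriv \<phi> x)
      = - (LINT x:Iopen|lborel. k x * m x * \<phi> x)"
    using cV cm cm' cp
    by (simp add: mult.assoc set_integral_add continuous_imp_integrable_I continuous_intros)
  moreover have "integrable_I (\<lambda>x. k x * m x * \<phi> x)"
    using integrable_I_mult_continuous[OF ki, of "\<lambda>x. m x * \<phi> x"] cm cp
    by (simp add: continuous_on_mult mult_ac)
  moreover have "integrable_I (\<lambda>x. V x * m' x * \<phi> x)"
    using cV cm' cp by (intro continuous_imp_integrable_I continuous_intros)
  ultimately show "(LINT x:Iopen|lborel. V x * m x * deriv \<phi> x) = - (LINT x:Iopen|lborel. (k x * m x + V x * m' x) * \<phi> x)"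
    by (simp add: distrib_right set_integral_add)
qed

lemma L2_weak_deriv_C1_quotient_deriv:
  assumes cf: "continuous_on {-1..1} f" and cF1: "continuous_on {-1..1} F1" and Lf2: "L2I f2"
    and dF: "\<And>x. x \<in> Iopen \<Longrightarrow> (f has_real_derivative F1 x) (at x)"
    and rF: "\<And>x. x \<in> {-1..1} \<Longrightarrow> F1 x = F1 (-1) + primitive f2 x"
    and cb: "continuous_on {-1..1} b" and cB1: "continuous_on {-1..1} B1" and Lb2: "L2I b2"
    and dB: "\<And>x. x \<in> Iopen \<Longrightarrow> (b has_real_derivative B1 x) (at x)"
    and rB: "\<And>x. x \<in> {-1..1} \<Longrightarrow> B1 x = B1 (-1) + primitive b2 x"
    and bnz: "\<And>x. x \<in> {-1..1} \<Longrightarrow> b x \<noteq> 0"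
  shows "\<exists>q2. L2_weak_deriv (\<lambda>x. (F1 x * b x - f x * B1 x) / (b x * b x)) q2"
proof -
  have bbnz: "b x * b x \<noteq> 0" "b x * b x * (b x * b x) \<noteq> 0" if "x \<in> {-1..1}" for x
    using bnz[OF that] by simp_all
  define m1 where "m1 x = 1 / b x" for x
  define m1' where "m1' x = (0 * b x - 1 * B1 x) / (b x * b x)" for x
  define m2 where "m2 x = f x / (b x * b x)" for x
  define m2' where "m2' x = (F1 x * (b x * b x) - f x * (B1 x * b x + B1 x * b x)) / (b x * b x * (b x * b x))" for x
  have cm1: "continuous_on {-1..1} m1" unfolding m1_def[abs_def]
    by (rule continuous_on_divide) (use cb bnz in \<open>auto intro!: continuous_intros\<close>)
  have cm1': "continuous_on {-1..1} m1'" unfolding m1'_def[abs_def]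
    by (rule continuous_on_divide) (use cb cB1 bbnz in \<open>auto intro!: continuous_intros\<close>)
  have cm2: "continuous_on {-1..1} m2" unfolding m2_def[abs_def]
    by (rule continuous_on_divide) (use cf cb bbnz in \<open>auto intro!: continuous_intros\<close>)
  have cm2': "continuous_on {-1..1} m2'" unfolding m2'_def[abs_def]
    by (rule continuous_on_divide) (use cf cb cF1 cB1 bbnz in \<open>auto intro!: continuous_intros\<close>)
  have dm1: "(m1 has_real_derivative m1' x) (at x)" if x: "x \<in> Iopen" for x
    unfolding m1_def[abs_def] m1'_def by (rule DERIV_divide[OF DERIV_const]) (use dB x bnz in auto)
  have dbb: "((\<lambda>x. b x * b x) has_real_derivative B1 x * b x + B1 x * b x) (at x)" if x: "x \<in> Iopen" for x
    using DERIV_mult[OF dB[OF x] dB[OF x]] by simp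
  have dm2: "(m2 has_real_derivative m2' x) (at x)" if x: "x \<in> Iopen" for x
    unfolding m2_def[abs_def] m2'_def by (rule DERIV_divide[OF _ dbb[OF x]]) (use dF x bbnz in auto)
  have "L2_weak_deriv (\<lambda>x. F1 x * m1 x - B1 x * m2 x)
      (\<lambda>x. (f2 x * m1 x + F1 x * m1' x) - (b2 x * m2 x + B1 x * m2' x))"
    by (intro L2_weak_deriv_diff L2_weak_deriv_mult_C1 cF1 Lf2 rF cm1 dm1 cm1' cB1 Lb2 rB cm2 dm2 cm2')
  then have "L2_weak_deriv (\<lambda>x. (F1 x * b x - f x * B1 x) / (b x * b x))
      (\<lambda>x. (f2 x * m1 x + F1 x * m1' x) - (b2 x * m2 x + B1 x * m2' x))"
  proof (rule L2_weak_deriv_cong)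
    fix x :: real assume "x \<in> Iopen"
    then have "b x \<noteq> 0" using bnz by auto
    then show "F1 x * m1 x - B1 x * m2 x = (F1 x * b x - f x * B1 x) / (b x * b x)"
      by (simp add: m1_def m2_def field_simps)
  qed simp
  then show ?thesis by blast
qed

lemma H2_divide:
  assumes Hf: "H2 f" and Hb: "H2 b" and cf: "continuous_on {-1..1} f" and cb: "continuous_on {-1..1} b"
    and bpos: "\<And>x. x \<in> {-1..1} \<Longrightarrow> 0 < b x"
  shows "\<exists>q1 q2. continuous_on {-1..1} q1 \<and> L2_weak_deriv (\<lambda>x. f x / b x) q1 \<and> L2_weak_deriv q1 q2"
proof -
  obtain f1 f2 where f12: "L2_weak_deriv f f1" "L2_weak_deriv f1 f2"
    using Hf unfolding H2_def H1_def by blast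
  obtain b1 b2 where b12: "L2_weak_deriv b b1" "L2_weak_deriv b1 b2"
    using Hb unfolding H2_def H1_def by blast
  obtain F1 where cF1: "continuous_on {-1..1} F1" and dF: "\<And>x. x \<in> Iopen \<Longrightarrow> (f has_real_derivative F1 x) (at x)"
    and rF: "\<And>x. x \<in> {-1..1} \<Longrightarrow> F1 x = F1 (-1) + primitive f2 x"
    using L2_weak_deriv2_continuous_deriv[OF cf f12] by metis
  obtain B1 where cB1: "continuous_on {-1..1} B1" and dB: "\<And>x. x \<in> Iopen \<Longrightarrow> (b has_real_derivative B1 x) (at x)"
    and rB: "\<And>x. x \<in> {-1..1} \<Longrightarrow> B1 x = B1 (-1) + primitive b2 x"
    using L2_weak_deriv2_continuous_deriv[OF cb b12] by metis
  have bnz: "b x \<noteq> 0" if "x \<in> {-1..1}" for x using bpos[OF that] by simp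
  define q1 where "q1 x = (F1 x * b x - f x * B1 x) / (b x * b x)" for x
  have cq1: "continuous_on {-1..1} q1" unfolding q1_def[abs_def]
    by (rule continuous_on_divide) (use cF1 cb cf cB1 bnz in \<open>auto intro!: continuous_intros\<close>)
  have cq: "continuous_on {-1..1} (\<lambda>x. f x / b x)"
    by (rule continuous_on_divide[OF cf cb]) (use bnz in auto)
  have dq: "((\<lambda>x. f x / b x) has_real_derivative q1 x) (at x)" if x: "x \<in> Iopen" for x
    unfolding q1_def by (rule DERIV_divide) (use dF dB x bnz in auto)
  have "L2_weak_deriv (\<lambda>x. f x / b x) q1"
  proof (rule L2_weak_deriv_primitive[OF L2I_continuous[OF cq1]])
    fix x :: real assume "x \<in> Iopen"
    then show "f x / b x = f (-1) / b (-1) + primitive q1 x"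
      by (intro eq_primitive_if_has_derivative[OF cq dq cq1]) auto
  qed
  moreover obtain q2 where "L2_weak_deriv q1 q2"
    unfolding q1_def[abs_def] using f12(2) b12(2)
    by (metis L2_weak_deriv_C1_quotient_deriv[OF cf cF1 _ dF rF cb cB1 _ dB rB bnz] L2_weak_deriv_def)
  ultimately show ?thesis using cq1 by blast
qed

lemma weak_eq_L2_weak_deriv2:
  assumes weq: "weak_eq \<epsilon> b F u" and wu: "L2_weak_deriv u gu"
    and cu: "continuous_on {-1..1} u" and cb: "continuous_on {-1..1} b" and cF: "continuous_on {-1..1} F"
    and e: "\<epsilon> \<noteq> 0"
  shows "L2_weak_deriv gu (\<lambda>x. (b x * u x - F x) / \<epsilon>\<^sup>2)"
  unfolding L2_weak_deriv_def
proof (intro conjI allI impI)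
  show "L2I gu" using wu by (simp add: L2_weak_deriv_def)
  show "L2I (\<lambda>x. (b x * u x - F x) / \<epsilon>\<^sup>2)"
    by (rule L2I_continuous) (use cu cb cF e in \<open>auto intro!: continuous_intros\<close>)
  fix \<phi> assume t: "test_fun \<phi>"
  have cp: "continuous_on {-1..1} \<phi>" by (rule test_fun_continuous_on[OF t])
  have Lgu: "L2I gu" using wu by (simp add: L2_weak_deriv_def)
  have W: "(LINT x:Iopen|lborel. \<epsilon>^2 * gu x * deriv \<phi> x + b x * u x * \<phi> x) = (LINT x:Iopen|lborel. F x * \<phi> x)"
    using weq test_fun_H10[OF t] test_fun_L2_weak_deriv[OF t] wu unfolding weak_eq_def by blast
  have i1: "integrable_I (\<lambda>x. \<epsilon>^2 * gu x * deriv \<phi> x)"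
    using set_integrable_mult_right[OF L2I_mult_test_fun_integrable_I[OF Lgu test_fun_deriv[OF t]], of "\<epsilon>^2"] by (simp add: mult.assoc)
  have i2: "integrable_I (\<lambda>x. b x * u x * \<phi> x)" by (rule continuous_imp_integrable_I) (use cu cb cp in \<open>intro continuous_intros\<close>)
  have i3: "integrable_I (\<lambda>x. F x * \<phi> x)" by (rule continuous_imp_integrable_I) (use cF cp in \<open>intro continuous_intros\<close>)
  have "\<epsilon>^2 * (LINT x:Iopen|lborel. gu x * deriv \<phi> x) + (LINT x:Iopen|lborel. b x * u x * \<phi> x) = (LINT x:Iopen|lborel. F x * \<phi> x)"
    using W set_integral_add(2)[OF i1 i2] by (simp add: mult.assoc)
  then have A: "(LINT x:Iopen|lborel. gu x * deriv \<phi> x) = ((LINT x:Iopen|lborel. F x * \<phi> x) - (LINT x:Iopen|lborel. b x * u x * \<phi> x)) / \<epsilon>^2"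
    using e by (simp add: field_simps)
  have "(LINT x:Iopen|lborel. (b x * u x - F x) / \<epsilon>\<^sup>2 * \<phi> x) = (LINT x:Iopen|lborel. (1 / \<epsilon>^2) * (b x * u x * \<phi> x - F x * \<phi> x))"
    by (rule LINT_I_cong) (simp add: field_simps)
  also have "\<dots> = (1 / \<epsilon>^2) * ((LINT x:Iopen|lborel. b x * u x * \<phi> x) - (LINT x:Iopen|lborel. F x * \<phi> x))"
    using set_integral_diff(2)[OF i2 i3] by simp
  finally have B: "(LINT x:Iopen|lborel. (b x * u x - F x) / \<epsilon>\<^sup>2 * \<phi> x) = (1 / \<epsilon>^2) * ((LINT x:Iopen|lborel. b x * u x * \<phi> x) - (LINT x:Iopen|lborel. F x * \<phi> x))" .
  have ar: "\<And>X P Q R::real. X = (Q - P) / \<epsilon>^2 \<Longrightarrow> R = (1 / \<epsilon>^2) * (P - Q) \<Longrightarrow> X = - R"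
    by (simp add: diff_divide_distrib)
  show "(LINT x:Iopen|lborel. gu x * deriv \<phi> x) = - (LINT x:Iopen|lborel. (b x * u x - F x) / \<epsilon>\<^sup>2 * \<phi> x)"
    by (rule ar[OF A B])
qed



lemma weak_eqD:
  assumes "weak_eq \<epsilon> b F u" "L2_weak_deriv u u'" "H10 \<phi>" "L2_weak_deriv \<phi> \<phi>'"
  shows "(LINT x:Iopen|lborel. \<epsilon>^2 * u' x * \<phi>' x + b x * u x * \<phi> x) = (LINT x:Iopen|lborel. F x * \<phi> x)"
  using assms unfolding weak_eq_def by blast

lemma le_if_square_le_mult:
  fixes e c :: real
  assumes "0 \<le> e" "0 \<le> c" "e\<^sup>2 \<le> c * e"
  shows "e \<le> c"
proof (cases "e = 0")
  case False
  with assms have "e * e \<le> c * e" "0 < e" by (simp_all add: power2_eq_square)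
  then show ?thesis by (rule mult_right_le_imp_le)
qed (use assms in simp)

lemma square_diff_le: "(s - t)\<^sup>2 \<le> 2 * s\<^sup>2 + 2 * t\<^sup>2" for s t :: real
proof -
  have "0 \<le> (s + t)\<^sup>2" by simp
  then show ?thesis by (simp add: power2_sum power2_diff)
qed


section \<open>The remainder\<close>

context
  fixes b f u u' uBLm uBLm' uBLp uBLp' u0' u0'' :: "real \<Rightarrow> real" and \<epsilon> lb ub :: real
  assumes continuous_b: "continuous_on {-1..1} b" and continuous_f: "continuous_on {-1..1} f"
    and lb: "0 < lb" and b_bounds: "\<forall>x\<in>{-1..1}. lb \<le> b x \<and> b x \<le> ub"
    and continuous_u0': "continuous_on {-1..1} u0'"
    and u0': "L2_weak_deriv (\<lambda>x. f x / b x) u0'" and u0'': "L2_weak_deriv u0' u0''"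
    and eps: "0 < \<epsilon>" and data: "problem_data \<epsilon> b f u uBLm uBLp"
    and u': "L2_weak_deriv u u'" and uBLm': "L2_weak_deriv uBLm uBLm'" and uBLp': "L2_weak_deriv uBLp uBLp'"
begin

abbreviation (input) uR :: "real \<Rightarrow> real" where
  "uR \<equiv> remainder b f u uBLm uBLp"

definition remainder_deriv :: "real \<Rightarrow> real" where
  "remainder_deriv x = u' x - u0' x - uBLm' x - uBLp' x"

definition remainder_deriv2 :: "real \<Rightarrow> real" where
  "remainder_deriv2 x = b x * uR x / \<epsilon>\<^sup>2 - u0'' x"

lemma b_nonzero: "x \<in> {-1..1} \<Longrightarrow> b x \<noteq> 0"
  using b_bounds[rule_format, of x] lb by auto

lemma continuous_on_remainder: "continuous_on {-1..1} uR"
  using data b_nonzero continuous_b continuous_f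
  unfolding problem_data_def remainder_def[abs_def] by (auto intro!: continuous_intros)

lemma remainder_boundary_values: "uR (-1) = 0" "uR 1 = 0"
  using data by (simp_all add: problem_data_def remainder_def)

lemma L2_weak_deriv_remainder: "L2_weak_deriv uR remainder_deriv"
  unfolding remainder_def[abs_def] remainder_deriv_def[abs_def]
  by (intro L2_weak_deriv_diff u' u0' uBLm' uBLp')

lemma H10_remainder: "H10 uR"
  unfolding H10_def H1_def
  using L2_weak_deriv_remainder continuous_on_remainder remainder_boundary_values by blast

lemma L2_weak_deriv_remainder_deriv: "L2_weak_deriv remainder_deriv remainder_deriv2"
proof -
  have "\<epsilon> \<noteq> 0" using eps by simp
  then have "L2_weak_deriv u' (\<lambda>x. (b x * u x - f x) / \<epsilon>\<^sup>2)"
    "L2_weak_deriv uBLm' (\<lambda>x. (b x * uBLm x - 0) / \<epsilon>\<^sup>2)"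
    "L2_weak_deriv uBLp' (\<lambda>x. (b x * uBLp x - 0) / \<epsilon>\<^sup>2)"
    using weak_eq_L2_weak_deriv2[OF _ u' _ continuous_b continuous_f]
      weak_eq_L2_weak_deriv2[of \<epsilon> b "\<lambda>_. 0", OF _ uBLm' _ continuous_b]
      weak_eq_L2_weak_deriv2[of \<epsilon> b "\<lambda>_. 0", OF _ uBLp' _ continuous_b]
      data unfolding problem_data_def by simp_all
  then have "L2_weak_deriv remainder_deriv (\<lambda>x. (b x * u x - f x) / \<epsilon>\<^sup>2 - u0'' x
      - (b x * uBLm x - 0) / \<epsilon>\<^sup>2 - (b x * uBLp x - 0) / \<epsilon>\<^sup>2)"
    unfolding remainder_deriv_def[abs_def] by (intro L2_weak_deriv_diff u0'')
  then show ?thesis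
  proof (rule L2_weak_deriv_cong)
    fix x :: real assume "x \<in> Iopen"
    then have "b x \<noteq> 0" using b_nonzero by auto
    with eps show "(b x * u x - f x) / \<epsilon>\<^sup>2 - u0'' x - (b x * uBLm x - 0) / \<epsilon>\<^sup>2
        - (b x * uBLp x - 0) / \<epsilon>\<^sup>2 = remainder_deriv2 x"
      by (simp add: remainder_deriv2_def remainder_def field_simps)
  qed simp
qed

lemma integrable_remainder_energy:
  "integrable_I (\<lambda>x. \<epsilon>\<^sup>2 * (remainder_deriv x)\<^sup>2 + b x * (uR x)\<^sup>2)"
proof (rule set_integral_add(1))
  have "L2I remainder_deriv"
    using L2_weak_deriv_remainder by (simp add: L2_weak_deriv_def)
  then show "integrable_I (\<lambda>x. \<epsilon>\<^sup>2 * (remainder_deriv x)\<^sup>2)"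
    by (intro set_integrable_mult_right L2I_imp_integrable_I_square)
  show "integrable_I (\<lambda>x. b x * (uR x)\<^sup>2)"
    using continuous_b continuous_on_remainder by (intro continuous_imp_integrable_I continuous_intros)
qed

lemma remainder_energy_nonneg:
  "0 \<le> (LINT x:Iopen|lborel. \<epsilon>\<^sup>2 * (remainder_deriv x)\<^sup>2 + b x * (uR x)\<^sup>2)"
proof (rule LINT_I_nonneg)
  fix x :: real assume "x \<in> Iopen"
  then have "0 \<le> b x" using b_bounds[rule_format, of x] lb by auto
  then show "0 \<le> \<epsilon>\<^sup>2 * (remainder_deriv x)\<^sup>2 + b x * (uR x)\<^sup>2" by simp
qed

lemma enorm_remainder_nonneg: "0 \<le> enorm \<epsilon> b uR remainder_deriv"
  unfolding enorm_def using remainder_energy_nonneg by simp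

text \<open>Testing the three weak equations with \<open>uR\<close> itself: as \<open>b u\<^sub>0 = f\<close>, only the term
  \<open>\<epsilon>\<^sup>2 u\<^sub>0' uR'\<close> survives on the right.\<close>

lemma remainder_energy_eq:
  "(LINT x:Iopen|lborel. \<epsilon>\<^sup>2 * (remainder_deriv x)\<^sup>2 + b x * (uR x)\<^sup>2)
     = - (\<epsilon>\<^sup>2 * (LINT x:Iopen|lborel. u0' x * remainder_deriv x))"
proof -
  let ?gR = remainder_deriv
  have u: "continuous_on {-1..1} u" "weak_eq \<epsilon> b f u"
    and m: "continuous_on {-1..1} uBLm" "weak_eq \<epsilon> b (\<lambda>_. 0) uBLm"
    and p: "continuous_on {-1..1} uBLp" "weak_eq \<epsilon> b (\<lambda>_. 0) uBLp"
    using data unfolding problem_data_def by auto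
  have L2: "L2I ?gR" "L2I u'" "L2I uBLm'" "L2I uBLp'" "L2I u0'"
    using L2_weak_deriv_remainder u' uBLm' uBLp' u0'' by (auto simp: L2_weak_deriv_def)
  have E1: "(LINT x:Iopen|lborel. \<epsilon>\<^sup>2 * u' x * ?gR x + b x * u x * uR x) = (LINT x:Iopen|lborel. f x * uR x)"
    by (rule weak_eqD[OF u(2) u' H10_remainder L2_weak_deriv_remainder])
  have E2: "(LINT x:Iopen|lborel. \<epsilon>\<^sup>2 * uBLm' x * ?gR x + b x * uBLm x * uR x) = 0"
    using weak_eqD[OF m(2) uBLm' H10_remainder L2_weak_deriv_remainder] by simp
  have E3: "(LINT x:Iopen|lborel. \<epsilon>\<^sup>2 * uBLp' x * ?gR x + b x * uBLp x * uR x) = 0"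
    using weak_eqD[OF p(2) uBLp' H10_remainder L2_weak_deriv_remainder] by simp
  have integrable: "integrable_I (\<lambda>x. \<epsilon>\<^sup>2 * g x * ?gR x + b x * v x * uR x)"
    if "L2I g" "continuous_on {-1..1} v" for g v
  proof (rule set_integral_add(1))
    show "integrable_I (\<lambda>x. \<epsilon>\<^sup>2 * g x * ?gR x)"
      using set_integrable_mult_right[OF L2I_mult_integrable_I[OF that(1) L2(1)], of "\<epsilon>\<^sup>2"]
      by (simp add: mult.assoc)
    show "integrable_I (\<lambda>x. b x * v x * uR x)"
      using that(2) continuous_b continuous_on_remainder
      by (intro continuous_imp_integrable_I continuous_intros)
  qed
  have integrable_f: "integrable_I (\<lambda>x. f x * uR x)"
    using continuous_f continuous_on_remainder by (intro continuous_imp_integrable_I continuous_intros)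
  have integrable_energy: "integrable_I (\<lambda>x. \<epsilon>\<^sup>2 * (?gR x)\<^sup>2 + b x * (uR x)\<^sup>2)"
    by (rule integrable_remainder_energy)
  have "(LINT x:Iopen|lborel. (\<epsilon>\<^sup>2 * (?gR x)\<^sup>2 + b x * (uR x)\<^sup>2) + \<epsilon>\<^sup>2 * (u0' x * ?gR x)) =
     (LINT x:Iopen|lborel. ((\<epsilon>\<^sup>2 * u' x * ?gR x + b x * u x * uR x) - (\<epsilon>\<^sup>2 * uBLm' x * ?gR x + b x * uBLm x * uR x)
        - (\<epsilon>\<^sup>2 * uBLp' x * ?gR x + b x * uBLp x * uR x)) - f x * uR x)"
  proof (rule LINT_I_cong)
    fix x :: real assume "x \<in> Iopen"
    then have "b x \<noteq> 0" using b_nonzero by auto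
    then show "(\<epsilon>\<^sup>2 * (?gR x)\<^sup>2 + b x * (uR x)\<^sup>2) + \<epsilon>\<^sup>2 * (u0' x * ?gR x) =
     ((\<epsilon>\<^sup>2 * u' x * ?gR x + b x * u x * uR x) - (\<epsilon>\<^sup>2 * uBLm' x * ?gR x + b x * uBLm x * uR x)
        - (\<epsilon>\<^sup>2 * uBLp' x * ?gR x + b x * uBLp x * uR x)) - f x * uR x"
      by (simp add: remainder_deriv_def remainder_def power2_eq_square field_simps)
  qed
  also have "\<dots> = 0"
    using E1 E2 E3 integrable[OF L2(2) u(1)] integrable[OF L2(3) m(1)] integrable[OF L2(4) p(1)] integrable_f
    by (simp add: set_integral_diff)
  finally show ?thesis
    using set_integral_add(2)[OF integrable_energy
        set_integrable_mult_right[OF L2I_mult_integrable_I[OF L2(5) L2(1)], of "\<epsilon>\<^sup>2"]]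
    by simp
qed

lemma remainder_energy_identity:
  "(enorm \<epsilon> b uR remainder_deriv)\<^sup>2 = \<epsilon>\<^sup>2 * (LINT x:Iopen|lborel. u0'' x * uR x)"
proof -
  have primitive_uR: "uR x = primitive remainder_deriv x" if "x \<in> {-1..1}" for x
    using L2_weak_deriv_continuous_primitive[OF continuous_on_remainder L2_weak_deriv_remainder that]
      remainder_boundary_values by simp
  have integrable: "integrable_I u0''" "integrable_I remainder_deriv"
    using u0'' L2_weak_deriv_remainder by (auto simp: L2_weak_deriv_def L2I_imp_integrable_I)
  have "(LINT x:Iopen|lborel. u0' x * remainder_deriv x)
      = (LINT x:Iopen|lborel. (u0' (-1) + primitive u0'' x) * remainder_deriv x)"
  proof (rule LINT_I_cong)
    fix x :: real assume "x \<in> Iopen"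
    then have "u0' x = u0' (-1) + primitive u0'' x"
      by (intro L2_weak_deriv_continuous_primitive[OF continuous_u0' u0'']) auto
    then show "u0' x * remainder_deriv x = (u0' (-1) + primitive u0'' x) * remainder_deriv x"
      by simp
  qed
  also have "\<dots> = - (LINT x:Iopen|lborel. u0'' x * uR x)"
    using primitive_uR remainder_boundary_values
    by (intro LINT_I_primitive_by_parts[OF integrable]) auto
  finally have "(LINT x:Iopen|lborel. u0' x * remainder_deriv x) = - (LINT x:Iopen|lborel. u0'' x * uR x)" .
  then show ?thesis
    using remainder_energy_eq remainder_energy_nonneg by (simp add: enorm_def)
qed

lemma L2norm_remainder_le_enorm: "L2norm uR \<le> enorm \<epsilon> b uR remainder_deriv / sqrt lb"
proof -
  have L2: "L2I remainder_deriv" "L2I uR"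
    using L2_weak_deriv_remainder by (auto simp: L2_weak_deriv_def)
  have "lb * (LINT x:Iopen|lborel. (uR x)\<^sup>2) = (LINT x:Iopen|lborel. lb * (uR x)\<^sup>2)"
    by simp
  also have "\<dots> \<le> (LINT x:Iopen|lborel. \<epsilon>\<^sup>2 * (remainder_deriv x)\<^sup>2 + b x * (uR x)\<^sup>2)"
  proof (rule set_integral_mono)
    show "integrable_I (\<lambda>x. lb * (uR x)\<^sup>2)"
      using L2I_imp_integrable_I_square[OF L2(2)] by simp
    show "integrable_I (\<lambda>x. \<epsilon>\<^sup>2 * (remainder_deriv x)\<^sup>2 + b x * (uR x)\<^sup>2)"
      by (rule integrable_remainder_energy)
    fix x :: real assume "x \<in> Iopen"
    then have "lb * (uR x)\<^sup>2 \<le> b x * (uR x)\<^sup>2" using b_bounds by (auto intro: mult_right_mono)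
    then show "lb * (uR x)\<^sup>2 \<le> \<epsilon>\<^sup>2 * (remainder_deriv x)\<^sup>2 + b x * (uR x)\<^sup>2"
      by (simp add: add_increasing)
  qed
  finally have "lb * (L2norm uR)\<^sup>2 \<le> (enorm \<epsilon> b uR remainder_deriv)\<^sup>2"
    using remainder_energy_nonneg by (simp add: L2norm_square enorm_def)
  then have "(L2norm uR)\<^sup>2 \<le> (enorm \<epsilon> b uR remainder_deriv)\<^sup>2 / lb"
    using lb by (simp add: pos_le_divide_eq mult.commute)
  also have "\<dots> = (enorm \<epsilon> b uR remainder_deriv / sqrt lb)\<^sup>2"
    using lb by (simp add: power_divide)
  finally have "(L2norm uR)\<^sup>2 \<le> (enorm \<epsilon> b uR remainder_deriv / sqrt lb)\<^sup>2" .
  then show ?thesis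
    by (rule power2_le_imp_le) (use lb enorm_remainder_nonneg in simp)
qed

lemma enorm_remainder_le: "enorm \<epsilon> b uR remainder_deriv \<le> \<epsilon>\<^sup>2 * L2norm u0'' / sqrt lb"
proof (rule le_if_square_le_mult[OF enorm_remainder_nonneg])
  have L2: "L2I u0''" "L2I uR"
    using u0'' L2_weak_deriv_remainder by (auto simp: L2_weak_deriv_def)
  show "0 \<le> \<epsilon>\<^sup>2 * L2norm u0'' / sqrt lb"
    using lb by (simp add: L2norm_nonneg)
  have "(enorm \<epsilon> b uR remainder_deriv)\<^sup>2 \<le> \<epsilon>\<^sup>2 * (L2norm u0'' * L2norm uR)"
    unfolding remainder_energy_identity
    using abs_LINT_I_mult_le[OF L2] by (intro mult_left_mono) auto
  also have "\<dots> \<le> \<epsilon>\<^sup>2 * (L2norm u0'' * (enorm \<epsilon> b uR remainder_deriv / sqrt lb))"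
    using L2norm_remainder_le_enorm by (intro mult_left_mono) (auto simp: L2norm_nonneg)
  finally show "(enorm \<epsilon> b uR remainder_deriv)\<^sup>2 \<le> \<epsilon>\<^sup>2 * L2norm u0'' / sqrt lb * enorm \<epsilon> b uR remainder_deriv"
    by simp
qed

lemma L2norm_remainder_deriv2_le:
  "(L2norm remainder_deriv2)\<^sup>2 \<le> (2 * ub\<^sup>2 / lb\<^sup>2 + 2) * (L2norm u0'')\<^sup>2"
proof -
  have L2: "L2I remainder_deriv2" "L2I uR" "L2I u0''"
    using L2_weak_deriv_remainder_deriv L2_weak_deriv_remainder u0'' by (auto simp: L2_weak_deriv_def)
  have "(L2norm remainder_deriv2)\<^sup>2 \<le> (LINT x:Iopen|lborel. 2 * ub\<^sup>2 / \<epsilon>^4 * (uR x)\<^sup>2 + 2 * (u0'' x)\<^sup>2)"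
    unfolding L2norm_square
  proof (rule set_integral_mono)
    show "integrable_I (\<lambda>x. (remainder_deriv2 x)\<^sup>2)"
      by (rule L2I_imp_integrable_I_square[OF L2(1)])
    show "integrable_I (\<lambda>x. 2 * ub\<^sup>2 / \<epsilon>^4 * (uR x)\<^sup>2 + 2 * (u0'' x)\<^sup>2)"
      using L2I_imp_integrable_I_square[OF L2(2)] L2I_imp_integrable_I_square[OF L2(3)]
      by (intro set_integral_add(1) set_integrable_mult_right)
    fix x :: real assume "x \<in> Iopen"
    then have "(b x)\<^sup>2 \<le> ub\<^sup>2" using b_bounds[rule_format, of x] lb by (intro power_mono) auto
    then have "(b x)\<^sup>2 * (uR x)\<^sup>2 \<le> ub\<^sup>2 * (uR x)\<^sup>2" by (rule mult_right_mono) simp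
    then have "(b x * uR x / \<epsilon>\<^sup>2)\<^sup>2 \<le> ub\<^sup>2 / \<epsilon>^4 * (uR x)\<^sup>2"
      using eps by (simp add: power_mult_distrib power_divide field_simps)
    moreover have "(remainder_deriv2 x)\<^sup>2 \<le> 2 * (b x * uR x / \<epsilon>\<^sup>2)\<^sup>2 + 2 * (u0'' x)\<^sup>2"
      unfolding remainder_deriv2_def by (rule square_diff_le)
    ultimately show "(remainder_deriv2 x)\<^sup>2 \<le> 2 * ub\<^sup>2 / \<epsilon>^4 * (uR x)\<^sup>2 + 2 * (u0'' x)\<^sup>2"
      by linarith
  qed
  also have "\<dots> = 2 * ub\<^sup>2 / \<epsilon>^4 * (L2norm uR)\<^sup>2 + 2 * (L2norm u0'')\<^sup>2"
    using L2I_imp_integrable_I_square[OF L2(2)] L2I_imp_integrable_I_square[OF L2(3)]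
    by (simp add: L2norm_square set_integral_add set_integrable_mult_right)
  also have "\<dots> \<le> 2 * ub\<^sup>2 / \<epsilon>^4 * (\<epsilon>\<^sup>2 * L2norm u0'' / lb)\<^sup>2 + 2 * (L2norm u0'')\<^sup>2"
  proof -
    have "L2norm uR \<le> \<epsilon>\<^sup>2 * L2norm u0'' / lb"
      using L2norm_remainder_le_enorm divide_right_mono[OF enorm_remainder_le, of "sqrt lb"] lb
      by (simp add: divide_divide_eq_left)
    then show ?thesis
      by (intro add_right_mono mult_left_mono power_mono) (auto simp: L2norm_nonneg)
  qed
  also have "\<dots> = (2 * ub\<^sup>2 / lb\<^sup>2 + 2) * (L2norm u0'')\<^sup>2"
    using eps lb by (simp add: power_mult_distrib power_divide field_simps)
  finally show ?thesis .
qed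

end


section \<open>Piecewise linear interpolation\<close>

lemma quasi_uniformD:
  assumes "quasi_uniform \<kappa> N xs"
  shows "1 \<le> N" "xs 0 = -1" "xs N = 1" "\<And>i. i < N \<Longrightarrow> xs i < xs (Suc i)"
    "\<And>i j. i < N \<Longrightarrow> j < N \<Longrightarrow> xs (Suc i) - xs i \<le> \<kappa> * (xs (Suc j) - xs j)"
  using assms unfolding quasi_uniform_def by auto

lemma increasing_nodes_mono:
  fixes xs :: "nat \<Rightarrow> real"
  assumes inc: "\<And>i. i < N \<Longrightarrow> xs i < xs (Suc i)"
  shows "i \<le> j \<Longrightarrow> j \<le> N \<Longrightarrow> xs i \<le> xs j"
proof (induction j)
  case 0 then show ?case by simp
next
  case (Suc j)
  show ?case
  proof (cases "i = Suc j")
    case True then show ?thesis by simp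
  next
    case False
    then have "i \<le> j" using Suc.prems by simp
    then have "xs i \<le> xs j" using Suc by simp
    also have "xs j < xs (Suc j)" using inc Suc.prems by simp
    finally show ?thesis by simp
  qed
qed

lemma increasing_nodes_cover:
  fixes xs :: "nat \<Rightarrow> real"
  assumes inc: "\<And>i. i < N \<Longrightarrow> xs i < xs (Suc i)"
  shows "1 \<le> n \<Longrightarrow> n \<le> N \<Longrightarrow> xs 0 \<le> x \<Longrightarrow> x \<le> xs n \<Longrightarrow> \<exists>i<n. xs i \<le> x \<and> x \<le> xs (Suc i)"
proof (induction n)
  case 0 then show ?case by simp
next
  case (Suc n)
  show ?case
  proof (cases "x \<le> xs n \<and> 1 \<le> n")
    case True
    then obtain i where "i < n" "xs i \<le> x \<and> x \<le> xs (Suc i)" using Suc by auto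
    then show ?thesis by (intro exI[of _ i]) auto
  next
    case False
    then have "xs n \<le> x \<or> n = 0" by auto
    then have "xs n \<le> x" using Suc.prems by auto
    then show ?thesis using Suc.prems by (intro exI[of _ n]) auto
  qed
qed

lemma quasi_uniform_mesh_le:
  assumes q: "quasi_uniform \<kappa> N xs" and i: "i < N"
  shows "xs (Suc i) - xs i \<le> 2 * \<kappa> / real N"
proof -
  note f = quasi_uniformD[OF q]
  have "real N * (xs (Suc i) - xs i) = (\<Sum>j<N. xs (Suc i) - xs i)" by simp
  also have "\<dots> \<le> (\<Sum>j<N. \<kappa> * (xs (Suc j) - xs j))"
    by (rule sum_mono) (use f(5) i in auto)
  also have "\<dots> = \<kappa> * (xs N - xs 0)" by (simp add: sum_distrib_left[symmetric] sum_lessThan_telescope)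
  also have "\<dots> = 2 * \<kappa>" using f by simp
  finally show ?thesis using f(1) by (simp add: field_simps)
qed

lemma pl_interp_on_element:
  fixes xs :: "nat \<Rightarrow> real"
  assumes inc: "\<And>i. i < N \<Longrightarrow> xs i < xs (Suc i)" and i: "i < N" and x: "xs i \<le> x" "x \<le> xs (Suc i)"
  shows "pl_interp N xs v x = v (xs i) + (v (xs (Suc i)) - v (xs i)) * (x - xs i) / (xs (Suc i) - xs i)"
proof -
  have ex: "\<exists>i<N. xs i \<le> x \<and> x \<le> xs (Suc i)" using i x by blast
  define j where "j = (SOME j. j < N \<and> xs j \<le> x \<and> x \<le> xs (Suc j))"
  have j: "j < N" "xs j \<le> x" "x \<le> xs (Suc j)" using someI_ex[OF ex] unfolding j_def by auto
  have val: "pl_interp N xs v x = v (xs j) + (v (xs (Suc j)) - v (xs j)) * (x - xs j) / (xs (Suc j) - xs j)"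
    unfolding pl_interp_def using ex by (simp add: j_def Let_def)
  have hj: "xs j < xs (Suc j)" using inc j by simp
  have hi: "xs i < xs (Suc i)" using inc i by simp
  show ?thesis
  proof (cases "j = i")
    case True then show ?thesis using val by simp
  next
    case False
    show ?thesis
    proof (cases "j < i")
      case True
      have "xs (Suc j) \<le> xs i" using increasing_nodes_mono[where N=N and xs=xs and i="Suc j" and j=i, OF inc] True i by simp
      then have e: "x = xs i" "x = xs (Suc j)" using x j by auto
      then show ?thesis using val hj by simp
    next
      case False2: False
      then have "i < j" using False by simp
      have "xs (Suc i) \<le> xs j" using increasing_nodes_mono[where N=N and xs=xs and i="Suc i" and j=j, OF inc] \<open>i < j\<close> j by simp
      then have e: "x = xs (Suc i)" "x = xs j" using x j by auto
      then show ?thesis using val hi by simp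
    qed
  qed
qed

context
  fixes v v' v'' :: "real \<Rightarrow> real" and N :: nat and xs :: "nat \<Rightarrow> real"
  assumes inc: "\<And>i. i < N \<Longrightarrow> xs i < xs (Suc i)" and x0: "xs 0 = -1" and xN: "xs N = 1" and N1: "1 \<le> N"
    and continuous_v': "continuous_on {-1..1} v'" and L2I_v'': "L2I v''"
    and v'_eq_primitive: "\<And>x. x \<in> {-1..1} \<Longrightarrow> v' x = v' (-1) + primitive v'' x"
    and v_eq_primitive: "\<And>x. x \<in> {-1..1} \<Longrightarrow> v x = v (-1) + primitive v' x"
begin

definition slope :: "nat \<Rightarrow> real" where
  "slope i = (v (xs (Suc i)) - v (xs i)) / (xs (Suc i) - xs i)"

definition slope_fun :: "real \<Rightarrow> real" where
  "slope_fun x = (\<Sum>i<N. slope i * indicator {xs i..<xs (Suc i)} x)"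

definition interp_error_deriv :: "real \<Rightarrow> real" where
  "interp_error_deriv x = v' x - slope_fun x"

lemma node_mono: "i \<le> j \<Longrightarrow> j \<le> N \<Longrightarrow> xs i \<le> xs j"
  by (rule increasing_nodes_mono[where N=N and xs=xs, OF inc])

lemma node_range: "i \<le> N \<Longrightarrow> xs i \<in> {-1..1}"
  using node_mono[of 0 i] node_mono[of i N] x0 xN by auto

lemma element_subset: "i < N \<Longrightarrow> {xs i..xs (Suc i)} \<subseteq> {-1..1}"
  using node_range[of i] node_range[of "Suc i"] by auto

lemma slope_fun_on_element:
  assumes i: "i < N" and x: "xs i \<le> x" "x < xs (Suc i)"
  shows "slope_fun x = slope i"
proof -
  have "(\<Sum>j<N. slope j * indicator {xs j..<xs (Suc j)} x) = (\<Sum>j<N. if j = i then slope i else 0)"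
  proof (rule sum.cong[OF refl])
    fix j assume j: "j \<in> {..<N}"
    show "slope j * indicator {xs j..<xs (Suc j)} x = (if j = i then slope i else 0)"
    proof (cases "j = i")
      case True then show ?thesis using x by simp
    next
      case False
      have "x \<notin> {xs j..<xs (Suc j)}"
      proof (cases "j < i")
        case True
        then have "xs (Suc j) \<le> xs i" using node_mono[of "Suc j" i] i by simp
        then show ?thesis using x by auto
      next
        case False2: False
        then have "Suc i \<le> j" using False by simp
        then have "xs (Suc i) \<le> xs j" using node_mono[of "Suc i" j] j by simp
        then show ?thesis using x by auto
      qed
      then show ?thesis using False by simp
    qed
  qed
  also have "\<dots> = slope i" using i by simp
  finally show ?thesis unfolding slope_fun_def .
qed

lemma L2I_slope_fun: "L2I slope_fun"
  unfolding slope_fun_def[abs_def] by (rule L2I_sum) (rule L2I_cmult_indicator)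

lemma L2I_interp_error_deriv: "L2I interp_error_deriv"
  unfolding interp_error_deriv_def[abs_def] by (rule L2I_diff[OF L2I_continuous[OF continuous_v'] L2I_slope_fun])

lemma integrable_I_interp_error_deriv: "integrable_I interp_error_deriv" by (rule L2I_imp_integrable_I[OF L2I_interp_error_deriv])

lemma v'_integrable_on: "-1 \<le> a \<Longrightarrow> c \<le> 1 \<Longrightarrow> v' integrable_on {a..c}"
  by (rule integrable_continuous_interval) (rule continuous_on_subset[OF continuous_v'], auto)

lemma primitive_interp_error_deriv_element:
  assumes i: "i < N" and x: "xs i \<le> x" "x \<le> xs (Suc i)"
  shows "primitive interp_error_deriv x = primitive interp_error_deriv (xs i) + (v x - v (xs i)) - slope i * (x - xs i)"
    and "integral {xs i..x} interp_error_deriv = integral {xs i..x} (\<lambda>y. v' y - slope i)"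
proof -
  have r: "xs i \<in> {-1..1}" "xs (Suc i) \<in> {-1..1}" using node_range i by auto
  then have xr: "x \<in> {-1..1}" using x by auto
  have "integral {xs i..x} interp_error_deriv = integral {xs i<..<x} interp_error_deriv" by (rule integral_open_interval_real)
  also have "\<dots> = integral {xs i<..<x} (\<lambda>y. v' y - slope i)"
  proof (rule integral_cong)
    fix y assume "y \<in> {xs i<..<x}"
    then have "xs i \<le> y" "y < xs (Suc i)" using x by auto
    then show "interp_error_deriv y = v' y - slope i" using slope_fun_on_element[OF i] by (simp add: interp_error_deriv_def)
  qed
  also have "\<dots> = integral {xs i..x} (\<lambda>y. v' y - slope i)" by (rule integral_open_interval_real[symmetric])
  finally show eq: "integral {xs i..x} interp_error_deriv = integral {xs i..x} (\<lambda>y. v' y - slope i)" .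
  have "integral {xs i..x} (\<lambda>y. v' y - slope i) = integral {xs i..x} v' - integral {xs i..x} (\<lambda>y. slope i)"
    by (rule Henstock_Kurzweil_Integration.integral_diff) (use v'_integrable_on r xr in auto)
  also have "integral {xs i..x} v' = primitive v' x - primitive v' (xs i)"
    using primitive_split[OF continuous_imp_integrable_I[OF continuous_v'], of "xs i" x] r xr x by simp
  also have "primitive v' x - primitive v' (xs i) = v x - v (xs i)" using v_eq_primitive[of x] v_eq_primitive[of "xs i"] r xr by simp
  also have "integral {xs i..x} (\<lambda>y. slope i) = slope i * (x - xs i)" using x by simp
  finally have "integral {xs i..x} interp_error_deriv = v x - v (xs i) - slope i * (x - xs i)" using eq by simp
  then show "primitive interp_error_deriv x = primitive interp_error_deriv (xs i) + (v x - v (xs i)) - slope i * (x - xs i)"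
    using primitive_split[OF integrable_I_interp_error_deriv, of "xs i" x] r xr x by simp
qed

lemma primitive_interp_error_deriv_node: "i \<le> N \<Longrightarrow> primitive interp_error_deriv (xs i) = 0"
proof (induction i)
  case 0 then show ?case using x0 by simp
next
  case (Suc i)
  then have i: "i < N" by simp
  have h: "xs i < xs (Suc i)" using inc i by simp
  have "primitive interp_error_deriv (xs (Suc i)) = primitive interp_error_deriv (xs i) + (v (xs (Suc i)) - v (xs i)) - slope i * (xs (Suc i) - xs i)"
    by (rule primitive_interp_error_deriv_element(1)[OF i]) (use h in auto)
  also have "\<dots> = 0" using Suc.IH i h by (simp add: slope_def)
  finally show ?case .
qed

lemma interp_error_eq_primitive:
  assumes x: "x \<in> {-1..1}"
  shows "v x - pl_interp N xs v x = primitive interp_error_deriv x"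
proof -
  obtain i where i: "i < N" "xs i \<le> x" "x \<le> xs (Suc i)"
    using increasing_nodes_cover[where N=N and xs=xs and n=N and x=x, OF inc] N1 x x0 xN by auto
  have h: "xs i < xs (Suc i)" using inc i by simp
  have "pl_interp N xs v x = v (xs i) + (v (xs (Suc i)) - v (xs i)) * (x - xs i) / (xs (Suc i) - xs i)"
    by (rule pl_interp_on_element[OF inc i])
  moreover have "primitive interp_error_deriv x = (v x - v (xs i)) - slope i * (x - xs i)"
    using primitive_interp_error_deriv_element(1)[OF i] primitive_interp_error_deriv_node[of i] i by simp
  ultimately show ?thesis by (simp add: slope_def)
qed

lemma L2_weak_deriv_interp_error: "L2_weak_deriv (\<lambda>x. v x - pl_interp N xs v x) interp_error_deriv"
  by (rule L2_weak_deriv_primitive[OF L2I_interp_error_deriv, where c=0]) (use interp_error_eq_primitive in auto)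


text \<open>On each element \<open>v' - slope i\<close> has mean zero, so it is bounded by the variation of \<open>v'\<close>
  there, i.e. by \<open>\<integral>|v''|\<close> over the element; Cauchy-Schwarz turns this into \<open>h\<^sup>1\<^sup>/\<^sup>2 \<parallel>v''\<parallel>\<close>.\<close>

definition element_variation :: "nat \<Rightarrow> real" where
  "element_variation i = integral {xs i..xs (Suc i)} (\<lambda>y. \<bar>v'' y\<bar>)"

lemma integrable_I_abs_v'': "integrable_I (\<lambda>y. \<bar>v'' y\<bar>)" by (rule set_integrable_abs[OF L2I_imp_integrable_I[OF L2I_v'']])

lemma abs_v'_diff_le_ordered:
  assumes i: "i < N" and yz: "xs i \<le> z" "z \<le> y" "y \<le> xs (Suc i)"
  shows "\<bar>v' y - v' z\<bar> \<le> element_variation i"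
proof -
  have r: "xs i \<in> {-1..1}" "xs (Suc i) \<in> {-1..1}" using node_range i by auto
  have hi: "integrable_I v''" by (rule L2I_imp_integrable_I[OF L2I_v''])
  have "v' y - v' z = primitive v'' y - primitive v'' z" using v'_eq_primitive[of y] v'_eq_primitive[of z] r yz by simp
  also have "\<dots> = integral {z..y} v''" using primitive_split[OF hi, of z y] r yz by simp
  finally have e: "v' y - v' z = integral {z..y} v''" .
  have "norm (integral {z..y} v'') \<le> integral {z..y} (\<lambda>y. \<bar>v'' y\<bar>)"
    by (rule integral_norm_bound_integral) (use integrable_I_imp_integrable_on_subinterval[OF hi] integrable_I_imp_integrable_on_subinterval[OF integrable_I_abs_v''] r yz in auto)
  also have "\<dots> \<le> element_variation i" unfolding element_variation_def
    by (rule integral_subset_le) (use integrable_I_imp_integrable_on_subinterval[OF integrable_I_abs_v''] r yz in auto)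
  finally show ?thesis using e by simp
qed

lemma abs_v'_diff_le:
  assumes i: "i < N" and y: "y \<in> {xs i..xs (Suc i)}" and z: "z \<in> {xs i..xs (Suc i)}"
  shows "\<bar>v' y - v' z\<bar> \<le> element_variation i"
proof (cases "z \<le> y")
  case True then show ?thesis using abs_v'_diff_le_ordered[OF i] y z by auto
next
  case False
  then have "\<bar>v' z - v' y\<bar> \<le> element_variation i" using abs_v'_diff_le_ordered[OF i] y z by auto
  then show ?thesis by (simp add: abs_minus_commute)
qed

lemma abs_v'_minus_slope_le:
  assumes i: "i < N" and y: "y \<in> {xs i..xs (Suc i)}"
  shows "\<bar>v' y - slope i\<bar> \<le> element_variation i"
proof -
  let ?a = "xs i" and ?c = "xs (Suc i)"
  have h: "?a < ?c" using inc i by simp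
  have r: "?a \<in> {-1..1}" "?c \<in> {-1..1}" using node_range i by auto
  have GI: "v' integrable_on {?a..?c}" using v'_integrable_on r by auto
  have "v ?c - v ?a = primitive v' ?c - primitive v' ?a" using v_eq_primitive[of ?a] v_eq_primitive[of ?c] r by simp
  also have "\<dots> = integral {?a..?c} v'" using primitive_split[OF continuous_imp_integrable_I[OF continuous_v'], of ?a ?c] r h by simp
  finally have s: "slope i = integral {?a..?c} v' / (?c - ?a)" by (simp add: slope_def)
  have iy: "integral {?a..?c} (\<lambda>z. v' y - v' z) = (?c - ?a) * v' y - integral {?a..?c} v'"
    using Henstock_Kurzweil_Integration.integral_diff[OF integrable_const_ivl GI, of "v' y"] h by simp
  have "norm (integral {?a..?c} (\<lambda>z. v' y - v' z)) \<le> integral {?a..?c} (\<lambda>z. element_variation i)"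
  proof (rule integral_norm_bound_integral)
    show "(\<lambda>z. v' y - v' z) integrable_on {?a..?c}" by (rule integrable_diff[OF integrable_const_ivl GI])
    show "(\<lambda>z. element_variation i) integrable_on {?a..?c}" by (rule integrable_const_ivl)
    fix z assume "z \<in> {?a..?c}"
    then show "norm (v' y - v' z) \<le> element_variation i" using abs_v'_diff_le[OF i y] by simp
  qed
  also have "\<dots> = (?c - ?a) * element_variation i" using h by simp
  finally have "\<bar>(?c - ?a) * v' y - integral {?a..?c} v'\<bar> \<le> (?c - ?a) * element_variation i" using iy by simp
  then have B: "\<bar>(?c - ?a) * v' y - integral {?a..?c} v'\<bar> / (?c - ?a) \<le> element_variation i"
    using h by (simp add: divide_le_eq mult.commute)
  have eq: "v' y - slope i = ((?c - ?a) * v' y - integral {?a..?c} v') / (?c - ?a)"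
    using h by (simp add: s diff_divide_distrib)
  show ?thesis unfolding eq using B h by (simp add: abs_divide)
qed

lemma abs_interp_error_deriv_le:
  assumes i: "i < N" and y: "xs i < y" "y < xs (Suc i)"
  shows "\<bar>interp_error_deriv y\<bar> \<le> element_variation i"
  using abs_v'_minus_slope_le[OF i, of y] slope_fun_on_element[OF i, of y] y by (simp add: interp_error_deriv_def)

lemma abs_interp_error_le:
  assumes i: "i < N" and y: "xs i \<le> y" "y \<le> xs (Suc i)"
  shows "\<bar>primitive interp_error_deriv y\<bar> \<le> (xs (Suc i) - xs i) * element_variation i"
proof -
  have r: "xs i \<in> {-1..1}" "xs (Suc i) \<in> {-1..1}" using node_range i by auto
  have A0: "0 \<le> element_variation i" unfolding element_variation_def
    by (rule Henstock_Kurzweil_Integration.integral_nonneg) (use integrable_I_imp_integrable_on_subinterval[OF integrable_I_abs_v''] r in auto)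
  have "primitive interp_error_deriv y = integral {xs i..y} interp_error_deriv"
    using primitive_split[OF integrable_I_interp_error_deriv, of "xs i" y] primitive_interp_error_deriv_node[of i] r y i by simp
  also have "\<dots> = integral {xs i..y} (\<lambda>z. v' z - slope i)" by (rule primitive_interp_error_deriv_element(2)[OF i y])
  finally have e: "primitive interp_error_deriv y = integral {xs i..y} (\<lambda>z. v' z - slope i)" .
  have "norm (integral {xs i..y} (\<lambda>z. v' z - slope i)) \<le> integral {xs i..y} (\<lambda>z. element_variation i)"
  proof (rule integral_norm_bound_integral)
    show "(\<lambda>z. v' z - slope i) integrable_on {xs i..y}" using v'_integrable_on r y by (intro integrable_diff) auto
    show "(\<lambda>z. element_variation i) integrable_on {xs i..y}" by (rule integrable_const_ivl)
    fix z assume "z \<in> {xs i..y}"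
    then show "norm (v' z - slope i) \<le> element_variation i" using abs_v'_minus_slope_le[OF i, of z] y by auto
  qed
  also have "\<dots> = (y - xs i) * element_variation i" using y by simp
  also have "\<dots> \<le> (xs (Suc i) - xs i) * element_variation i" using y A0 by (intro mult_right_mono) auto
  finally show ?thesis using e by simp
qed


lemma square_integrable_on_element: "L2I F \<Longrightarrow> i < N \<Longrightarrow> (\<lambda>y. (F y)^2) integrable_on {xs i..xs (Suc i)}"
  using integrable_I_imp_integrable_on_subinterval[OF L2I_imp_integrable_I_square, of F "xs i" "xs (Suc i)"] node_range[of i] node_range[of "Suc i"] by auto

lemma integral_v''_square_element_nonneg: "i < N \<Longrightarrow> 0 \<le> integral {xs i..xs (Suc i)} (\<lambda>y. (v'' y)^2)"
  by (rule Henstock_Kurzweil_Integration.integral_nonneg[OF square_integrable_on_element[OF L2I_v'']]) auto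

lemma element_variation_square_le: "i < N \<Longrightarrow> (element_variation i)^2 \<le> (xs (Suc i) - xs i) * integral {xs i..xs (Suc i)} (\<lambda>y. (v'' y)^2)"
  unfolding element_variation_def
  by (rule Cauchy_Schwarz_subinterval[OF L2I_v'']) (use node_range[of i] node_range[of "Suc i"] inc[of i] in auto)

lemma integral_interp_error_deriv_square_le:
  assumes i: "i < N"
  shows "integral {xs i..xs (Suc i)} (\<lambda>y. (interp_error_deriv y)^2) \<le> (xs (Suc i) - xs i)^2 * integral {xs i..xs (Suc i)} (\<lambda>y. (v'' y)^2)"
proof -
  let ?a = "xs i" and ?c = "xs (Suc i)"
  have h: "?a < ?c" using inc i by simp
  have gi: "(\<lambda>y. (interp_error_deriv y)^2) integrable_on {?a..?c}" by (rule square_integrable_on_element[OF L2I_interp_error_deriv i])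
  have "integral {?a..?c} (\<lambda>y. (interp_error_deriv y)^2) = integral {?a<..<?c} (\<lambda>y. (interp_error_deriv y)^2)"
    by (rule integral_open_interval_real)
  also have "\<dots> \<le> integral {?a<..<?c} (\<lambda>y. (element_variation i)^2)"
  proof (rule integral_le)
    show "(\<lambda>y. (interp_error_deriv y)^2) integrable_on {?a<..<?c}" using gi integrable_on_open_interval_real by blast
    show "(\<lambda>y. (element_variation i)^2) integrable_on {?a<..<?c}" using integrable_on_open_interval_real integrable_const_ivl by blast
    fix y assume "y \<in> {?a<..<?c}"
    then have "\<bar>interp_error_deriv y\<bar> \<le> element_variation i" using abs_interp_error_deriv_le[OF i] by auto
    then have "\<bar>interp_error_deriv y\<bar>^2 \<le> (element_variation i)^2" by (rule power_mono) simp
    then show "(interp_error_deriv y)^2 \<le> (element_variation i)^2" by simp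
  qed
  also have "\<dots> = (?c - ?a) * (element_variation i)^2"
    using integral_open_interval_real[of ?a ?c "\<lambda>y. (element_variation i)^2"] h by simp
  also have "\<dots> \<le> (?c - ?a) * ((?c - ?a) * integral {?a..?c} (\<lambda>y. (v'' y)^2))"
    using element_variation_square_le[OF i] h by (intro mult_left_mono) auto
  finally show ?thesis by (simp add: power2_eq_square mult.assoc)
qed

lemma continuous_on_primitive_interp_error_deriv: "continuous_on {-1..1} (primitive interp_error_deriv)" by (rule continuous_on_primitive[OF integrable_I_interp_error_deriv])

lemma integral_interp_error_square_le:
  assumes i: "i < N"
  shows "integral {xs i..xs (Suc i)} (\<lambda>y. (primitive interp_error_deriv y)^2) \<le> (xs (Suc i) - xs i)^4 * integral {xs i..xs (Suc i)} (\<lambda>y. (v'' y)^2)"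
proof -
  let ?a = "xs i" and ?c = "xs (Suc i)"
  have h: "?a < ?c" using inc i by simp
  have gi: "(\<lambda>y. (primitive interp_error_deriv y)^2) integrable_on {?a..?c}"
    by (rule integrable_continuous_interval, rule continuous_on_subset[of "{-1..1}"])
       (use continuous_on_primitive_interp_error_deriv element_subset[OF i] in \<open>auto intro!: continuous_intros\<close>)
  have "integral {?a..?c} (\<lambda>y. (primitive interp_error_deriv y)^2) \<le> integral {?a..?c} (\<lambda>y. ((?c - ?a) * element_variation i)^2)"
  proof (rule integral_le[OF gi integrable_const_ivl])
    fix y assume "y \<in> {?a..?c}"
    then have "\<bar>primitive interp_error_deriv y\<bar> \<le> (?c - ?a) * element_variation i" using abs_interp_error_le[OF i] by auto
    then have "\<bar>primitive interp_error_deriv y\<bar>^2 \<le> ((?c - ?a) * element_variation i)^2" by (rule power_mono) simp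
    then show "(primitive interp_error_deriv y)^2 \<le> ((?c - ?a) * element_variation i)^2" by simp
  qed
  also have "\<dots> = (?c - ?a)^3 * (element_variation i)^2" using h by (simp add: power2_eq_square power3_eq_cube)
  also have "\<dots> \<le> (?c - ?a)^3 * ((?c - ?a) * integral {?a..?c} (\<lambda>y. (v'' y)^2))"
    using element_variation_square_le[OF i] h by (intro mult_left_mono) auto
  finally show ?thesis by (simp add: power_numeral_reduce mult.assoc)
qed

lemma integral_eq_sum_elements:
  fixes F :: "real \<Rightarrow> real"
  assumes F: "F integrable_on {-1..1}"
  shows "n \<le> N \<Longrightarrow> integral {xs 0..xs n} F = (\<Sum>i<n. integral {xs i..xs (Suc i)} F)"
proof (induction n)
  case 0 then show ?case by simp
next
  case (Suc n)
  have r: "xs 0 \<in> {-1..1}" "xs n \<in> {-1..1}" "xs (Suc n) \<in> {-1..1}" using node_range Suc.prems by auto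
  have m: "xs 0 \<le> xs n" "xs n \<le> xs (Suc n)" using node_mono[of 0 n] node_mono[of n "Suc n"] Suc.prems by auto
  have Fi: "F integrable_on {xs 0..xs (Suc n)}" by (rule integrable_on_subinterval[OF F]) (use r in auto)
  have "integral {xs 0..xs (Suc n)} F = integral {xs 0..xs n} F + integral {xs n..xs (Suc n)} F"
    using Henstock_Kurzweil_Integration.integral_combine[where a="xs 0" and c="xs n" and b="xs (Suc n)" and f=F] m Fi by simp
  then show ?case using Suc by simp
qed

lemma integral_le_of_element_bounds:
  assumes F: "F integrable_on {-1..1}" and mesh: "\<And>i. i < N \<Longrightarrow> xs (Suc i) - xs i \<le> H"
    and element: "\<And>i. i < N \<Longrightarrow>
      integral {xs i..xs (Suc i)} F \<le> (xs (Suc i) - xs i)^k * integral {xs i..xs (Suc i)} (\<lambda>y. (v'' y)\<^sup>2)"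
  shows "integral {-1..1} F \<le> H^k * integral {-1..1} (\<lambda>y. (v'' y)\<^sup>2)"
proof -
  have v'': "(\<lambda>y. (v'' y)\<^sup>2) integrable_on {-1..1}"
    by (rule integrable_I_imp_integrable_on[OF L2I_imp_integrable_I_square[OF L2I_v'']])
  have "integral {-1..1} F = (\<Sum>i<N. integral {xs i..xs (Suc i)} F)"
    using integral_eq_sum_elements[OF F, of N] x0 xN by simp
  also have "\<dots> \<le> (\<Sum>i<N. H^k * integral {xs i..xs (Suc i)} (\<lambda>y. (v'' y)\<^sup>2))"
  proof (rule sum_mono)
    fix i assume "i \<in> {..<N}"
    then have i: "i < N" by simp
    then have "(xs (Suc i) - xs i)^k \<le> H^k"
      using mesh inc[OF i] by (intro power_mono) auto
    then have "(xs (Suc i) - xs i)^k * integral {xs i..xs (Suc i)} (\<lambda>y. (v'' y)\<^sup>2)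
        \<le> H^k * integral {xs i..xs (Suc i)} (\<lambda>y. (v'' y)\<^sup>2)"
      using integral_v''_square_element_nonneg[OF i] by (rule mult_right_mono)
    with element[OF i] show "integral {xs i..xs (Suc i)} F \<le> H^k * integral {xs i..xs (Suc i)} (\<lambda>y. (v'' y)\<^sup>2)"
      by linarith
  qed
  also have "\<dots> = H^k * integral {-1..1} (\<lambda>y. (v'' y)\<^sup>2)"
    using integral_eq_sum_elements[OF v'', of N] x0 xN by (simp add: sum_distrib_left)
  finally show ?thesis .
qed

lemma interp_error_global_bounds:
  assumes mesh: "\<And>i. i < N \<Longrightarrow> xs (Suc i) - xs i \<le> H"
  shows "integral {-1..1} (\<lambda>y. (interp_error_deriv y)\<^sup>2) \<le> H\<^sup>2 * integral {-1..1} (\<lambda>y. (v'' y)\<^sup>2)"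
    and "integral {-1..1} (\<lambda>y. (primitive interp_error_deriv y)\<^sup>2) \<le> H^4 * integral {-1..1} (\<lambda>y. (v'' y)\<^sup>2)"
proof -
  have "(\<lambda>y. (interp_error_deriv y)\<^sup>2) integrable_on {-1..1}"
    by (rule integrable_I_imp_integrable_on[OF L2I_imp_integrable_I_square[OF L2I_interp_error_deriv]])
  then show "integral {-1..1} (\<lambda>y. (interp_error_deriv y)\<^sup>2) \<le> H\<^sup>2 * integral {-1..1} (\<lambda>y. (v'' y)\<^sup>2)"
    by (rule integral_le_of_element_bounds[OF _ mesh integral_interp_error_deriv_square_le])
  have "(\<lambda>y. (primitive interp_error_deriv y)\<^sup>2) integrable_on {-1..1}"
    using continuous_on_primitive_interp_error_deriv by (intro integrable_continuous_interval continuous_intros)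
  then show "integral {-1..1} (\<lambda>y. (primitive interp_error_deriv y)\<^sup>2) \<le> H^4 * integral {-1..1} (\<lambda>y. (v'' y)\<^sup>2)"
    by (rule integral_le_of_element_bounds[OF _ mesh integral_interp_error_square_le])
qed


lemma interpolation_error_bounds:
  assumes mesh: "\<And>i. i < N \<Longrightarrow> xs (Suc i) - xs i \<le> H"
  shows "\<exists>g. L2_weak_deriv (\<lambda>x. v x - pl_interp N xs v x) g
    \<and> (L2norm g)\<^sup>2 \<le> H\<^sup>2 * (L2norm v'')\<^sup>2
    \<and> (L2norm (\<lambda>x. v x - pl_interp N xs v x))\<^sup>2 \<le> H^4 * (L2norm v'')\<^sup>2"
proof (intro exI conjI)
  show "L2_weak_deriv (\<lambda>x. v x - pl_interp N xs v x) interp_error_deriv"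
    by (rule L2_weak_deriv_interp_error)
  have LINT_eq_integral: "(LINT x:Iopen|lborel. (F x)\<^sup>2) = integral {-1..1} (\<lambda>y. (F y)\<^sup>2)"
    if "integrable_I (\<lambda>x. (F x)\<^sup>2)" for F
    using LINT_I_eq_primitive[OF that] by (simp add: primitive_def)
  have "(L2norm (\<lambda>x. v x - pl_interp N xs v x))\<^sup>2 = (LINT x:Iopen|lborel. (primitive interp_error_deriv x)\<^sup>2)"
    unfolding L2norm_square using interp_error_eq_primitive by (intro LINT_I_cong) auto
  also have "\<dots> = integral {-1..1} (\<lambda>y. (primitive interp_error_deriv y)\<^sup>2)"
    using continuous_on_primitive_interp_error_deriv
    by (intro LINT_eq_integral continuous_imp_integrable_I continuous_intros)
  finally have "(L2norm (\<lambda>x. v x - pl_interp N xs v x))\<^sup>2 = integral {-1..1} (\<lambda>y. (primitive interp_error_deriv y)\<^sup>2)" .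
  moreover have "(L2norm v'')\<^sup>2 = integral {-1..1} (\<lambda>y. (v'' y)\<^sup>2)"
    "(L2norm interp_error_deriv)\<^sup>2 = integral {-1..1} (\<lambda>y. (interp_error_deriv y)\<^sup>2)"
    unfolding L2norm_square using L2I_v'' L2I_interp_error_deriv
    by (simp_all add: LINT_eq_integral L2I_imp_integrable_I_square)
  ultimately show "(L2norm interp_error_deriv)\<^sup>2 \<le> H\<^sup>2 * (L2norm v'')\<^sup>2"
    "(L2norm (\<lambda>x. v x - pl_interp N xs v x))\<^sup>2 \<le> H^4 * (L2norm v'')\<^sup>2"
    using interp_error_global_bounds[OF mesh] by simp_all
qed

end


lemma enorm_le_L2norms:
  assumes w: "L2I w" and g: "L2I g" and cb: "continuous_on {-1..1} b"
    and b: "\<And>x. x \<in> {-1..1} \<Longrightarrow> 0 \<le> b x \<and> b x \<le> ub"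
  shows "enorm \<epsilon> b w g \<le> sqrt (\<epsilon>\<^sup>2 * (L2norm g)\<^sup>2 + ub * (L2norm w)\<^sup>2)"
proof -
  have squares: "integrable_I (\<lambda>x. (g x)\<^sup>2)" "integrable_I (\<lambda>x. (w x)\<^sup>2)"
    using w g by (simp_all add: L2I_imp_integrable_I_square)
  have "(LINT x:Iopen|lborel. \<epsilon>\<^sup>2 * (g x)\<^sup>2 + b x * (w x)\<^sup>2)
      \<le> (LINT x:Iopen|lborel. \<epsilon>\<^sup>2 * (g x)\<^sup>2 + ub * (w x)\<^sup>2)"
  proof (rule set_integral_mono)
    show "integrable_I (\<lambda>x. \<epsilon>\<^sup>2 * (g x)\<^sup>2 + b x * (w x)\<^sup>2)"
      using squares integrable_I_mult_continuous[OF squares(2) cb]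
      by (intro set_integral_add(1) set_integrable_mult_right) auto
    show "integrable_I (\<lambda>x. \<epsilon>\<^sup>2 * (g x)\<^sup>2 + ub * (w x)\<^sup>2)"
      using squares by (intro set_integral_add(1) set_integrable_mult_right)
    show "\<epsilon>\<^sup>2 * (g x)\<^sup>2 + b x * (w x)\<^sup>2 \<le> \<epsilon>\<^sup>2 * (g x)\<^sup>2 + ub * (w x)\<^sup>2" if "x \<in> Iopen" for x
      using b[of x] that by (auto intro: mult_right_mono)
  qed
  also have "\<dots> = \<epsilon>\<^sup>2 * (L2norm g)\<^sup>2 + ub * (L2norm w)\<^sup>2"
    using squares by (simp add: L2norm_square set_integral_add set_integrable_mult_right)
  finally show ?thesis
    unfolding enorm_def by (rule real_sqrt_le_mono)
qed

text \<open>Here \<open>A\<close> and \<open>B\<close> are the squared \<open>L\<^sup>2\<close> norms of the derivative of an interpolation error and of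
  the error itself, on a mesh of size at most \<open>2\<kappa>/N\<close>.\<close>

lemma interpolation_energy_arith:
  fixes \<epsilon> \<kappa> ub M A B :: real and N :: nat
  assumes \<epsilon>: "0 < \<epsilon>" "\<epsilon> \<le> 1" and N: "1 \<le> N" and ub: "0 \<le> ub" and M: "0 \<le> M"
    and A: "A \<le> (2 * \<kappa> / N)\<^sup>2 * M" and B: "B \<le> (2 * \<kappa> / N)^4 * M"
  shows "sqrt (\<epsilon>\<^sup>2 * A + ub * B) \<le> sqrt ((4 * \<kappa>\<^sup>2 + 16 * ub * \<kappa>^4) * M) / N"
    and "N \<le> 1 / \<epsilon> \<Longrightarrow> sqrt (\<epsilon>\<^sup>2 * A + ub * B) \<le> sqrt ((4 * \<kappa>\<^sup>2 + 16 * ub * \<kappa>^4) * M) / (real N)\<^sup>2"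
proof -
  define K where "K = 4 * \<kappa>\<^sup>2 + 16 * ub * \<kappa>^4"
  define X where "X = 4 * \<kappa>\<^sup>2 * M / (real N)\<^sup>2"
  have n: "1 \<le> real N" using N by simp
  have X: "0 \<le> X" using M by (simp add: X_def)
  have A': "\<epsilon>\<^sup>2 * A \<le> \<epsilon>\<^sup>2 * X"
    using A by (intro mult_left_mono) (simp_all add: X_def power_divide power_mult_distrib)
  have B': "ub * B \<le> 16 * ub * \<kappa>^4 * M / (real N)^4"
    using mult_left_mono[OF B ub] by (simp add: power_divide power_mult_distrib mult_ac)
  have sqrt_div: "sqrt (K * M / y\<^sup>2) = sqrt (K * M) / y" if "0 < y" for y :: real
    using that by (simp add: real_sqrt_divide)
  have "real N ^ 2 \<le> real N ^ 4"
    using n by (intro power_increasing) auto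
  then have "16 * ub * \<kappa>^4 * M / (real N)^4 \<le> 16 * ub * \<kappa>^4 * M / (real N)\<^sup>2"
    using n ub M by (intro divide_left_mono) auto
  moreover have "\<epsilon>\<^sup>2 * X \<le> X"
    using \<epsilon> X by (intro mult_left_le_one_le) (auto simp: power_le_one)
  ultimately have "\<epsilon>\<^sup>2 * A + ub * B \<le> K * M / (real N)\<^sup>2"
    using A' B' by (simp add: K_def X_def add_divide_distrib distrib_right)
  then have "sqrt (\<epsilon>\<^sup>2 * A + ub * B) \<le> sqrt (K * M / (real N)\<^sup>2)"
    by (rule real_sqrt_le_mono)
  also have "\<dots> = sqrt (K * M) / N"
    using n by (intro sqrt_div) auto
  finally show "sqrt (\<epsilon>\<^sup>2 * A + ub * B) \<le> sqrt ((4 * \<kappa>\<^sup>2 + 16 * ub * \<kappa>^4) * M) / N"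
    unfolding K_def .
  assume "N \<le> 1 / \<epsilon>"
  then have "\<epsilon> * N \<le> 1"
    using \<epsilon> by (simp add: field_simps)
  then have "\<epsilon>\<^sup>2 * (real N)\<^sup>2 \<le> 1"
    using \<epsilon> by (simp add: power_le_one flip: power_mult_distrib)
  moreover have "X = (real N)\<^sup>2 * (4 * \<kappa>\<^sup>2 * M / (real N)^4)"
    using n by (simp add: X_def power4_eq_xxxx power2_eq_square field_simps)
  ultimately have "\<epsilon>\<^sup>2 * X \<le> 4 * \<kappa>\<^sup>2 * M / (real N)^4"
    using M mult_right_mono[of "\<epsilon>\<^sup>2 * (real N)\<^sup>2" 1 "4 * \<kappa>\<^sup>2 * M / (real N)^4"]
    by (simp add: mult.assoc)
  then have "\<epsilon>\<^sup>2 * A + ub * B \<le> K * M / ((real N)\<^sup>2)\<^sup>2"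
    using A' B' by (simp add: K_def add_divide_distrib distrib_right flip: power_mult)
  then have "sqrt (\<epsilon>\<^sup>2 * A + ub * B) \<le> sqrt (K * M / ((real N)\<^sup>2)\<^sup>2)"
    by (rule real_sqrt_le_mono)
  also have "\<dots> = sqrt (K * M) / (real N)\<^sup>2"
    using n by (intro sqrt_div) auto
  finally show "sqrt (\<epsilon>\<^sup>2 * A + ub * B) \<le> sqrt ((4 * \<kappa>\<^sup>2 + 16 * ub * \<kappa>^4) * M) / (real N)\<^sup>2"
    unfolding K_def .
qed

section \<open>Uniform bounds for the remainder and its interpolant\<close>

context
  fixes b f u0' u0'' :: "real \<Rightarrow> real" and lb ub :: real
  assumes continuous_b: "continuous_on {-1..1} b" and continuous_f: "continuous_on {-1..1} f"
    and lb: "0 < lb" and b_bounds: "\<forall>x\<in>{-1..1}. lb \<le> b x \<and> b x \<le> ub"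
    and continuous_u0': "continuous_on {-1..1} u0'"
    and u0': "L2_weak_deriv (\<lambda>x. f x / b x) u0'" and u0'': "L2_weak_deriv u0' u0''"
begin

definition deriv2_bound :: real where
  "deriv2_bound = (2 * ub\<^sup>2 / lb\<^sup>2 + 2) * (L2norm u0'')\<^sup>2"

lemma remainder_bounds:
  assumes \<epsilon>: "0 < \<epsilon>" and data: "problem_data \<epsilon> b f u uBLm uBLp"
  obtains gR hR where "L2_weak_deriv (remainder b f u uBLm uBLp) gR" "L2_weak_deriv gR hR"
    "H10 (remainder b f u uBLm uBLp)" "continuous_on {-1..1} (remainder b f u uBLm uBLp)"
    "L2norm (remainder b f u uBLm uBLp) \<le> enorm \<epsilon> b (remainder b f u uBLm uBLp) gR / sqrt lb"
    "enorm \<epsilon> b (remainder b f u uBLm uBLp) gR \<le> \<epsilon>\<^sup>2 * L2norm u0'' / sqrt lb"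
    "(L2norm hR)\<^sup>2 \<le> deriv2_bound"
proof -
  obtain u' uBLm' uBLp' where
    derivs: "L2_weak_deriv u u'" "L2_weak_deriv uBLm uBLm'" "L2_weak_deriv uBLp uBLp'"
    using data unfolding problem_data_def H10_def H1_def by blast
  note setting = continuous_b continuous_f lb b_bounds continuous_u0' u0' u0'' \<epsilon> data derivs
  show ?thesis
    using L2_weak_deriv_remainder[OF setting] L2_weak_deriv_remainder_deriv[OF setting]
      H10_remainder[OF setting] continuous_on_remainder[OF setting]
      L2norm_remainder_le_enorm[OF setting] enorm_remainder_le[OF setting]
      L2norm_remainder_deriv2_le[OF setting]
    by (rule that[unfolded deriv2_bound_def])
qed

lemma remainder_estimates:
  defines "C \<equiv> L2norm u0'' / sqrt lb + L2norm u0'' / lb + sqrt deriv2_bound"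
  assumes \<epsilon>: "0 < \<epsilon>" "\<epsilon> \<le> 1" and data: "problem_data \<epsilon> b f u uBLm uBLp"
  shows "H2 (remainder b f u uBLm uBLp) \<and> H10 (remainder b f u uBLm uBLp)
    \<and> L2norm (remainder b f u uBLm uBLp) \<le> C * \<epsilon>\<^sup>2
    \<and> (\<exists>g. L2_weak_deriv (remainder b f u uBLm uBLp) g
        \<and> L2norm (remainder b f u uBLm uBLp) \<le> enorm \<epsilon> b (remainder b f u uBLm uBLp) g / sqrt lb
        \<and> enorm \<epsilon> b (remainder b f u uBLm uBLp) g \<le> C * \<epsilon>\<^sup>2
        \<and> (\<exists>h. L2_weak_deriv g h \<and> L2norm h \<le> C))"
proof -
  let ?uR = "remainder b f u uBLm uBLp"
  obtain gR hR where wR: "L2_weak_deriv ?uR gR" and wR2: "L2_weak_deriv gR hR" and "H10 ?uR"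
    and L2_le: "L2norm ?uR \<le> enorm \<epsilon> b ?uR gR / sqrt lb"
    and enorm_le: "enorm \<epsilon> b ?uR gR \<le> \<epsilon>\<^sup>2 * L2norm u0'' / sqrt lb"
    and hR: "(L2norm hR)\<^sup>2 \<le> deriv2_bound"
    using remainder_bounds[OF \<epsilon>(1) data] by metis
  have terms: "0 \<le> L2norm u0'' / sqrt lb" "0 \<le> L2norm u0'' / lb" "0 \<le> sqrt deriv2_bound"
    using lb hR order_trans[OF zero_le_power2 hR] by (simp_all add: L2norm_nonneg)
  have "enorm \<epsilon> b ?uR gR \<le> C * \<epsilon>\<^sup>2"
    using enorm_le mult_left_mono[of "L2norm u0'' / sqrt lb" C "\<epsilon>\<^sup>2"] terms
    unfolding C_def by (simp add: mult.commute)
  moreover have "L2norm ?uR \<le> C * \<epsilon>\<^sup>2"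
  proof -
    have "L2norm ?uR \<le> \<epsilon>\<^sup>2 * L2norm u0'' / lb"
      using L2_le divide_right_mono[OF enorm_le, of "sqrt lb"] lb by (simp add: divide_divide_eq_left)
    also have "\<dots> \<le> C * \<epsilon>\<^sup>2"
      using mult_left_mono[of "L2norm u0'' / lb" C "\<epsilon>\<^sup>2"] terms unfolding C_def by (simp add: mult.commute)
    finally show ?thesis .
  qed
  moreover have "L2norm hR \<le> C"
    using real_sqrt_le_mono[OF hR] terms unfolding C_def by (simp add: L2norm_nonneg)
  moreover have "H2 ?uR"
    unfolding H2_def H1_def using wR wR2 by blast
  ultimately show ?thesis
    using \<open>H10 ?uR\<close> wR L2_le wR2 by blast
qed

lemma remainder_interpolation_estimates:
  fixes \<kappa> :: real
  defines "C \<equiv> sqrt ((4 * \<kappa>\<^sup>2 + 16 * ub * \<kappa>^4) * deriv2_bound)"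
  assumes \<epsilon>: "0 < \<epsilon>" "\<epsilon> \<le> 1" and data: "problem_data \<epsilon> b f u uBLm uBLp"
    and partition: "quasi_uniform \<kappa> N xs"
  shows "\<exists>g. L2_weak_deriv (\<lambda>x. remainder b f u uBLm uBLp x - pl_interp N xs (remainder b f u uBLm uBLp) x) g
    \<and> enorm \<epsilon> b (\<lambda>x. remainder b f u uBLm uBLp x - pl_interp N xs (remainder b f u uBLm uBLp) x) g \<le> C / real N
    \<and> (real N \<le> 1 / \<epsilon> \<longrightarrow>
        enorm \<epsilon> b (\<lambda>x. remainder b f u uBLm uBLp x - pl_interp N xs (remainder b f u uBLm uBLp) x) g \<le> C / (real N)\<^sup>2)"
proof -
  let ?uR = "remainder b f u uBLm uBLp"
  let ?w = "\<lambda>x. ?uR x - pl_interp N xs ?uR x"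
  obtain gR hR where cR: "continuous_on {-1..1} ?uR" and wR: "L2_weak_deriv ?uR gR"
    and wR2: "L2_weak_deriv gR hR" and hR: "(L2norm hR)\<^sup>2 \<le> deriv2_bound"
    using remainder_bounds[OF \<epsilon>(1) data] by metis
  obtain G where cG: "continuous_on {-1..1} G" and G: "\<And>x. x \<in> {-1..1} \<Longrightarrow> G x = G (-1) + primitive hR x"
    and wG: "L2_weak_deriv ?uR G"
    using L2_weak_deriv2_continuous_deriv[OF cR wR wR2] by metis
  note nodes = quasi_uniformD[OF partition]
  obtain g where wg: "L2_weak_deriv ?w g"
    and g: "(L2norm g)\<^sup>2 \<le> (2 * \<kappa> / N)\<^sup>2 * (L2norm hR)\<^sup>2"
    and w: "(L2norm ?w)\<^sup>2 \<le> (2 * \<kappa> / N)^4 * (L2norm hR)\<^sup>2"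
    using interpolation_error_bounds[OF nodes(4,2,3,1) cG _ G L2_weak_deriv_continuous_primitive[OF cR wG]
        quasi_uniform_mesh_le[OF partition]] wR2
    by (auto simp: L2_weak_deriv_def)
  have enorm_le: "enorm \<epsilon> b ?w g \<le> sqrt (\<epsilon>\<^sup>2 * (L2norm g)\<^sup>2 + ub * (L2norm ?w)\<^sup>2)"
  proof (rule enorm_le_L2norms[OF _ _ continuous_b])
    show "L2I ?w" "L2I g" using wg by (simp_all add: L2_weak_deriv_def)
    show "0 \<le> b x \<and> b x \<le> ub" if "x \<in> {-1..1}" for x
      using b_bounds[rule_format, OF that] lb by auto
  qed
  have ub: "0 \<le> ub" using b_bounds[rule_format, of 0] lb by simp
  have M: "0 \<le> deriv2_bound" using order_trans[OF zero_le_power2 hR] .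
  have "0 \<le> (2 * \<kappa> / N)^4" by simp
  then have "(L2norm g)\<^sup>2 \<le> (2 * \<kappa> / N)\<^sup>2 * deriv2_bound"
    and "(L2norm ?w)\<^sup>2 \<le> (2 * \<kappa> / N)^4 * deriv2_bound"
    using order_trans[OF g mult_left_mono[OF hR zero_le_power2]] order_trans[OF w mult_left_mono[OF hR]]
    by simp_all
  note arith = interpolation_energy_arith[OF \<epsilon> nodes(1) ub M this, folded C_def]
  show ?thesis
    using wg order_trans[OF enorm_le arith(1)] order_trans[OF enorm_le arith(2)] by blast
qed

end

theorem mainTheorem5:
  fixes b f :: "real \<Rightarrow> real" and lb ub :: real
  assumes "H2 b" and "H2 f"
    and "continuous_on {-1..1} b" and "continuous_on {-1..1} f"
    and "0 < lb" and "\<forall>x\<in>{-1..1}. lb \<le> b x \<and> b x \<le> ub"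
  shows
   "(\<exists>C. \<forall>\<epsilon> u uBLm uBLp. 0 < \<epsilon> \<and> \<epsilon> \<le> 1 \<and> problem_data \<epsilon> b f u uBLm uBLp \<longrightarrow>
       (let uR = remainder b f u uBLm uBLp in
         H2 uR \<and> H10 uR \<and> L2norm uR \<le> C * \<epsilon>^2 \<and>
         (\<exists>g. L2_weak_deriv uR g \<and> L2norm uR \<le> enorm \<epsilon> b uR g / sqrt lb \<and>
              enorm \<epsilon> b uR g \<le> C * \<epsilon>^2 \<and>
              (\<exists>h. L2_weak_deriv g h \<and> L2norm h \<le> C)))) \<and>
    (\<forall>\<kappa>\<ge>1. \<exists>C. \<forall>\<epsilon> u uBLm uBLp N xs.
       0 < \<epsilon> \<and> \<epsilon> \<le> 1 \<and> problem_data \<epsilon> b f u uBLm uBLp \<and> quasi_uniform \<kappa> N xs \<longrightarrow>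
       (let uR = remainder b f u uBLm uBLp;
            w = (\<lambda>x. uR x - pl_interp N xs uR x) in
         \<exists>g. L2_weak_deriv w g \<and> enorm \<epsilon> b w g \<le> C / real N \<and>
             (real N \<le> 1 / \<epsilon> \<longrightarrow> enorm \<epsilon> b w g \<le> C / (real N)^2)))"
proof -
  have "\<And>x. x \<in> {-1..1} \<Longrightarrow> 0 < b x"
    using assms(5,6) by force
  then obtain u0' u0'' where u0: "continuous_on {-1..1} u0'"
    "L2_weak_deriv (\<lambda>x. f x / b x) u0'" "L2_weak_deriv u0' u0''"
    using H2_divide[OF assms(2,1,4,3)] by blast
  note setting = assms(3-6) u0
  show ?thesis
    unfolding Let_def
    using remainder_estimates[OF setting] remainder_interpolation_estimates[OF setting]
    by blast
qed

end
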